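(* Let $\mathcal G$ be a braided stability groupoid, $R$ a commutative ring, $N\in\mathbb N$, $k,a\in\mathbb N$, and assume H3($N$): $\widetilde H_i(R\mathrm{Hom}(0,-))_n=0$ for all $-1\le i<N$ and all $n>k\cdot i+a$. Then for every $m\in\mathbb N$, $\widetilde H_i(R\mathrm{Hom}(m,-))_n=0$ for all $-1\le i<N$ and all $n>k\cdot i+a+m$.
   Context: Stability groupoid: monoidal groupoid $(\mathcal G,\oplus,0)$ with objects $(\mathbb N,+,0)$, $G_n=\mathrm{Aut}(n)$, $\oplus\colon G_m\times G_n\to G_{m+n}$ injective, $G_0$ trivial, $(G_{l+m}\times1)\cap(1\times G_{m+n})=1\times G_m\times1$ in $G_{l+m+n}$; braided: with braiding $b_{m,n}\in G_{m+n}$ of the monoidal groupoid. $U\mathcal G$: objects $\mathbb N$, $\mathrm{Hom}(m,n)=G_n/G_{n-m}$ for $m\le n$ ($G_{n-m}\subset G_n$ via $g\mapsto g\oplus\mathrm{id}_m$), empty otherwise, composition $fG_l\circ gG_m=f(\mathrm{id}_l\oplus g)G_{l+m}$, monoidal via $f_1G_{m_1}\oplus f_2G_{m_2}=(f_1\oplus f_2)(\mathrm{id}_{m_1}\oplus b^{-1}_{n_1,m_2}\oplus\mathrm{id}_{n_2})G_{m_1+m_2}$; $0$ initial, $\iota_n\colon0\to n$. For a functor $V\colon U\mathcal G\to R\text{-Mod}$ with $V_n=V(n)$, $\widetilde H_i(V)_n$ ($i\ge-1$) is the homology of $\widetilde C_p(V)_n=RG_n\otimes_{RG_{n-p-1}}V_{n-p-1}$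 ($p\ge-1$, zero for $n<p+1$, $G_{n-p-1}\subset G_n$ via $g\mapsto g\oplus\mathrm{id}_{p+1}$) with differential $\sum_{i=0}^p(-1)^id_i$, $d_i(g\otimes v)=g(\mathrm{id}_{n-p-1}\oplus b_{1,i}\oplus\mathrm{id}_{p-i})\otimes V(\mathrm{id}_{n-p-1}\oplus\iota_1)(v)$. $R\mathrm{Hom}(m,-)$ is the linearized representable functor. *)

theory Defs
  imports "HOL-Algebra.Group" "HOL-Algebra.Coset"
begin

text \<open>A (strict) monoidal groupoid with objects (nat,+,0): G n is the automorphism group
  of the object n, opl m n is the monoidal product G m x G n -> G (m+n), and b m n in G (m+n)
  is the braiding.\<close>

locale braided_stability_groupoid =
  fixes G :: "nat \<Rightarrow> 'g monoid"
    and opl :: "nat \<Rightarrow> nat \<Rightarrow> 'g \<Rightarrow> 'g \<Rightarrow> 'g"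
    and b :: "nat \<Rightarrow> nat \<Rightarrow> 'g"
  assumes grp: "\<And>n. group (G n)"
    and opl_closed: "\<And>m n g h. g \<in> carrier (G m) \<Longrightarrow> h \<in> carrier (G n) \<Longrightarrow>
          opl m n g h \<in> carrier (G (m + n))"
    and opl_mult: "\<And>m n g g' h h'. g \<in> carrier (G m) \<Longrightarrow> g' \<in> carrier (G m) \<Longrightarrow>
          h \<in> carrier (G n) \<Longrightarrow> h' \<in> carrier (G n) \<Longrightarrow>
          opl m n (g \<otimes>\<^bsub>G m\<^esub> g') (h \<otimes>\<^bsub>G n\<^esub> h')
            = opl m n g h \<otimes>\<^bsub>G (m + n)\<^esub> opl m n g' h'"
    and opl_inj: "\<And>m n g h g' h'. g \<in> carrier (G m) \<Longrightarrow> g' \<in> carrier (G m) \<Longrightarrow>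
          h \<in> carrier (G n) \<Longrightarrow> h' \<in> carrier (G n) \<Longrightarrow>
          opl m n g h = opl m n g' h' \<Longrightarrow> g = g' \<and> h = h'"
    and G0_trivial: "carrier (G 0) = {\<one>\<^bsub>G 0\<^esub>}"
    and unit_left: "\<And>n h. h \<in> carrier (G n) \<Longrightarrow> opl 0 n \<one>\<^bsub>G 0\<^esub> h = h"
    and unit_right: "\<And>n g. g \<in> carrier (G n) \<Longrightarrow> opl n 0 g \<one>\<^bsub>G 0\<^esub> = g"
    and opl_assoc: "\<And>l m n f g h. f \<in> carrier (G l) \<Longrightarrow> g \<in> carrier (G m) \<Longrightarrow>
          h \<in> carrier (G n) \<Longrightarrow>
          opl (l + m) n (opl l m f g) h = opl l (m + n) f (opl m n g h)"
    and intersection: "\<And>l m n.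
          (\<lambda>g. opl (l + m) n g \<one>\<^bsub>G n\<^esub>) ` carrier (G (l + m))
          \<inter> (\<lambda>h. opl l (m + n) \<one>\<^bsub>G l\<^esub> h) ` carrier (G (m + n))
          = (\<lambda>h. opl l (m + n) \<one>\<^bsub>G l\<^esub> (opl m n h \<one>\<^bsub>G n\<^esub>)) ` carrier (G m)"
    and braid_closed: "\<And>m n. b m n \<in> carrier (G (m + n))"
    and braid_natural: "\<And>m n g h. g \<in> carrier (G m) \<Longrightarrow> h \<in> carrier (G n) \<Longrightarrow>
          b m n \<otimes>\<^bsub>G (m + n)\<^esub> opl m n g h = opl n m h g \<otimes>\<^bsub>G (m + n)\<^esub> b m n"
    and hexagon1: "\<And>l m n. b l (m + n)
          = opl m (l + n) \<one>\<^bsub>G m\<^esub> (b l n) \<otimes>\<^bsub>G (l + m + n)\<^esub> opl (l + m) n (b l m) \<one>\<^bsub>G n\<^esub>"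
    and hexagon2: "\<And>l m n. b (l + m) n
          = opl (l + n) m (b l n) \<one>\<^bsub>G m\<^esub> \<otimes>\<^bsub>G (l + m + n)\<^esub> opl l (m + n) \<one>\<^bsub>G l\<^esub> (b m n)"

definition stab :: "(nat \<Rightarrow> 'g monoid) \<Rightarrow> (nat \<Rightarrow> nat \<Rightarrow> 'g \<Rightarrow> 'g \<Rightarrow> 'g) \<Rightarrow> nat \<Rightarrow> nat \<Rightarrow> 'g set" where
  "stab G opl m n = (\<lambda>h. opl (n - m) m h \<one>\<^bsub>G m\<^esub>) ` carrier (G (n - m))"

text \<open>The morphism f G_{n-m} in Hom(m,n).\<close>
definition UG_coset :: "(nat \<Rightarrow> 'g monoid) \<Rightarrow> (nat \<Rightarrow> nat \<Rightarrow> 'g \<Rightarrow> 'g \<Rightarrow> 'g) \<Rightarrow> nat \<Rightarrow> nat \<Rightarrow> 'g \<Rightarrow> 'g set" where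
  "UG_coset G opl m n f = l_coset (G n) f (stab G opl m n)"

definition UG_Hom :: "(nat \<Rightarrow> 'g monoid) \<Rightarrow> (nat \<Rightarrow> nat \<Rightarrow> 'g \<Rightarrow> 'g \<Rightarrow> 'g) \<Rightarrow> nat \<Rightarrow> nat \<Rightarrow> 'g set set" where
  "UG_Hom G opl m n = (if m \<le> n then UG_coset G opl m n ` carrier (G n) else {})"

definition UG_id :: "(nat \<Rightarrow> 'g monoid) \<Rightarrow> (nat \<Rightarrow> nat \<Rightarrow> 'g \<Rightarrow> 'g \<Rightarrow> 'g) \<Rightarrow> nat \<Rightarrow> 'g set" where
  "UG_id G opl n = UG_coset G opl n n \<one>\<^bsub>G n\<^esub>"

definition UG_iota :: "(nat \<Rightarrow> 'g monoid) \<Rightarrow> (nat \<Rightarrow> nat \<Rightarrow> 'g \<Rightarrow> 'g \<Rightarrow> 'g) \<Rightarrow> nat \<Rightarrow> 'g set" where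
  "UG_iota G opl n = UG_coset G opl 0 n \<one>\<^bsub>G n\<^esub>"

definition UG_comp :: "(nat \<Rightarrow> 'g monoid) \<Rightarrow> (nat \<Rightarrow> nat \<Rightarrow> 'g \<Rightarrow> 'g \<Rightarrow> 'g) \<Rightarrow> nat \<Rightarrow> nat \<Rightarrow> nat
    \<Rightarrow> 'g set \<Rightarrow> 'g set \<Rightarrow> 'g set" where
  "UG_comp G opl l m n X Y =
     (\<Union>f\<in>X. \<Union>g\<in>Y. UG_coset G opl l n (f \<otimes>\<^bsub>G n\<^esub> opl (n - m) m \<one>\<^bsub>G (n - m)\<^esub> g))"

definition UG_oplus :: "(nat \<Rightarrow> 'g monoid) \<Rightarrow> (nat \<Rightarrow> nat \<Rightarrow> 'g \<Rightarrow> 'g \<Rightarrow> 'g) \<Rightarrow> (nat \<Rightarrow> nat \<Rightarrow> 'g)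
    \<Rightarrow> nat \<Rightarrow> nat \<Rightarrow> nat \<Rightarrow> nat \<Rightarrow> 'g set \<Rightarrow> 'g set \<Rightarrow> 'g set" where
  "UG_oplus G opl b s1 t1 s2 t2 X Y =
     (\<Union>f1\<in>X. \<Union>f2\<in>Y. UG_coset G opl (s1 + s2) (t1 + t2)
        (opl t1 t2 f1 f2 \<otimes>\<^bsub>G (t1 + t2)\<^esub>
           opl (t1 - s1) (s1 + (t2 - s2) + s2) \<one>\<^bsub>G (t1 - s1)\<^esub>
             (opl (s1 + (t2 - s2)) s2 (inv\<^bsub>G (s1 + (t2 - s2))\<^esub> b s1 (t2 - s2)) \<one>\<^bsub>G s2\<^esub>)))"

definition chains :: "'a set \<Rightarrow> ('a \<Rightarrow> 'r::comm_ring_1) set" where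
  "chains S = {f. finite {x. f x \<noteq> 0} \<and> {x. f x \<noteq> 0} \<subseteq> S}"

definition delta :: "'a \<Rightarrow> 'a \<Rightarrow> 'r::comm_ring_1" where
  "delta x = (\<lambda>y. if y = x then 1 else 0)"

definition lin_span :: "('a \<Rightarrow> 'r::comm_ring_1) set \<Rightarrow> ('a \<Rightarrow> 'r) set" where
  "lin_span A = {f. \<exists>S c. finite S \<and> S \<subseteq> A \<and> f = (\<lambda>y. \<Sum>a\<in>S. c a * a y)}"

text \<open>We index by q = p + 1 >= 0. Since V = R Hom(m,-) has V_k free on Hom(m,k), the module
  RG_n (x)_{RG_{n-q}} V_{n-q} is the free R-module on G_n x Hom(m,n-q) modulo the
  balancing relations (g (h (+) id_q)) (x) x = g (x) (h . x) for h in G_{n-q}.\<close>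

definition Cbasis :: "(nat \<Rightarrow> 'g monoid) \<Rightarrow> (nat \<Rightarrow> nat \<Rightarrow> 'g \<Rightarrow> 'g \<Rightarrow> 'g) \<Rightarrow> nat \<Rightarrow> nat \<Rightarrow> nat
    \<Rightarrow> ('g \<times> 'g set) set" where
  "Cbasis G opl m n q = (if q \<le> n then carrier (G n) \<times> UG_Hom G opl m (n - q) else {})"

definition Crel :: "'r::comm_ring_1 itself \<Rightarrow> (nat \<Rightarrow> 'g monoid) \<Rightarrow> (nat \<Rightarrow> nat \<Rightarrow> 'g \<Rightarrow> 'g \<Rightarrow> 'g)
    \<Rightarrow> nat \<Rightarrow> nat \<Rightarrow> nat \<Rightarrow> ('g \<times> 'g set \<Rightarrow> 'r) set" where
  "Crel R G opl m n q = lin_span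
     {(\<lambda>y. delta (g \<otimes>\<^bsub>G n\<^esub> opl (n - q) q h \<one>\<^bsub>G q\<^esub>, x) y
           - delta (g, UG_comp G opl m (n - q) (n - q) (UG_coset G opl (n - q) (n - q) h) x) y)
      | g h x. q \<le> n \<and> g \<in> carrier (G n) \<and> h \<in> carrier (G (n - q))
               \<and> x \<in> UG_Hom G opl m (n - q)}"

text \<open>The face d_i on g (x) x in degree p = q - 1 (0 <= i <= p):
  g (id_{n-p-1} (+) b_{1,i} (+) id_{p-i}) (x) V(id_{n-p-1} (+) iota_1)(x).\<close>
definition face :: "(nat \<Rightarrow> 'g monoid) \<Rightarrow> (nat \<Rightarrow> nat \<Rightarrow> 'g \<Rightarrow> 'g \<Rightarrow> 'g) \<Rightarrow> (nat \<Rightarrow> nat \<Rightarrow> 'g)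
    \<Rightarrow> nat \<Rightarrow> nat \<Rightarrow> nat \<Rightarrow> nat \<Rightarrow> 'g \<times> 'g set \<Rightarrow> 'g \<times> 'g set" where
  "face G opl b m n q i z =
     (fst z \<otimes>\<^bsub>G n\<^esub> opl (n - q) q \<one>\<^bsub>G (n - q)\<^esub> (opl (1 + i) (q - 1 - i) (b 1 i) \<one>\<^bsub>G (q - 1 - i)\<^esub>),
      UG_comp G opl m (n - q) (n - q + 1)
        (UG_oplus G opl b (n - q) (n - q) 0 1 (UG_id G opl (n - q)) (UG_iota G opl 1)) (snd z))"

definition dbasis :: "'r::comm_ring_1 itself \<Rightarrow> (nat \<Rightarrow> 'g monoid) \<Rightarrow> (nat \<Rightarrow> nat \<Rightarrow> 'g \<Rightarrow> 'g \<Rightarrow> 'g)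
    \<Rightarrow> (nat \<Rightarrow> nat \<Rightarrow> 'g) \<Rightarrow> nat \<Rightarrow> nat \<Rightarrow> nat \<Rightarrow> 'g \<times> 'g set \<Rightarrow> 'g \<times> 'g set \<Rightarrow> 'r" where
  "dbasis R G opl b m n q z = (\<lambda>y. \<Sum>i<q. (- 1) ^ i * delta (face G opl b m n q i z) y)"

definition dchain :: "'r::comm_ring_1 itself \<Rightarrow> (nat \<Rightarrow> 'g monoid) \<Rightarrow> (nat \<Rightarrow> nat \<Rightarrow> 'g \<Rightarrow> 'g \<Rightarrow> 'g)
    \<Rightarrow> (nat \<Rightarrow> nat \<Rightarrow> 'g) \<Rightarrow> nat \<Rightarrow> nat \<Rightarrow> nat \<Rightarrow> ('g \<times> 'g set \<Rightarrow> 'r) \<Rightarrow> ('g \<times> 'g set \<Rightarrow> 'r)" where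
  "dchain R G opl b m n q f = (\<lambda>y. \<Sum>z\<in>{z. f z \<noteq> 0}. f z * dbasis R G opl b m n q z y)"

text \<open>H~_i(R Hom(m,-))_n = 0 (for i >= -1; degree i corresponds to q = i + 1): every cycle
  (mod relations) is a boundary (mod relations).\<close>
definition reduced_homology_vanishes :: "'r::comm_ring_1 itself \<Rightarrow> (nat \<Rightarrow> 'g monoid)
    \<Rightarrow> (nat \<Rightarrow> nat \<Rightarrow> 'g \<Rightarrow> 'g \<Rightarrow> 'g) \<Rightarrow> (nat \<Rightarrow> nat \<Rightarrow> 'g) \<Rightarrow> nat \<Rightarrow> int \<Rightarrow> nat \<Rightarrow> bool" where
  "reduced_homology_vanishes R G opl b m i n =
     (let q = nat (i + 1) in
      \<forall>f \<in> chains (Cbasis G opl m n q).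
        (q = 0 \<or> dchain R G opl b m n q f \<in> Crel R G opl m n (q - 1)) \<longrightarrow>
        (\<exists>c \<in> chains (Cbasis G opl m n (Suc q)).
           (\<lambda>y. f y - dchain R G opl b m n (Suc q) c y) \<in> Crel R G opl m n q))"

end

theory Submission
  imports Defs
begin

text \<open>
  The complex \<open>C~(R Hom(m,-))\<^sub>n\<close> splits, modulo the balancing relations, into a direct sum of
  copies of \<open>C~(R Hom(0,-))\<^sub>n\<^sub>-\<^sub>m\<close>, one for each coset \<open>s G\<^sub>n\<^sub>-\<^sub>m\<close> of \<open>G\<^sub>n\<close>.
  In degree \<open>q - 1\<close>, with \<open>n = r + m + q\<close>, a generator \<open>g \<otimes> y G\<^sub>r\<close> is sent to the coset of
  \<open>g (y \<oplus> id\<^sub>q) (id\<^sub>r \<oplus> b\<^sub>m\<^sub>,\<^sub>q\<^sup>-\<^sup>1) = s (u \<oplus> id\<^sub>m)\<close> and to the coordinate \<open>u \<otimes> \<iota>\<close> in that summand.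
  The projections onto the summands and the inclusions of the summands respect the relations, and by
  the hexagon identity they commute with the differential up to relations. A relative cycle is therefore,
  up to relations, a finite sum of inclusions of relative cycles of the \<open>Hom(0,-)\<close> complex at
  \<open>n - m\<close>; these bound by hypothesis, so the original cycle bounds as well.
\<close>

section \<open>Finitely supported functions and linear extension\<close>

definition lin_ext :: "('a \<Rightarrow> 'b \<Rightarrow> 'r::comm_ring_1) \<Rightarrow> ('a \<Rightarrow> 'r) \<Rightarrow> 'b \<Rightarrow> 'r" where
  "lin_ext F f = (\<lambda>y. \<Sum>z\<in>{z. f z \<noteq> 0}. f z * F z y)"

abbreviation fin_supp :: "('a \<Rightarrow> 'r::comm_ring_1) \<Rightarrow> bool" where
  "fin_supp f \<equiv> finite {z. f z \<noteq> 0}"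

lemma lin_ext_eq_sum: "finite A \<Longrightarrow> {z. f z \<noteq> 0} \<subseteq> A \<Longrightarrow> lin_ext F f = (\<lambda>y. \<Sum>z\<in>A. f z * F z y)"
  unfolding lin_ext_def by (rule ext, rule sum.mono_neutral_left) auto

lemma fin_supp_lincomb: "finite S \<Longrightarrow> (\<forall>a\<in>S. fin_supp (g a)) \<Longrightarrow> fin_supp (\<lambda>y. \<Sum>a\<in>S. c a * g a y)"
proof -
  assume S: "finite S" and g: "\<forall>a\<in>S. fin_supp (g a)"
  have "{y. (\<Sum>a\<in>S. c a * g a y) \<noteq> 0} \<subseteq> (\<Union>a\<in>S. {y. g a y \<noteq> 0})"
  proof
    fix y assume "y \<in> {y. (\<Sum>a\<in>S. c a * g a y) \<noteq> 0}"
    then have "(\<Sum>a\<in>S. c a * g a y) \<noteq> 0" by simp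
    then obtain a where "a \<in> S" "c a * g a y \<noteq> 0" by (meson sum.neutral)
    then have "a \<in> S" "g a y \<noteq> 0" by auto
    then show "y \<in> (\<Union>a\<in>S. {y. g a y \<noteq> 0})" by blast
  qed
  moreover have "finite (\<Union>a\<in>S. {y. g a y \<noteq> 0})" using S g by auto
  ultimately show ?thesis by (rule finite_subset)
qed

lemma lin_ext_lincomb: "finite S \<Longrightarrow> (\<forall>a\<in>S. fin_supp (g a)) \<Longrightarrow>
   lin_ext F (\<lambda>y. \<Sum>a\<in>S. c a * g a y) = (\<lambda>y. \<Sum>a\<in>S. c a * lin_ext F (g a) y)"
proof -
  assume S: "finite S" and g: "\<forall>a\<in>S. fin_supp (g a)"
  let ?U = "\<Union>a\<in>S. {y. g a y \<noteq> 0}"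
  have U: "finite ?U" using S g by auto
  have sub: "{z. (\<Sum>a\<in>S. c a * g a z) \<noteq> 0} \<subseteq> ?U"
  proof
    fix y assume "y \<in> {y. (\<Sum>a\<in>S. c a * g a y) \<noteq> 0}"
    then have "(\<Sum>a\<in>S. c a * g a y) \<noteq> 0" by simp
    then obtain a where "a \<in> S" "c a * g a y \<noteq> 0" by (meson sum.neutral)
    then have "a \<in> S" "g a y \<noteq> 0" by auto
    then show "y \<in> ?U" by blast
  qed
  have "lin_ext F (\<lambda>y. \<Sum>a\<in>S. c a * g a y) = (\<lambda>y. \<Sum>z\<in>?U. (\<Sum>a\<in>S. c a * g a z) * F z y)"
    by (rule lin_ext_eq_sum[OF U sub])
  also have "\<dots> = (\<lambda>y. \<Sum>a\<in>S. c a * (\<Sum>z\<in>?U. g a z * F z y))"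
    by (rule ext) (simp add: sum_distrib_left sum_distrib_right mult.assoc sum.swap[of _ ?U])
  also have "\<dots> = (\<lambda>y. \<Sum>a\<in>S. c a * lin_ext F (g a) y)"
  proof (rule ext, rule sum.cong[OF refl])
    fix y a assume a: "a \<in> S"
    have "lin_ext F (g a) = (\<lambda>y. \<Sum>z\<in>?U. g a z * F z y)" using a U by (intro lin_ext_eq_sum) auto
    then show "c a * (\<Sum>z\<in>?U. g a z * F z y) = c a * lin_ext F (g a) y" by simp
  qed
  finally show ?thesis .
qed

lemma fin_supp_delta: "fin_supp (delta x :: 'a \<Rightarrow> 'r::comm_ring_1)"
proof -
  have "{z. (delta x z :: 'r) \<noteq> 0} \<subseteq> {x}" unfolding delta_def by auto
  then show ?thesis by (rule finite_subset) auto
qed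

lemma lin_ext_delta: "lin_ext F (delta x :: 'a \<Rightarrow> 'r::comm_ring_1) = F x"
proof (cases "(1::'r) = 0")
  case True
  then have "\<And>r::'r. r = 0" by (metis mult_1 mult_zero_left)
  then show ?thesis by (intro ext) metis
next
  case False
  then have "{z. (delta x z :: 'r) \<noteq> 0} = {x}" unfolding delta_def by auto
  then show ?thesis unfolding lin_ext_def by (simp add: delta_def)
qed

lemma delta_decomposition: "fin_supp f \<Longrightarrow> f = (\<lambda>y. \<Sum>z\<in>{z. f z \<noteq> 0}. f z * delta z y)"
proof (rule ext)
  fix y assume supp: "fin_supp f"
  have "(\<Sum>z\<in>{z. f z \<noteq> 0}. f z * delta z y) = (\<Sum>z\<in>{z. f z \<noteq> 0}. if z = y then f z else 0)"
    by (rule sum.cong) (auto simp: delta_def)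
  also have "\<dots> = f y" using supp by (simp add: sum.delta')
  finally show "f y = (\<Sum>z\<in>{z. f z \<noteq> 0}. f z * delta z y)" by simp
qed

lemma lin_span_superset: "a \<in> A \<Longrightarrow> a \<in> lin_span A"
  unfolding lin_span_def by (rule CollectI, rule exI[of _ "{a}"], rule exI[of _ "\<lambda>_. 1"]) auto

lemma lin_span_zero: "(\<lambda>y. 0) \<in> lin_span A"
  unfolding lin_span_def by (rule CollectI, rule exI[of _ "{}"]) auto

lemma lin_span_lincomb: "finite S \<Longrightarrow> (\<forall>a\<in>S. g a \<in> lin_span A) \<Longrightarrow> (\<lambda>y. \<Sum>a\<in>S. c a * g a y) \<in> lin_span A"
proof (induction S rule: finite_induct)
  case empty then show ?case by (simp add: lin_span_zero)
next
  case (insert x F)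
  then have IH: "(\<lambda>y. \<Sum>a\<in>F. c a * g a y) \<in> lin_span A" by simp
  from insert have gx: "g x \<in> lin_span A" by simp
  obtain S1 c1 where 1: "finite S1" "S1 \<subseteq> A" "(\<lambda>y. \<Sum>a\<in>F. c a * g a y) = (\<lambda>y. \<Sum>a\<in>S1. c1 a * a y)"
    using IH unfolding lin_span_def by blast
  obtain S2 c2 where 2: "finite S2" "S2 \<subseteq> A" "g x = (\<lambda>y. \<Sum>a\<in>S2. c2 a * a y)"
    using gx unfolding lin_span_def by blast
  let ?c = "\<lambda>a. (if a \<in> S1 then c1 a else 0) + c x * (if a \<in> S2 then c2 a else 0)"
  have "(\<lambda>y. \<Sum>a\<in>insert x F. c a * g a y) = (\<lambda>y. \<Sum>a\<in>S1 \<union> S2. ?c a * a y)"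
  proof (rule ext)
    fix y
    have e1: "(\<Sum>a\<in>S1. c1 a * a y) = (\<Sum>a\<in>S1 \<union> S2. (if a \<in> S1 then c1 a else 0) * a y)"
      using 1 2 by (intro sum.mono_neutral_cong_left) auto
    have e2: "(\<Sum>a\<in>S2. c2 a * a y) = (\<Sum>a\<in>S1 \<union> S2. (if a \<in> S2 then c2 a else 0) * a y)"
      using 1 2 by (intro sum.mono_neutral_cong_left) auto
    have "(\<Sum>a\<in>insert x F. c a * g a y) = c x * g x y + (\<Sum>a\<in>F. c a * g a y)" using insert by simp
    also have "\<dots> = c x * (\<Sum>a\<in>S2. c2 a * a y) + (\<Sum>a\<in>S1. c1 a * a y)"
      using fun_cong[OF 1(3), of y] fun_cong[OF 2(3), of y] by simp
    also have "\<dots> = (\<Sum>a\<in>S1 \<union> S2. c x * ((if a \<in> S2 then c2 a else 0) * a y)) + (\<Sum>a\<in>S1 \<union> S2. (if a \<in> S1 then c1 a else 0) * a y)"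
      unfolding e1 e2 sum_distrib_left by simp
    also have "\<dots> = (\<Sum>a\<in>S1 \<union> S2. ?c a * a y)"
      unfolding sum.distrib[symmetric] by (rule sum.cong) (simp_all add: distrib_right mult.assoc)
    finally show "(\<Sum>a\<in>insert x F. c a * g a y) = (\<Sum>a\<in>S1 \<union> S2. ?c a * a y)" .
  qed
  then show ?case unfolding lin_span_def using 1 2
    by (intro CollectI exI[of _ "S1 \<union> S2"] exI[of _ ?c]) auto
qed

lemma lin_span_diff: "f \<in> lin_span A \<Longrightarrow> g \<in> lin_span A \<Longrightarrow> (\<lambda>y. f y - g y) \<in> lin_span A"
proof -
  assume f: "f \<in> lin_span A" and g: "g \<in> lin_span A"
  let ?h = "\<lambda>i::bool. if i then f else g"
  have "(\<lambda>y. \<Sum>i\<in>{True, False}. (if i then 1 else -1) * ?h i y) \<in> lin_span A"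
    using f g by (intro lin_span_lincomb) auto
  then show ?thesis by simp
qed

lemma lin_span_add: "f \<in> lin_span A \<Longrightarrow> g \<in> lin_span A \<Longrightarrow> (\<lambda>y. f y + g y) \<in> lin_span A"
proof -
  assume f: "f \<in> lin_span A" and g: "g \<in> lin_span A"
  let ?h = "\<lambda>i::bool. if i then f else g"
  have "(\<lambda>y. \<Sum>i\<in>{True, False}. 1 * ?h i y) \<in> lin_span A"
    using f g by (intro lin_span_lincomb) auto
  then show ?thesis by simp
qed

lemma lin_ext_in_lin_span_image: "\<forall>a\<in>A. fin_supp a \<Longrightarrow> \<forall>a\<in>A. lin_ext F a \<in> lin_span B \<Longrightarrow> f \<in> lin_span A \<Longrightarrow> lin_ext F f \<in> lin_span B"
proof -
  assume fa: "\<forall>a\<in>A. fin_supp a" and la: "\<forall>a\<in>A. lin_ext F a \<in> lin_span B" and f: "f \<in> lin_span A"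
  obtain S c where S: "finite S" "S \<subseteq> A" "f = (\<lambda>y. \<Sum>a\<in>S. c a * a y)" using f unfolding lin_span_def by blast
  have "lin_ext F f = (\<lambda>y. \<Sum>a\<in>S. c a * lin_ext F a y)" unfolding S(3) using S fa by (intro lin_ext_lincomb) auto
  also have "\<dots> \<in> lin_span B" using S la by (intro lin_span_lincomb) auto
  finally show ?thesis .
qed

lemma lin_span_diff_swap: "(\<lambda>y. f y - g y) \<in> lin_span A \<Longrightarrow> (\<lambda>y. g y - f y) \<in> lin_span A"
proof -
  assume h: "(\<lambda>y. f y - g y) \<in> lin_span A"
  have "(\<lambda>y. 0 - (f y - g y)) \<in> lin_span A" using lin_span_diff[OF lin_span_zero h] by simp
  then show ?thesis by simp
qed

lemma lin_ext_delta_diff: "lin_ext F (\<lambda>y. delta a y - delta c y :: 'r::comm_ring_1) = (\<lambda>y. F a y - F c y)"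
proof (cases "a = c")
  case True
  then show ?thesis unfolding lin_ext_def by simp
next
  case False
  let ?k = "\<lambda>x. if x = a then (1::'r) else -1"
  have e: "(\<lambda>y. delta a y - delta c y :: 'r) = (\<lambda>y. \<Sum>x\<in>{a, c}. ?k x * delta x y)"
    using False by auto
  have "lin_ext F (\<lambda>y. \<Sum>x\<in>{a, c}. ?k x * delta x y) = (\<lambda>y. \<Sum>x\<in>{a, c}. ?k x * lin_ext F (delta x) y)"
    by (rule lin_ext_lincomb) (auto simp: fin_supp_delta)
  then show ?thesis unfolding e using False by (simp add: lin_ext_delta)
qed

lemma fin_supp_delta_diff: "fin_supp (\<lambda>y. delta a y - delta c y :: 'r::comm_ring_1)"
proof -
  have "{y. (delta a y - delta c y :: 'r) \<noteq> 0} \<subseteq> {a, c}" unfolding delta_def by auto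
  then show ?thesis by (rule finite_subset) auto
qed

lemma lincomb_diff: "(\<lambda>y. (\<Sum>i\<in>I. c i * A i y) - (\<Sum>i\<in>I. c i * B i y) :: 'r::comm_ring_1)
   = (\<lambda>y. \<Sum>i\<in>I. c i * (\<lambda>y. A i y - B i y) y)"
  by (simp add: sum_subtractf right_diff_distrib)

lemma lin_ext_zero: "lin_ext F (\<lambda>_. 0 :: 'r::comm_ring_1) = (\<lambda>_. 0)"
  unfolding lin_ext_def by simp

lemma lin_ext_lin_ext: "fin_supp f \<Longrightarrow> (\<forall>z. fin_supp (F z)) \<Longrightarrow> lin_ext H (lin_ext F f) = lin_ext (\<lambda>z. lin_ext H (F z)) f"
proof -
  assume f: "fin_supp f" and F: "\<forall>z. fin_supp (F z)"
  have "lin_ext H (lin_ext F f) = lin_ext H (\<lambda>y. \<Sum>z\<in>{z. f z \<noteq> 0}. f z * F z y)" unfolding lin_ext_def ..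
  also have "\<dots> = (\<lambda>y. \<Sum>z\<in>{z. f z \<noteq> 0}. f z * lin_ext H (F z) y)" using f F by (intro lin_ext_lincomb) auto
  also have "\<dots> = lin_ext (\<lambda>z. lin_ext H (F z)) f" unfolding lin_ext_def ..
  finally show ?thesis .
qed

lemma lin_ext_diff_kernel: "(\<lambda>y. lin_ext F1 f y - lin_ext F2 f y) = lin_ext (\<lambda>z y. F1 z y - F2 z y) f"
  unfolding lin_ext_def by (simp add: sum_subtractf right_diff_distrib)

lemma lin_ext_sum_kernel: "(\<lambda>y. \<Sum>s\<in>S. lin_ext (F s) f y) = lin_ext (\<lambda>z y. \<Sum>s\<in>S. F s z y) f"
  unfolding lin_ext_def by (rule ext) (simp add: sum_distrib_left sum.swap[of _ S])

lemma lin_ext_in_lin_span: "fin_supp f \<Longrightarrow> (\<forall>z\<in>{z. f z \<noteq> 0}. H z \<in> lin_span A) \<Longrightarrow> lin_ext H f \<in> lin_span A"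
  unfolding lin_ext_def by (rule lin_span_lincomb) auto

lemma lin_ext_diff: "fin_supp f \<Longrightarrow> fin_supp g \<Longrightarrow> lin_ext F (\<lambda>y. f y - g y) = (\<lambda>y. lin_ext F f y - lin_ext F g y)"
proof -
  assume f: "fin_supp f" and g: "fin_supp g"
  let ?h = "\<lambda>i::bool. if i then f else g"
  have e: "(\<lambda>y. f y - g y) = (\<lambda>y. \<Sum>i\<in>{True, False}. (if i then 1 else -1) * ?h i y)" by simp
  show ?thesis unfolding e using f g by (subst lin_ext_lincomb) auto
qed

lemma lin_ext_sum: "finite S \<Longrightarrow> \<forall>s\<in>S. fin_supp (g s) \<Longrightarrow> lin_ext F (\<lambda>y. \<Sum>s\<in>S. g s y) = (\<lambda>y. \<Sum>s\<in>S. lin_ext F (g s) y)"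
  using lin_ext_lincomb[of S g F "\<lambda>_. 1"] by simp

lemma lin_ext_in_chains: "f \<in> chains A \<Longrightarrow> (\<forall>z\<in>A. F z \<in> chains B) \<Longrightarrow> lin_ext F f \<in> chains B"
proof -
  assume f: "f \<in> chains A" and F: "\<forall>z\<in>A. F z \<in> chains B"
  have supp: "fin_supp f" and sub: "{z. f z \<noteq> 0} \<subseteq> A" using f unfolding chains_def by auto
  have "fin_supp (lin_ext F f)" unfolding lin_ext_def using supp F sub unfolding chains_def by (intro fin_supp_lincomb) auto
  moreover have "{y. lin_ext F f y \<noteq> 0} \<subseteq> B"
  proof
    fix y assume "y \<in> {y. lin_ext F f y \<noteq> 0}"
    then have "(\<Sum>z\<in>{z. f z \<noteq> 0}. f z * F z y) \<noteq> 0" unfolding lin_ext_def by simp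
    then obtain z where "z \<in> {z. f z \<noteq> 0}" "f z * F z y \<noteq> 0" by (meson sum.neutral)
    then have "z \<in> A" "F z y \<noteq> 0" using sub by auto
    then show "y \<in> B" using F unfolding chains_def by auto
  qed
  ultimately show ?thesis unfolding chains_def by simp
qed

lemma chains_sum: "finite S \<Longrightarrow> \<forall>s\<in>S. g s \<in> chains B \<Longrightarrow> (\<lambda>y. \<Sum>s\<in>S. g s y) \<in> chains B"
proof -
  assume S: "finite S" and g: "\<forall>s\<in>S. g s \<in> chains B"
  have "fin_supp (\<lambda>y. \<Sum>s\<in>S. 1 * g s y)" using S g unfolding chains_def by (intro fin_supp_lincomb) auto
  moreover have "{y. (\<Sum>s\<in>S. g s y) \<noteq> 0} \<subseteq> B"
  proof
    fix y assume "y \<in> {y. (\<Sum>s\<in>S. g s y) \<noteq> 0}"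
    then obtain s where "s \<in> S" "g s y \<noteq> 0" by (auto intro: sum.neutral)
    then show "y \<in> B" using g unfolding chains_def by auto
  qed
  ultimately show ?thesis unfolding chains_def by simp
qed

lemma delta_in_chains: "x \<in> B \<Longrightarrow> delta x \<in> chains B"
  unfolding chains_def using fin_supp_delta by (auto simp: delta_def split: if_splits)

lemma zero_in_chains: "(\<lambda>_. 0) \<in> chains B"
  unfolding chains_def by simp

lemma chains_empty: "f \<in> chains {} \<Longrightarrow> f = (\<lambda>_. 0)"
  unfolding chains_def by auto

lemma lin_span_sum: "finite S \<Longrightarrow> \<forall>s\<in>S. g s \<in> lin_span A \<Longrightarrow> (\<lambda>y. \<Sum>s\<in>S. g s y) \<in> lin_span A"
  using lin_span_lincomb[of S g A "\<lambda>_. 1"] by simp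

lemma chains_fin_supp: "f \<in> chains A \<Longrightarrow> fin_supp f" unfolding chains_def by auto

lemma fin_supp_lin_ext: "fin_supp f \<Longrightarrow> (\<forall>z. fin_supp (F z)) \<Longrightarrow> fin_supp (lin_ext F f)"
  unfolding lin_ext_def by (rule fin_supp_lincomb) auto

lemma lin_ext_dbasis: "lin_ext F (dbasis R G opl b m n q z :: _ \<Rightarrow> 'r::comm_ring_1)
   = (\<lambda>y. \<Sum>i<q. (- 1) ^ i * F (face G opl b m n q i z) y)"
  unfolding dbasis_def by (subst lin_ext_lincomb) (auto simp: fin_supp_delta lin_ext_delta)

lemma dchain_eq_lin_ext: "dchain R G opl b m n q = lin_ext (dbasis R G opl b m n q)"
  unfolding dchain_def lin_ext_def by (rule ext) simp

lemma fin_supp_dbasis: "fin_supp (dbasis R G opl b m n q z :: _ \<Rightarrow> 'r::comm_ring_1)"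
  unfolding dbasis_def by (rule fin_supp_lincomb) (auto simp: fin_supp_delta)

lemma lin_ext_in_Crel: "fin_supp f \<Longrightarrow> (\<forall>z\<in>{z. f z \<noteq> 0}. H z \<in> Crel R G opl m n q) \<Longrightarrow> lin_ext H f \<in> Crel R G opl m n q"
  unfolding Crel_def by (rule lin_ext_in_lin_span)

section \<open>Cycles and boundaries modulo the balancing relations\<close>

definition Crel_gens :: "'r::comm_ring_1 itself \<Rightarrow> (nat \<Rightarrow> 'g monoid) \<Rightarrow> (nat \<Rightarrow> nat \<Rightarrow> 'g \<Rightarrow> 'g \<Rightarrow> 'g)
    \<Rightarrow> nat \<Rightarrow> nat \<Rightarrow> nat \<Rightarrow> ('g \<times> 'g set \<Rightarrow> 'r) set" where
  "Crel_gens R G opl m n q =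
     {(\<lambda>y. delta (g \<otimes>\<^bsub>G n\<^esub> opl (n - q) q h \<one>\<^bsub>G q\<^esub>, x) y
           - delta (g, UG_comp G opl m (n - q) (n - q) (UG_coset G opl (n - q) (n - q) h) x) y)
      | g h x. q \<le> n \<and> g \<in> carrier (G n) \<and> h \<in> carrier (G (n - q))
               \<and> x \<in> UG_Hom G opl m (n - q)}"

lemma Crel_eq_lin_span: "Crel R G opl m n q = lin_span (Crel_gens R G opl m n q)"
  unfolding Crel_def Crel_gens_def ..

lemma fin_supp_Crel_gens: "a \<in> Crel_gens R G opl m n q \<Longrightarrow> fin_supp a"
  unfolding Crel_gens_def by (auto intro: fin_supp_delta_diff)

lemma lin_ext_Crel:
  assumes "\<And>a. a \<in> Crel_gens R G opl m n q \<Longrightarrow> lin_ext F a \<in> Crel R G' opl' m' n' q'"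
    and "x \<in> Crel R G opl m n q"
  shows "lin_ext F x \<in> Crel R G' opl' m' n' q'"
  using lin_ext_in_lin_span_image[of "Crel_gens R G opl m n q" F] assms fin_supp_Crel_gens
  unfolding Crel_eq_lin_span by blast

definition rel_cycle :: "'r::comm_ring_1 itself \<Rightarrow> (nat \<Rightarrow> 'g monoid) \<Rightarrow> (nat \<Rightarrow> nat \<Rightarrow> 'g \<Rightarrow> 'g \<Rightarrow> 'g)
    \<Rightarrow> (nat \<Rightarrow> nat \<Rightarrow> 'g) \<Rightarrow> nat \<Rightarrow> nat \<Rightarrow> nat \<Rightarrow> ('g \<times> 'g set \<Rightarrow> 'r) \<Rightarrow> bool" where
  "rel_cycle R G opl b m n q f \<longleftrightarrow> q = 0 \<or> dchain R G opl b m n q f \<in> Crel R G opl m n (q - 1)"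

definition rel_boundary :: "'r::comm_ring_1 itself \<Rightarrow> (nat \<Rightarrow> 'g monoid) \<Rightarrow> (nat \<Rightarrow> nat \<Rightarrow> 'g \<Rightarrow> 'g \<Rightarrow> 'g)
    \<Rightarrow> (nat \<Rightarrow> nat \<Rightarrow> 'g) \<Rightarrow> nat \<Rightarrow> nat \<Rightarrow> nat \<Rightarrow> ('g \<times> 'g set \<Rightarrow> 'r) \<Rightarrow> bool" where
  "rel_boundary R G opl b m n q f \<longleftrightarrow>
     (\<exists>c \<in> chains (Cbasis G opl m n (Suc q)).
        (\<lambda>y. f y - dchain R G opl b m n (Suc q) c y) \<in> Crel R G opl m n q)"

lemma reduced_homology_vanishes_iff:
  "reduced_homology_vanishes R G opl b m i n \<longleftrightarrow>
     (\<forall>f \<in> chains (Cbasis G opl m n (nat (i + 1))).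
        rel_cycle R G opl b m n (nat (i + 1)) f \<longrightarrow> rel_boundary R G opl b m n (nat (i + 1)) f)"
  unfolding reduced_homology_vanishes_def rel_cycle_def rel_boundary_def Let_def ..

lemma rel_boundary_zero: "rel_boundary R G opl b m n q (\<lambda>_. 0)"
  unfolding rel_boundary_def
  by (rule bexI[of _ "\<lambda>_. 0"]) (auto simp: dchain_eq_lin_ext lin_ext_zero lin_span_zero Crel_def zero_in_chains)

lemma rel_boundary_if_Cbasis_empty:
  assumes "Cbasis G opl m n q = {}" and "f \<in> chains (Cbasis G opl m n q)"
  shows "rel_boundary R G opl b m n q f"
proof -
  have "f = (\<lambda>_. 0)" using assms by (intro chains_empty) simp
  then show ?thesis by (simp only: rel_boundary_zero)
qed

lemma rel_boundary_Crel_diff: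
  assumes "(\<lambda>y. f y - g y) \<in> Crel R G opl m n q" and "rel_boundary R G opl b m n q g"
  shows "rel_boundary R G opl b m n q f"
proof -
  obtain c where c: "c \<in> chains (Cbasis G opl m n (Suc q))"
    and gc: "(\<lambda>y. g y - dchain R G opl b m n (Suc q) c y) \<in> Crel R G opl m n q"
    using assms(2) unfolding rel_boundary_def by blast
  have "(\<lambda>y. (f y - g y) + (g y - dchain R G opl b m n (Suc q) c y)) \<in> Crel R G opl m n q"
    using lin_span_add[OF assms(1)[unfolded Crel_def] gc[unfolded Crel_def]] unfolding Crel_def .
  then show ?thesis unfolding rel_boundary_def using c by (intro bexI[of _ c]) simp_all
qed

lemma rel_boundary_sum:
  assumes S: "finite S" and bd: "\<And>s. s \<in> S \<Longrightarrow> rel_boundary R G opl b m n q (g s)"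
  shows "rel_boundary R G opl b m n q (\<lambda>y. \<Sum>s\<in>S. g s y)"
proof -
  obtain c where c: "\<And>s. s \<in> S \<Longrightarrow> c s \<in> chains (Cbasis G opl m n (Suc q))"
    and gc: "\<And>s. s \<in> S \<Longrightarrow> (\<lambda>y. g s y - dchain R G opl b m n (Suc q) (c s) y) \<in> Crel R G opl m n q"
    using bchoice[of S "\<lambda>s c. c \<in> chains (Cbasis G opl m n (Suc q)) \<and>
        (\<lambda>y. g s y - dchain R G opl b m n (Suc q) c y) \<in> Crel R G opl m n q"] bd
    unfolding rel_boundary_def Bex_def by blast
  have "dchain R G opl b m n (Suc q) (\<lambda>y. \<Sum>s\<in>S. c s y) = (\<lambda>y. \<Sum>s\<in>S. dchain R G opl b m n (Suc q) (c s) y)"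
    unfolding dchain_eq_lin_ext using S c by (intro lin_ext_sum) (auto intro: chains_fin_supp)
  moreover have "(\<lambda>y. \<Sum>s\<in>S. g s y - dchain R G opl b m n (Suc q) (c s) y) \<in> Crel R G opl m n q"
    unfolding Crel_def using S gc[unfolded Crel_def] by (intro lin_span_sum) auto
  moreover have "(\<lambda>y. \<Sum>s\<in>S. c s y) \<in> chains (Cbasis G opl m n (Suc q))"
    using S c by (intro chains_sum) auto
  ultimately show ?thesis unfolding rel_boundary_def by (intro bexI) (simp_all add: sum_subtractf)
qed


context braided_stability_groupoid begin

section \<open>Identities in a braided stability groupoid\<close>

lemma G_m_closed: "x \<in> carrier (G n) \<Longrightarrow> y \<in> carrier (G n) \<Longrightarrow> x \<otimes>\<^bsub>G n\<^esub> y \<in> carrier (G n)"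
  by (simp add: group.is_monoid grp monoid.m_closed)
lemma G_one_closed: "\<one>\<^bsub>G n\<^esub> \<in> carrier (G n)"
  by (simp add: group.is_monoid grp monoid.one_closed)
lemma G_inv_closed: "x \<in> carrier (G n) \<Longrightarrow> inv\<^bsub>G n\<^esub> x \<in> carrier (G n)"
  by (simp add: grp group.inv_closed)
lemma G_m_assoc: "x \<in> carrier (G n) \<Longrightarrow> y \<in> carrier (G n) \<Longrightarrow> z \<in> carrier (G n) \<Longrightarrow>
   (x \<otimes>\<^bsub>G n\<^esub> y) \<otimes>\<^bsub>G n\<^esub> z = x \<otimes>\<^bsub>G n\<^esub> (y \<otimes>\<^bsub>G n\<^esub> z)"
  by (simp add: group.is_monoid grp monoid.m_assoc)
lemma G_l_one: "x \<in> carrier (G n) \<Longrightarrow> \<one>\<^bsub>G n\<^esub> \<otimes>\<^bsub>G n\<^esub> x = x"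
  by (simp add: group.is_monoid grp monoid.l_one)
lemma G_r_one: "x \<in> carrier (G n) \<Longrightarrow> x \<otimes>\<^bsub>G n\<^esub> \<one>\<^bsub>G n\<^esub> = x"
  by (simp add: group.is_monoid grp monoid.r_one)
lemma G_l_inv: "x \<in> carrier (G n) \<Longrightarrow> inv\<^bsub>G n\<^esub> x \<otimes>\<^bsub>G n\<^esub> x = \<one>\<^bsub>G n\<^esub>"
  by (simp add: grp group.l_inv)
lemma G_r_inv: "x \<in> carrier (G n) \<Longrightarrow> x \<otimes>\<^bsub>G n\<^esub> inv\<^bsub>G n\<^esub> x = \<one>\<^bsub>G n\<^esub>"
  by (simp add: grp group.r_inv)
lemma G_inv_cancel: "x \<in> carrier (G n) \<Longrightarrow> y \<in> carrier (G n) \<Longrightarrow> inv\<^bsub>G n\<^esub> x \<otimes>\<^bsub>G n\<^esub> (x \<otimes>\<^bsub>G n\<^esub> y) = y"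
  by (metis grp group.inv_solve_left G_inv_closed G_m_closed)
lemma G_cancel_inv: "x \<in> carrier (G n) \<Longrightarrow> y \<in> carrier (G n) \<Longrightarrow> x \<otimes>\<^bsub>G n\<^esub> (inv\<^bsub>G n\<^esub> x \<otimes>\<^bsub>G n\<^esub> y) = y"
  by (metis grp group.inv_solve_left G_inv_closed G_m_closed group.inv_inv)
lemma G_l_cancel: "x \<in> carrier (G n) \<Longrightarrow> y \<in> carrier (G n) \<Longrightarrow> z \<in> carrier (G n) \<Longrightarrow>
   x \<otimes>\<^bsub>G n\<^esub> y = x \<otimes>\<^bsub>G n\<^esub> z \<longleftrightarrow> y = z"
  by (metis grp group.Units_eq group.is_monoid monoid.Units_l_cancel)
lemma G_inv_mult: "x \<in> carrier (G n) \<Longrightarrow> y \<in> carrier (G n) \<Longrightarrow>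
   inv\<^bsub>G n\<^esub> (x \<otimes>\<^bsub>G n\<^esub> y) = inv\<^bsub>G n\<^esub> y \<otimes>\<^bsub>G n\<^esub> inv\<^bsub>G n\<^esub> x"
  by (simp add: grp group.inv_mult_group)
lemma G_inv_one: "inv\<^bsub>G n\<^esub> \<one>\<^bsub>G n\<^esub> = \<one>\<^bsub>G n\<^esub>"
  by (simp add: grp group.is_monoid monoid.inv_one)

lemma opl_closed_eq: "x \<in> carrier (G a) \<Longrightarrow> y \<in> carrier (G d) \<Longrightarrow> c = a + d \<Longrightarrow> opl a d x y \<in> carrier (G c)"
  using opl_closed by simp

lemma opl_one: "opl a d \<one>\<^bsub>G a\<^esub> \<one>\<^bsub>G d\<^esub> = \<one>\<^bsub>G (a+d)\<^esub>"
proof -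
  let ?z = "opl a d \<one>\<^bsub>G a\<^esub> \<one>\<^bsub>G d\<^esub>"
  have z: "?z \<in> carrier (G (a+d))" by (simp add: opl_closed_eq G_one_closed)
  have "?z = ?z \<otimes>\<^bsub>G (a+d)\<^esub> ?z"
    using opl_mult[of "\<one>\<^bsub>G a\<^esub>" a "\<one>\<^bsub>G a\<^esub>" "\<one>\<^bsub>G d\<^esub>" d "\<one>\<^bsub>G d\<^esub>"] by (simp add: G_one_closed G_l_one)
  then show ?thesis using z by (metis G_r_inv G_m_assoc G_inv_closed G_r_one)
qed

lemma opl_one_eq: "c = a + d \<Longrightarrow> opl a d \<one>\<^bsub>G a\<^esub> \<one>\<^bsub>G d\<^esub> = \<one>\<^bsub>G c\<^esub>"
  using opl_one by simp

lemma opl_mult_eq: "c = a + d \<Longrightarrow> x \<in> carrier (G a) \<Longrightarrow> x' \<in> carrier (G a) \<Longrightarrow> y \<in> carrier (G d) \<Longrightarrow> y' \<in> carrier (G d) \<Longrightarrow>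
   opl a d x y \<otimes>\<^bsub>G c\<^esub> opl a d x' y' = opl a d (x \<otimes>\<^bsub>G a\<^esub> x') (y \<otimes>\<^bsub>G d\<^esub> y')"
  using opl_mult by simp

lemma opl_inv: "c = a + d \<Longrightarrow> x \<in> carrier (G a) \<Longrightarrow> y \<in> carrier (G d) \<Longrightarrow>
   inv\<^bsub>G c\<^esub> (opl a d x y) = opl a d (inv\<^bsub>G a\<^esub> x) (inv\<^bsub>G d\<^esub> y)"
proof -
  assume c: "c = a + d" and x: "x \<in> carrier (G a)" and y: "y \<in> carrier (G d)"
  have "opl a d (inv\<^bsub>G a\<^esub> x) (inv\<^bsub>G d\<^esub> y) \<otimes>\<^bsub>G c\<^esub> opl a d x y = \<one>\<^bsub>G c\<^esub>"
    using c x y by (simp add: opl_mult_eq G_inv_closed G_l_inv opl_one)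
  then show ?thesis using c x y
    by (metis grp group.inv_equality G_inv_closed opl_closed_eq)
qed

lemma opl_assoc_eq: "f \<in> carrier (G l) \<Longrightarrow> g \<in> carrier (G m) \<Longrightarrow> h \<in> carrier (G n) \<Longrightarrow>
   a = l + m \<Longrightarrow> c = m + n \<Longrightarrow> opl a n (opl l m f g) h = opl l c f (opl m n g h)"
  using opl_assoc by simp

lemma stab_emb_mult: "w \<in> carrier (G k) \<Longrightarrow> h \<in> carrier (G k) \<Longrightarrow>
  opl k m w \<one>\<^bsub>G m\<^esub> \<otimes>\<^bsub>G (k+m)\<^esub> opl k m h \<one>\<^bsub>G m\<^esub> = opl k m (w \<otimes>\<^bsub>G k\<^esub> h) \<one>\<^bsub>G m\<^esub>"
  using opl_mult[of w k h "\<one>\<^bsub>G m\<^esub>" m "\<one>\<^bsub>G m\<^esub>"] by (simp add: G_one_closed G_l_one)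

section \<open>Cosets and composition in \<open>U\<G>\<close>\<close>

lemma stab_eq: "N = k + m \<Longrightarrow> stab G opl m N = (\<lambda>h. opl k m h \<one>\<^bsub>G m\<^esub>) ` carrier (G k)"
  by (simp add: stab_def)

lemma l_coset_stab_eq_image: "l_coset (G N) a ((\<lambda>h. opl k m h \<one>\<^bsub>G m\<^esub>) ` carrier (G k))
   = (\<lambda>h. a \<otimes>\<^bsub>G N\<^esub> opl k m h \<one>\<^bsub>G m\<^esub>) ` carrier (G k)"
  unfolding l_coset_def by auto

lemma l_coset_stab_shift: "N = k + m \<Longrightarrow> a \<in> carrier (G N) \<Longrightarrow> w \<in> carrier (G k) \<Longrightarrow>
  l_coset (G N) (a \<otimes>\<^bsub>G N\<^esub> opl k m w \<one>\<^bsub>G m\<^esub>) ((\<lambda>h. opl k m h \<one>\<^bsub>G m\<^esub>) ` carrier (G k))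
  = l_coset (G N) a ((\<lambda>h. opl k m h \<one>\<^bsub>G m\<^esub>) ` carrier (G k))"
proof -
  assume N: "N = k + m" and a: "a \<in> carrier (G N)" and w: "w \<in> carrier (G k)"
  have e: "\<And>h. h \<in> carrier (G k) \<Longrightarrow> (a \<otimes>\<^bsub>G N\<^esub> opl k m w \<one>\<^bsub>G m\<^esub>) \<otimes>\<^bsub>G N\<^esub> opl k m h \<one>\<^bsub>G m\<^esub>
      = a \<otimes>\<^bsub>G N\<^esub> opl k m (w \<otimes>\<^bsub>G k\<^esub> h) \<one>\<^bsub>G m\<^esub>"
    using N a w by (simp add: G_m_assoc opl_closed_eq G_one_closed stab_emb_mult)
  have e2: "\<And>h. h \<in> carrier (G k) \<Longrightarrow> a \<otimes>\<^bsub>G N\<^esub> opl k m h \<one>\<^bsub>G m\<^esub>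
      = (a \<otimes>\<^bsub>G N\<^esub> opl k m w \<one>\<^bsub>G m\<^esub>) \<otimes>\<^bsub>G N\<^esub> opl k m (inv\<^bsub>G k\<^esub> w \<otimes>\<^bsub>G k\<^esub> h) \<one>\<^bsub>G m\<^esub>"
  proof -
    fix h assume h: "h \<in> carrier (G k)"
    have hh: "inv\<^bsub>G k\<^esub> w \<otimes>\<^bsub>G k\<^esub> h \<in> carrier (G k)" using w h by (simp add: G_m_closed G_inv_closed)
    have r: "w \<otimes>\<^bsub>G k\<^esub> (inv\<^bsub>G k\<^esub> w \<otimes>\<^bsub>G k\<^esub> h) = h" using w h by (rule G_cancel_inv)
    show "?thesis h" using e[OF hh] unfolding r by simp
  qed
  show ?thesis unfolding l_coset_stab_eq_image
  proof (intro equalityI subsetI)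
    fix y assume "y \<in> (\<lambda>h. (a \<otimes>\<^bsub>G N\<^esub> opl k m w \<one>\<^bsub>G m\<^esub>) \<otimes>\<^bsub>G N\<^esub> opl k m h \<one>\<^bsub>G m\<^esub>) ` carrier (G k)"
    then obtain h where h: "h \<in> carrier (G k)" "y = (a \<otimes>\<^bsub>G N\<^esub> opl k m w \<one>\<^bsub>G m\<^esub>) \<otimes>\<^bsub>G N\<^esub> opl k m h \<one>\<^bsub>G m\<^esub>" by blast
    have "w \<otimes>\<^bsub>G k\<^esub> h \<in> carrier (G k)" using w h by (simp add: G_m_closed)
    then show "y \<in> (\<lambda>h. a \<otimes>\<^bsub>G N\<^esub> opl k m h \<one>\<^bsub>G m\<^esub>) ` carrier (G k)"
      using e[OF h(1)] h(2) by blast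
  next
    fix y assume "y \<in> (\<lambda>h. a \<otimes>\<^bsub>G N\<^esub> opl k m h \<one>\<^bsub>G m\<^esub>) ` carrier (G k)"
    then obtain h where h: "h \<in> carrier (G k)" "y = a \<otimes>\<^bsub>G N\<^esub> opl k m h \<one>\<^bsub>G m\<^esub>" by blast
    have "inv\<^bsub>G k\<^esub> w \<otimes>\<^bsub>G k\<^esub> h \<in> carrier (G k)" using w h by (simp add: G_m_closed G_inv_closed)
    then show "y \<in> (\<lambda>h. (a \<otimes>\<^bsub>G N\<^esub> opl k m w \<one>\<^bsub>G m\<^esub>) \<otimes>\<^bsub>G N\<^esub> opl k m h \<one>\<^bsub>G m\<^esub>) ` carrier (G k)"
      using e2[OF h(1)] h(2) by blast
  qed
qed

lemma l_coset_stab_memD: "y \<in> l_coset (G N) a ((\<lambda>h. opl k m h \<one>\<^bsub>G m\<^esub>) ` carrier (G k)) \<Longrightarrow>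
   \<exists>h\<in>carrier (G k). y = a \<otimes>\<^bsub>G N\<^esub> opl k m h \<one>\<^bsub>G m\<^esub>"
  unfolding l_coset_stab_eq_image by auto

lemma l_coset_stab_repr: "N = k + m \<Longrightarrow> a \<in> carrier (G N) \<Longrightarrow>
  y \<in> l_coset (G N) a ((\<lambda>h. opl k m h \<one>\<^bsub>G m\<^esub>) ` carrier (G k)) \<Longrightarrow>
  l_coset (G N) y ((\<lambda>h. opl k m h \<one>\<^bsub>G m\<^esub>) ` carrier (G k))
  = l_coset (G N) a ((\<lambda>h. opl k m h \<one>\<^bsub>G m\<^esub>) ` carrier (G k))"
  using l_coset_stab_memD l_coset_stab_shift by metis

lemma l_coset_stab_self: "N = k + m \<Longrightarrow> a \<in> carrier (G N) \<Longrightarrow>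
  a \<in> l_coset (G N) a ((\<lambda>h. opl k m h \<one>\<^bsub>G m\<^esub>) ` carrier (G k))"
  unfolding l_coset_stab_eq_image by (auto intro!: image_eqI[where x="\<one>\<^bsub>G k\<^esub>"] simp: G_one_closed opl_one G_r_one)

lemma l_coset_stab_subset: "N = k + m \<Longrightarrow> a \<in> carrier (G N) \<Longrightarrow>
  l_coset (G N) a ((\<lambda>h. opl k m h \<one>\<^bsub>G m\<^esub>) ` carrier (G k)) \<subseteq> carrier (G N)"
  unfolding l_coset_stab_eq_image by (auto intro!: G_m_closed opl_closed_eq G_one_closed)

lemma l_coset_stab_same: "N = k + m \<Longrightarrow> a \<in> carrier (G N) \<Longrightarrow>
  y1 \<in> l_coset (G N) a ((\<lambda>h. opl k m h \<one>\<^bsub>G m\<^esub>) ` carrier (G k)) \<Longrightarrow>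
  y2 \<in> l_coset (G N) a ((\<lambda>h. opl k m h \<one>\<^bsub>G m\<^esub>) ` carrier (G k)) \<Longrightarrow>
  \<exists>w\<in>carrier (G k). y1 = y2 \<otimes>\<^bsub>G N\<^esub> opl k m w \<one>\<^bsub>G m\<^esub>"
proof -
  assume N: "N = k + m" and a: "a \<in> carrier (G N)" and 1: "y1 \<in> l_coset (G N) a ((\<lambda>h. opl k m h \<one>\<^bsub>G m\<^esub>) ` carrier (G k))"
    and 2: "y2 \<in> l_coset (G N) a ((\<lambda>h. opl k m h \<one>\<^bsub>G m\<^esub>) ` carrier (G k))"
  obtain h1 where h1: "h1 \<in> carrier (G k)" "y1 = a \<otimes>\<^bsub>G N\<^esub> opl k m h1 \<one>\<^bsub>G m\<^esub>" using l_coset_stab_memD[OF 1] by blast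
  obtain h2 where h2: "h2 \<in> carrier (G k)" "y2 = a \<otimes>\<^bsub>G N\<^esub> opl k m h2 \<one>\<^bsub>G m\<^esub>" using l_coset_stab_memD[OF 2] by blast
  have hh: "inv\<^bsub>G k\<^esub> h2 \<otimes>\<^bsub>G k\<^esub> h1 \<in> carrier (G k)" using h1 h2 by (simp add: G_m_closed G_inv_closed)
  have c2: "opl k m h2 \<one>\<^bsub>G m\<^esub> \<in> carrier (G N)" using N h2 by (simp add: opl_closed_eq G_one_closed)
  have c3: "opl k m (inv\<^bsub>G k\<^esub> h2 \<otimes>\<^bsub>G k\<^esub> h1) \<one>\<^bsub>G m\<^esub> \<in> carrier (G N)" using N hh by (simp add: opl_closed_eq G_one_closed)
  have "y2 \<otimes>\<^bsub>G N\<^esub> opl k m (inv\<^bsub>G k\<^esub> h2 \<otimes>\<^bsub>G k\<^esub> h1) \<one>\<^bsub>G m\<^esub>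
     = a \<otimes>\<^bsub>G N\<^esub> (opl k m h2 \<one>\<^bsub>G m\<^esub> \<otimes>\<^bsub>G N\<^esub> opl k m (inv\<^bsub>G k\<^esub> h2 \<otimes>\<^bsub>G k\<^esub> h1) \<one>\<^bsub>G m\<^esub>)"
    using h2(2) a c2 c3 by (simp add: G_m_assoc)
  also have "\<dots> = y1" using N h1 h2 hh stab_emb_mult[of h2 k _ m] by (simp add: G_cancel_inv)
  finally have "y2 \<otimes>\<^bsub>G N\<^esub> opl k m (inv\<^bsub>G k\<^esub> h2 \<otimes>\<^bsub>G k\<^esub> h1) \<one>\<^bsub>G m\<^esub> = y1" .
  then show ?thesis using h1 h2 by (metis G_inv_closed G_m_closed)
qed

lemma UG_Hom_memD: "x \<in> UG_Hom G opl m N \<Longrightarrow> m \<le> N \<and> (\<exists>a\<in>carrier (G N). x = l_coset (G N) a (stab G opl m N))"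
  unfolding UG_Hom_def UG_coset_def by (auto split: if_splits)

lemma UG_comp_cosets: "N = k1 + M \<Longrightarrow> M = k2 + l \<Longrightarrow> a \<in> carrier (G N) \<Longrightarrow> y \<in> carrier (G M) \<Longrightarrow>
  UG_comp G opl l M N (l_coset (G N) a (stab G opl M N)) (l_coset (G M) y (stab G opl l M))
  = l_coset (G N) (a \<otimes>\<^bsub>G N\<^esub> opl k1 M \<one>\<^bsub>G k1\<^esub> y) (stab G opl l N)"
proof -
  assume N: "N = k1 + M" and M: "M = k2 + l" and a: "a \<in> carrier (G N)" and y: "y \<in> carrier (G M)"
  have sN: "stab G opl M N = (\<lambda>h. opl k1 M h \<one>\<^bsub>G M\<^esub>) ` carrier (G k1)" using N by (simp add: stab_eq)
  have sM: "stab G opl l M = (\<lambda>h. opl k2 l h \<one>\<^bsub>G l\<^esub>) ` carrier (G k2)" using M by (simp add: stab_eq)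
  have sL: "stab G opl l N = (\<lambda>h. opl (k1+k2) l h \<one>\<^bsub>G l\<^esub>) ` carrier (G (k1+k2))" using N M by (simp add: stab_eq)
  have ay: "a \<otimes>\<^bsub>G N\<^esub> opl k1 M \<one>\<^bsub>G k1\<^esub> y \<in> carrier (G N)" using N a y by (simp add: G_m_closed opl_closed_eq G_one_closed)
  have key: "\<And>v w. v \<in> carrier (G k1) \<Longrightarrow> w \<in> carrier (G k2) \<Longrightarrow>
     (a \<otimes>\<^bsub>G N\<^esub> opl k1 M v \<one>\<^bsub>G M\<^esub>) \<otimes>\<^bsub>G N\<^esub> opl (N - M) M \<one>\<^bsub>G (N - M)\<^esub> (y \<otimes>\<^bsub>G M\<^esub> opl k2 l w \<one>\<^bsub>G l\<^esub>)
     = (a \<otimes>\<^bsub>G N\<^esub> opl k1 M \<one>\<^bsub>G k1\<^esub> y) \<otimes>\<^bsub>G N\<^esub> opl (k1+k2) l (opl k1 k2 v w) \<one>\<^bsub>G l\<^esub>"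
  proof -
    fix v w assume v: "v \<in> carrier (G k1)" and w: "w \<in> carrier (G k2)"
    have ww: "opl k2 l w \<one>\<^bsub>G l\<^esub> \<in> carrier (G M)" using M w by (simp add: opl_closed_eq G_one_closed)
    have "(a \<otimes>\<^bsub>G N\<^esub> opl k1 M v \<one>\<^bsub>G M\<^esub>) \<otimes>\<^bsub>G N\<^esub> opl (N - M) M \<one>\<^bsub>G (N - M)\<^esub> (y \<otimes>\<^bsub>G M\<^esub> opl k2 l w \<one>\<^bsub>G l\<^esub>)
        = a \<otimes>\<^bsub>G N\<^esub> opl k1 M v (y \<otimes>\<^bsub>G M\<^esub> opl k2 l w \<one>\<^bsub>G l\<^esub>)"
      using N a v y ww by (simp add: G_m_assoc opl_closed_eq G_one_closed G_m_closed opl_mult_eq G_l_one G_r_one)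
    also have "\<dots> = a \<otimes>\<^bsub>G N\<^esub> (opl k1 M \<one>\<^bsub>G k1\<^esub> y \<otimes>\<^bsub>G N\<^esub> opl k1 M v (opl k2 l w \<one>\<^bsub>G l\<^esub>))"
      using N a v y ww by (simp add: opl_mult_eq G_one_closed G_l_one)
    also have "opl k1 M v (opl k2 l w \<one>\<^bsub>G l\<^esub>) = opl (k1+k2) l (opl k1 k2 v w) \<one>\<^bsub>G l\<^esub>"
      using M v w by (simp add: opl_assoc_eq G_one_closed)
    finally show "?thesis v w" using N M a v y w by (simp add: G_m_assoc opl_closed_eq G_one_closed)
  qed
  have kc: "\<And>v w. v \<in> carrier (G k1) \<Longrightarrow> w \<in> carrier (G k2) \<Longrightarrow> opl k1 k2 v w \<in> carrier (G (k1+k2))"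
    by (simp add: opl_closed_eq)
  have each: "\<And>f g. f \<in> l_coset (G N) a (stab G opl M N) \<Longrightarrow> g \<in> l_coset (G M) y (stab G opl l M) \<Longrightarrow>
     UG_coset G opl l N (f \<otimes>\<^bsub>G N\<^esub> opl (N - M) M \<one>\<^bsub>G (N - M)\<^esub> g)
     = l_coset (G N) (a \<otimes>\<^bsub>G N\<^esub> opl k1 M \<one>\<^bsub>G k1\<^esub> y) (stab G opl l N)"
  proof -
    fix f g assume f: "f \<in> l_coset (G N) a (stab G opl M N)" and g: "g \<in> l_coset (G M) y (stab G opl l M)"
    obtain v where v: "v \<in> carrier (G k1)" "f = a \<otimes>\<^bsub>G N\<^esub> opl k1 M v \<one>\<^bsub>G M\<^esub>" using l_coset_stab_memD f sN by metis
    obtain w where w: "w \<in> carrier (G k2)" "g = y \<otimes>\<^bsub>G M\<^esub> opl k2 l w \<one>\<^bsub>G l\<^esub>" using l_coset_stab_memD g sM by metis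
    show "?thesis f g" unfolding UG_coset_def v(2) w(2) key[OF v(1) w(1)] sL
      using N M ay kc[OF v(1) w(1)] by (intro l_coset_stab_shift) auto
  qed
  have ne1: "a \<in> l_coset (G N) a (stab G opl M N)" using sN N a l_coset_stab_self by metis
  have ne2: "y \<in> l_coset (G M) y (stab G opl l M)" using sM M y l_coset_stab_self by metis
  show ?thesis unfolding UG_comp_def using each ne1 ne2 by blast
qed

lemma stab_0: "stab G opl 0 N = carrier (G N)"
  unfolding stab_def by (auto simp: unit_right)

lemma l_coset_carrier: "a \<in> carrier (G N) \<Longrightarrow> l_coset (G N) a (carrier (G N)) = carrier (G N)"
  unfolding l_coset_def
proof (intro equalityI subsetI)
  fix y assume a: "a \<in> carrier (G N)" and "y \<in> (\<Union>h\<in>carrier (G N). {a \<otimes>\<^bsub>G N\<^esub> h})"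
  then show "y \<in> carrier (G N)" by (auto intro: G_m_closed)
next
  fix y assume a: "a \<in> carrier (G N)" and y: "y \<in> carrier (G N)"
  have "y = a \<otimes>\<^bsub>G N\<^esub> (inv\<^bsub>G N\<^esub> a \<otimes>\<^bsub>G N\<^esub> y)" using a y by (simp add: G_cancel_inv)
  then show "y \<in> (\<Union>h\<in>carrier (G N). {a \<otimes>\<^bsub>G N\<^esub> h})" using a y by (auto intro!: G_m_closed G_inv_closed)
qed

lemma UG_Hom_0: "UG_Hom G opl 0 N = {carrier (G N)}"
  unfolding UG_Hom_def UG_coset_def stab_0 using l_coset_carrier G_one_closed[of N] by (auto intro!: image_eqI)

lemma stab_self: "stab G opl N N = {\<one>\<^bsub>G N\<^esub>}"
  unfolding stab_def using G0_trivial unit_left G_one_closed by auto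

lemma UG_id_eq: "UG_id G opl N = {\<one>\<^bsub>G N\<^esub>}"
  unfolding UG_id_def UG_coset_def stab_self l_coset_def by (simp add: G_one_closed G_l_one)

lemma UG_iota_eq: "UG_iota G opl N = carrier (G N)"
  unfolding UG_iota_def UG_coset_def stab_0 by (simp add: l_coset_carrier G_one_closed)

lemma UG_oplus_id_iota: "UG_oplus G opl b K K 0 1 (UG_id G opl K) (UG_iota G opl 1)
   = l_coset (G (K+1)) (inv\<^bsub>G (K+1)\<^esub> b K 1) (stab G opl K (K+1))"
proof -
  have bc: "b K 1 \<in> carrier (G (K+1))" using braid_closed[of K 1] by simp
  have ibc: "inv\<^bsub>G (K+1)\<^esub> b K 1 \<in> carrier (G (K+1))" using bc by (simp add: G_inv_closed)
  have st: "stab G opl K (K+1) = (\<lambda>h. opl 1 K h \<one>\<^bsub>G K\<^esub>) ` carrier (G 1)" by (simp add: stab_eq)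
  have each: "\<And>f. f \<in> carrier (G 1) \<Longrightarrow> UG_coset G opl (K + 0) (K + 1)
     (opl K 1 \<one>\<^bsub>G K\<^esub> f \<otimes>\<^bsub>G (K + 1)\<^esub>
      opl (K - K) (K + (1 - 0) + 0) \<one>\<^bsub>G (K - K)\<^esub>
       (opl (K + (1 - 0)) 0 (inv\<^bsub>G (K + (1 - 0))\<^esub> b K (1 - 0)) \<one>\<^bsub>G 0\<^esub>))
     = l_coset (G (K+1)) (inv\<^bsub>G (K+1)\<^esub> b K 1) (stab G opl K (K+1))"
  proof -
    fix f assume f: "f \<in> carrier (G 1)"
    have e1: "opl (K - K) (K + (1 - 0) + 0) \<one>\<^bsub>G (K - K)\<^esub>
       (opl (K + (1 - 0)) 0 (inv\<^bsub>G (K + (1 - 0))\<^esub> b K (1 - 0)) \<one>\<^bsub>G 0\<^esub>) = inv\<^bsub>G (K+1)\<^esub> b K 1"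
      using ibc by (simp add: unit_right unit_left)
    have nat: "b K 1 \<otimes>\<^bsub>G (K+1)\<^esub> opl K 1 \<one>\<^bsub>G K\<^esub> f = opl 1 K f \<one>\<^bsub>G K\<^esub> \<otimes>\<^bsub>G (K+1)\<^esub> b K 1"
      using braid_natural[of "\<one>\<^bsub>G K\<^esub>" K f 1] f by (simp add: G_one_closed)
    have c1: "opl K 1 \<one>\<^bsub>G K\<^esub> f \<in> carrier (G (K+1))" using f by (simp add: opl_closed_eq G_one_closed)
    have c2: "opl 1 K f \<one>\<^bsub>G K\<^esub> \<in> carrier (G (K+1))" using f by (simp add: opl_closed_eq G_one_closed)
    have e2: "opl K 1 \<one>\<^bsub>G K\<^esub> f \<otimes>\<^bsub>G (K + 1)\<^esub> inv\<^bsub>G (K+1)\<^esub> b K 1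
       = inv\<^bsub>G (K+1)\<^esub> b K 1 \<otimes>\<^bsub>G (K + 1)\<^esub> opl 1 K f \<one>\<^bsub>G K\<^esub>"
    proof -
      have "opl K 1 \<one>\<^bsub>G K\<^esub> f \<otimes>\<^bsub>G (K + 1)\<^esub> inv\<^bsub>G (K+1)\<^esub> b K 1
         = inv\<^bsub>G (K+1)\<^esub> b K 1 \<otimes>\<^bsub>G (K + 1)\<^esub> (b K 1 \<otimes>\<^bsub>G (K+1)\<^esub> opl K 1 \<one>\<^bsub>G K\<^esub> f) \<otimes>\<^bsub>G (K + 1)\<^esub> inv\<^bsub>G (K+1)\<^esub> b K 1"
        using bc c1 ibc by (simp add: G_inv_cancel)
      also have "\<dots> = inv\<^bsub>G (K+1)\<^esub> b K 1 \<otimes>\<^bsub>G (K + 1)\<^esub> opl 1 K f \<one>\<^bsub>G K\<^esub>"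
        unfolding nat using bc c2 ibc by (simp add: G_m_assoc G_r_inv G_r_one G_m_closed)
      finally show ?thesis .
    qed
    have "l_coset (G (K+1)) (inv\<^bsub>G (K+1)\<^esub> b K 1 \<otimes>\<^bsub>G (K + 1)\<^esub> opl 1 K f \<one>\<^bsub>G K\<^esub>) (stab G opl K (K+1))
       = l_coset (G (K+1)) (inv\<^bsub>G (K+1)\<^esub> b K 1) (stab G opl K (K+1))"
      unfolding st using f ibc by (intro l_coset_stab_shift) auto
    then show "?thesis f" unfolding e1 e2 UG_coset_def by simp
  qed
  show ?thesis unfolding UG_oplus_def UG_id_eq UG_iota_eq using each G_one_closed[of 1] by auto
qed

lemma UG_comp_face_Hom: "K = r + m \<Longrightarrow> y \<in> carrier (G K) \<Longrightarrow>
  UG_comp G opl m K (K + 1) (UG_oplus G opl b K K 0 1 (UG_id G opl K) (UG_iota G opl 1))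
     (l_coset (G K) y (stab G opl m K))
  = l_coset (G (K+1)) (opl K 1 y \<one>\<^bsub>G 1\<^esub> \<otimes>\<^bsub>G (K+1)\<^esub> opl r (m+1) \<one>\<^bsub>G r\<^esub> (inv\<^bsub>G (m+1)\<^esub> b m 1)) (stab G opl m (K+1))"
proof -
  assume K: "K = r + m" and y: "y \<in> carrier (G K)"
  have bc: "b K 1 \<in> carrier (G (K+1))" using braid_closed[of K 1] by simp
  have ibc: "inv\<^bsub>G (K+1)\<^esub> b K 1 \<in> carrier (G (K+1))" using bc by (simp add: G_inv_closed)
  have "UG_comp G opl m K (K + 1) (UG_oplus G opl b K K 0 1 (UG_id G opl K) (UG_iota G opl 1))
     (l_coset (G K) y (stab G opl m K)) = l_coset (G (K+1)) (inv\<^bsub>G (K+1)\<^esub> b K 1 \<otimes>\<^bsub>G (K+1)\<^esub> opl 1 K \<one>\<^bsub>G 1\<^esub> y) (stab G opl m (K+1))"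
    unfolding UG_oplus_id_iota using K y ibc by (intro UG_comp_cosets) auto
  also have "inv\<^bsub>G (K+1)\<^esub> b K 1 \<otimes>\<^bsub>G (K+1)\<^esub> opl 1 K \<one>\<^bsub>G 1\<^esub> y = opl K 1 y \<one>\<^bsub>G 1\<^esub> \<otimes>\<^bsub>G (K+1)\<^esub> inv\<^bsub>G (K+1)\<^esub> b K 1"
  proof -
    have nat: "b K 1 \<otimes>\<^bsub>G (K+1)\<^esub> opl K 1 y \<one>\<^bsub>G 1\<^esub> = opl 1 K \<one>\<^bsub>G 1\<^esub> y \<otimes>\<^bsub>G (K+1)\<^esub> b K 1"
      using braid_natural[of y K "\<one>\<^bsub>G 1\<^esub>" 1] y by (simp add: G_one_closed)
    have c1: "opl K 1 y \<one>\<^bsub>G 1\<^esub> \<in> carrier (G (K+1))" using y by (simp add: opl_closed_eq G_one_closed)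
    have c2: "opl 1 K \<one>\<^bsub>G 1\<^esub> y \<in> carrier (G (K+1))" using y by (simp add: opl_closed_eq G_one_closed)
    have "opl K 1 y \<one>\<^bsub>G 1\<^esub> \<otimes>\<^bsub>G (K+1)\<^esub> inv\<^bsub>G (K+1)\<^esub> b K 1
       = inv\<^bsub>G (K+1)\<^esub> b K 1 \<otimes>\<^bsub>G (K + 1)\<^esub> (b K 1 \<otimes>\<^bsub>G (K+1)\<^esub> opl K 1 y \<one>\<^bsub>G 1\<^esub>) \<otimes>\<^bsub>G (K + 1)\<^esub> inv\<^bsub>G (K+1)\<^esub> b K 1"
      using bc c1 ibc by (simp add: G_inv_cancel)
    also have "\<dots> = inv\<^bsub>G (K+1)\<^esub> b K 1 \<otimes>\<^bsub>G (K + 1)\<^esub> opl 1 K \<one>\<^bsub>G 1\<^esub> y"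
      unfolding nat using bc c2 ibc by (simp add: G_m_assoc G_r_inv G_r_one G_m_closed)
    finally show ?thesis by simp
  qed
  also have "inv\<^bsub>G (K+1)\<^esub> b K 1 = opl r (m+1) \<one>\<^bsub>G r\<^esub> (inv\<^bsub>G (m+1)\<^esub> b m 1) \<otimes>\<^bsub>G (K+1)\<^esub> opl (r+1) m (inv\<^bsub>G (r+1)\<^esub> b r 1) \<one>\<^bsub>G m\<^esub>"
  proof -
    have h: "b K 1 = opl (r + 1) m (b r 1) \<one>\<^bsub>G m\<^esub> \<otimes>\<^bsub>G (K+1)\<^esub> opl r (m + 1) \<one>\<^bsub>G r\<^esub> (b m 1)"
      using hexagon2[of r m 1] K by simp
    have c1: "opl (r + 1) m (b r 1) \<one>\<^bsub>G m\<^esub> \<in> carrier (G (K+1))" using K braid_closed[of r 1] by (simp add: opl_closed_eq G_one_closed)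
    have c2: "opl r (m + 1) \<one>\<^bsub>G r\<^esub> (b m 1) \<in> carrier (G (K+1))" using K braid_closed[of m 1] by (simp add: opl_closed_eq G_one_closed)
    show ?thesis unfolding h using c1 c2 K braid_closed[of r 1] braid_closed[of m 1]
      by (simp add: G_inv_mult opl_inv G_one_closed G_inv_one)
  qed
  also have "l_coset (G (K+1)) (opl K 1 y \<one>\<^bsub>G 1\<^esub> \<otimes>\<^bsub>G (K+1)\<^esub> (opl r (m+1) \<one>\<^bsub>G r\<^esub> (inv\<^bsub>G (m+1)\<^esub> b m 1) \<otimes>\<^bsub>G (K+1)\<^esub> opl (r+1) m (inv\<^bsub>G (r+1)\<^esub> b r 1) \<one>\<^bsub>G m\<^esub>)) (stab G opl m (K+1))
     = l_coset (G (K+1)) (opl K 1 y \<one>\<^bsub>G 1\<^esub> \<otimes>\<^bsub>G (K+1)\<^esub> opl r (m+1) \<one>\<^bsub>G r\<^esub> (inv\<^bsub>G (m+1)\<^esub> b m 1)) (stab G opl m (K+1))"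
  proof -
    have c1: "opl K 1 y \<one>\<^bsub>G 1\<^esub> \<in> carrier (G (K+1))" using y by (simp add: opl_closed_eq G_one_closed)
    have c2: "opl r (m+1) \<one>\<^bsub>G r\<^esub> (inv\<^bsub>G (m+1)\<^esub> b m 1) \<in> carrier (G (K+1))" using K braid_closed[of m 1] by (simp add: opl_closed_eq G_one_closed G_inv_closed)
    have c3: "opl (r+1) m (inv\<^bsub>G (r+1)\<^esub> b r 1) \<one>\<^bsub>G m\<^esub> \<in> carrier (G (K+1))" using K braid_closed[of r 1] by (simp add: opl_closed_eq G_one_closed G_inv_closed)
    have st: "stab G opl m (K+1) = (\<lambda>h. opl (r+1) m h \<one>\<^bsub>G m\<^esub>) ` carrier (G (r+1))" using K by (simp add: stab_eq)
    have "l_coset (G (K+1)) ((opl K 1 y \<one>\<^bsub>G 1\<^esub> \<otimes>\<^bsub>G (K+1)\<^esub> opl r (m+1) \<one>\<^bsub>G r\<^esub> (inv\<^bsub>G (m+1)\<^esub> b m 1)) \<otimes>\<^bsub>G (K+1)\<^esub> opl (r+1) m (inv\<^bsub>G (r+1)\<^esub> b r 1) \<one>\<^bsub>G m\<^esub>) (stab G opl m (K+1))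
     = l_coset (G (K+1)) (opl K 1 y \<one>\<^bsub>G 1\<^esub> \<otimes>\<^bsub>G (K+1)\<^esub> opl r (m+1) \<one>\<^bsub>G r\<^esub> (inv\<^bsub>G (m+1)\<^esub> b m 1)) (stab G opl m (K+1))"
      unfolding st apply (rule l_coset_stab_shift[of "K+1" "r+1" m])
      using c1 c2 K braid_closed[of r 1] by (auto intro!: G_m_closed G_inv_closed)
    then show ?thesis using c1 c2 c3 by (simp add: G_m_assoc)
  qed
  finally show ?thesis by simp
qed

lemma braid_inv_natural: "N = K + L \<Longrightarrow> x \<in> carrier (G K) \<Longrightarrow> y \<in> carrier (G L) \<Longrightarrow>
  opl K L x y \<otimes>\<^bsub>G N\<^esub> inv\<^bsub>G N\<^esub> (b K L) = inv\<^bsub>G N\<^esub> (b K L) \<otimes>\<^bsub>G N\<^esub> opl L K y x"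
proof -
  assume N: "N = K + L" and x: "x \<in> carrier (G K)" and y: "y \<in> carrier (G L)"
  have bc: "b K L \<in> carrier (G N)" using N braid_closed by simp
  have nat: "b K L \<otimes>\<^bsub>G N\<^esub> opl K L x y = opl L K y x \<otimes>\<^bsub>G N\<^esub> b K L"
    using braid_natural[OF x y] N by simp
  have c1: "opl K L x y \<in> carrier (G N)" using N x y by (simp add: opl_closed_eq)
  have c2: "opl L K y x \<in> carrier (G N)" using N x y by (simp add: opl_closed_eq)
  have "opl K L x y \<otimes>\<^bsub>G N\<^esub> inv\<^bsub>G N\<^esub> (b K L)
     = inv\<^bsub>G N\<^esub> b K L \<otimes>\<^bsub>G N\<^esub> (b K L \<otimes>\<^bsub>G N\<^esub> opl K L x y) \<otimes>\<^bsub>G N\<^esub> inv\<^bsub>G N\<^esub> b K L"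
    using bc c1 by (simp add: G_inv_cancel G_inv_closed)
  also have "\<dots> = inv\<^bsub>G N\<^esub> (b K L) \<otimes>\<^bsub>G N\<^esub> opl L K y x"
    unfolding nat using bc c2 by (simp add: G_m_assoc G_r_inv G_r_one G_m_closed G_inv_closed)
  finally show ?thesis .
qed

lemma opl_one_left_assoc:
  "c \<in> carrier (G q) \<Longrightarrow> opl (r + m) q \<one>\<^bsub>G (r + m)\<^esub> c = opl r (m + q) \<one>\<^bsub>G r\<^esub> (opl m q \<one>\<^bsub>G m\<^esub> c)"
  using opl_assoc_eq[of "\<one>\<^bsub>G r\<^esub>" r "\<one>\<^bsub>G m\<^esub>" m c q "r + m" "m + q"] by (simp add: G_one_closed opl_one)

lemma inv_braid_hexagon:
  "inv\<^bsub>G (m + Suc q)\<^esub> b m (Suc q)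
   = opl (m + 1) q (inv\<^bsub>G (m + 1)\<^esub> b m 1) \<one>\<^bsub>G q\<^esub> \<otimes>\<^bsub>G (m + Suc q)\<^esub> opl 1 (m + q) \<one>\<^bsub>G 1\<^esub> (inv\<^bsub>G (m + q)\<^esub> b m q)"
proof -
  have hex: "b m (Suc q) = opl 1 (m + q) \<one>\<^bsub>G 1\<^esub> (b m q) \<otimes>\<^bsub>G (m + Suc q)\<^esub> opl (m + 1) q (b m 1) \<one>\<^bsub>G q\<^esub>"
    using hexagon1[of m 1 q] by simp
  have "opl 1 (m + q) \<one>\<^bsub>G 1\<^esub> (b m q) \<in> carrier (G (m + Suc q))"
    and "opl (m + 1) q (b m 1) \<one>\<^bsub>G q\<^esub> \<in> carrier (G (m + Suc q))"
    using braid_closed[of m q] braid_closed[of m 1] by (simp_all add: opl_closed_eq G_one_closed)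
  then show ?thesis unfolding hex using braid_closed[of m q] braid_closed[of m 1]
    by (simp add: G_inv_mult opl_inv G_one_closed G_inv_one)
qed

lemma braid_face_conj:
  assumes "c \<in> carrier (G (Suc q))"
  shows "opl m (Suc q) \<one>\<^bsub>G m\<^esub> c \<otimes>\<^bsub>G (m + Suc q)\<^esub>
      (opl (m + 1) q (inv\<^bsub>G (m + 1)\<^esub> b m 1) \<one>\<^bsub>G q\<^esub> \<otimes>\<^bsub>G (m + Suc q)\<^esub> opl 1 (m + q) \<one>\<^bsub>G 1\<^esub> (inv\<^bsub>G (m + q)\<^esub> b m q))
    = inv\<^bsub>G (m + Suc q)\<^esub> b m (Suc q) \<otimes>\<^bsub>G (m + Suc q)\<^esub> opl (Suc q) m c \<one>\<^bsub>G m\<^esub>"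
  unfolding inv_braid_hexagon[symmetric]
  using braid_inv_natural[of "m + Suc q" m "Suc q" "\<one>\<^bsub>G m\<^esub>" c] assms by (simp add: G_one_closed)

lemma opl_split_shift:
  assumes K: "K = r + m" and y: "y \<in> carrier (G K)" and x: "x \<in> carrier (G (m + 1))"
  shows "opl (K+1) q0 (opl K 1 y \<one>\<^bsub>G 1\<^esub> \<otimes>\<^bsub>G (K+1)\<^esub> opl r (m+1) \<one>\<^bsub>G r\<^esub> x) \<one>\<^bsub>G q0\<^esub>
     = opl K (Suc q0) y \<one>\<^bsub>G (Suc q0)\<^esub> \<otimes>\<^bsub>G (K + Suc q0)\<^esub> opl r (m + Suc q0) \<one>\<^bsub>G r\<^esub> (opl (m+1) q0 x \<one>\<^bsub>G q0\<^esub>)"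
proof -
  have "opl (K+1) q0 (opl K 1 y \<one>\<^bsub>G 1\<^esub> \<otimes>\<^bsub>G (K+1)\<^esub> opl r (m+1) \<one>\<^bsub>G r\<^esub> x) \<one>\<^bsub>G q0\<^esub>
     = opl (K+1) q0 (opl K 1 y \<one>\<^bsub>G 1\<^esub>) \<one>\<^bsub>G q0\<^esub> \<otimes>\<^bsub>G (K + Suc q0)\<^esub> opl (K+1) q0 (opl r (m+1) \<one>\<^bsub>G r\<^esub> x) \<one>\<^bsub>G q0\<^esub>"
    using K y x by (subst opl_mult_eq) (auto simp: opl_closed_eq G_one_closed G_l_one)
  also have "opl (K+1) q0 (opl K 1 y \<one>\<^bsub>G 1\<^esub>) \<one>\<^bsub>G q0\<^esub> = opl K (1+q0) y (opl 1 q0 \<one>\<^bsub>G 1\<^esub> \<one>\<^bsub>G q0\<^esub>)"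
    using y by (intro opl_assoc_eq) (auto simp: G_one_closed)
  also have "opl (K+1) q0 (opl r (m+1) \<one>\<^bsub>G r\<^esub> x) \<one>\<^bsub>G q0\<^esub> = opl r (m+1+q0) \<one>\<^bsub>G r\<^esub> (opl (m+1) q0 x \<one>\<^bsub>G q0\<^esub>)"
    using K x by (intro opl_assoc_eq) (auto simp: G_one_closed)
  finally show ?thesis by (simp add: opl_one)
qed

text \<open>
  Moving the \<open>i\<close>-th face of \<open>g \<otimes> y G\<^sub>r\<close> into its summand gives the summand coordinate of
  \<open>g \<otimes> y G\<^sub>r\<close> followed by the \<open>i\<close>-th face of the \<open>Hom(0,-)\<close> complex; this is where the hexagon
  identity enters.
\<close>

lemma face_shift_braid_eq:
  assumes n: "n = r + m + Suc q0" and K: "K = r + m"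
    and g: "g \<in> carrier (G n)" and y: "y \<in> carrier (G K)" and c: "c \<in> carrier (G (Suc q0))"
  shows "(g \<otimes>\<^bsub>G n\<^esub> opl K (Suc q0) \<one>\<^bsub>G K\<^esub> c) \<otimes>\<^bsub>G n\<^esub>
      opl (K+1) q0 (opl K 1 y \<one>\<^bsub>G 1\<^esub> \<otimes>\<^bsub>G (K+1)\<^esub> opl r (m+1) \<one>\<^bsub>G r\<^esub> (inv\<^bsub>G (m+1)\<^esub> b m 1)) \<one>\<^bsub>G q0\<^esub>
      \<otimes>\<^bsub>G n\<^esub> opl (r+1) (m+q0) \<one>\<^bsub>G (r+1)\<^esub> (inv\<^bsub>G (m+q0)\<^esub> b m q0)
    = g \<otimes>\<^bsub>G n\<^esub> opl K (Suc q0) y \<one>\<^bsub>G (Suc q0)\<^esub> \<otimes>\<^bsub>G n\<^esub> opl r (m + Suc q0) \<one>\<^bsub>G r\<^esub> (inv\<^bsub>G (m + Suc q0)\<^esub> b m (Suc q0))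
      \<otimes>\<^bsub>G n\<^esub> opl (r + Suc q0) m (opl r (Suc q0) \<one>\<^bsub>G r\<^esub> c) \<one>\<^bsub>G m\<^esub>"
proof -
  let ?q = "Suc q0"
  let ?Z = "m + Suc q0"
  let ?ib1 = "inv\<^bsub>G (m+1)\<^esub> b m 1"
  let ?jb = "inv\<^bsub>G (m+q0)\<^esub> b m q0"
  let ?ibq = "inv\<^bsub>G ?Z\<^esub> b m ?q"
  have ib1: "?ib1 \<in> carrier (G (m+1))" using braid_closed[of m 1] by (simp add: G_inv_closed)
  have ibq0: "?jb \<in> carrier (G (m+q0))" using braid_closed[of m q0] by (simp add: G_inv_closed)
  have ibq: "?ibq \<in> carrier (G ?Z)" using braid_closed[of m ?q] by (simp add: G_inv_closed)
  have n2: "n = r + ?Z" using n by simp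
  have F1: "opl K ?q \<one>\<^bsub>G K\<^esub> c = opl r ?Z \<one>\<^bsub>G r\<^esub> (opl m ?q \<one>\<^bsub>G m\<^esub> c)"
    using K c by (simp add: opl_one_left_assoc)
  have F2: "opl (K+1) q0 (opl K 1 y \<one>\<^bsub>G 1\<^esub> \<otimes>\<^bsub>G (K+1)\<^esub> opl r (m+1) \<one>\<^bsub>G r\<^esub> ?ib1) \<one>\<^bsub>G q0\<^esub>
     = opl K ?q y \<one>\<^bsub>G ?q\<^esub> \<otimes>\<^bsub>G n\<^esub> opl r ?Z \<one>\<^bsub>G r\<^esub> (opl (m+1) q0 ?ib1 \<one>\<^bsub>G q0\<^esub>)"
    using opl_split_shift[OF K y ib1] n K by simp
  have F3: "opl (r+1) (m+q0) \<one>\<^bsub>G (r+1)\<^esub> ?jb = opl r ?Z \<one>\<^bsub>G r\<^esub> (opl 1 (m+q0) \<one>\<^bsub>G 1\<^esub> ?jb)"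
    using opl_one_left_assoc[OF ibq0, of r 1] by simp
  have F6: "opl (r + ?q) m (opl r ?q \<one>\<^bsub>G r\<^esub> c) \<one>\<^bsub>G m\<^esub> = opl r ?Z \<one>\<^bsub>G r\<^esub> (opl ?q m c \<one>\<^bsub>G m\<^esub>)"
  proof -
    have "opl (r + ?q) m (opl r ?q \<one>\<^bsub>G r\<^esub> c) \<one>\<^bsub>G m\<^esub> = opl r (?q + m) \<one>\<^bsub>G r\<^esub> (opl ?q m c \<one>\<^bsub>G m\<^esub>)"
      using c by (intro opl_assoc_eq) (auto simp: G_one_closed)
    then show ?thesis by (simp add: add.commute)
  qed
  have cF1: "opl r ?Z \<one>\<^bsub>G r\<^esub> (opl m ?q \<one>\<^bsub>G m\<^esub> c) \<in> carrier (G n)" using n2 c by (simp add: opl_closed_eq G_one_closed)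
  have cF2b: "opl r ?Z \<one>\<^bsub>G r\<^esub> (opl (m+1) q0 ?ib1 \<one>\<^bsub>G q0\<^esub>) \<in> carrier (G n)" using n2 ib1 by (simp add: opl_closed_eq G_one_closed)
  have cF3: "opl r ?Z \<one>\<^bsub>G r\<^esub> (opl 1 (m+q0) \<one>\<^bsub>G 1\<^esub> ?jb) \<in> carrier (G n)" using n2 ibq0 by (simp add: opl_closed_eq G_one_closed)
  have cF4: "opl K ?q y \<one>\<^bsub>G ?q\<^esub> \<in> carrier (G n)" using n K y by (simp add: opl_closed_eq G_one_closed)
  have cF5: "opl r ?Z \<one>\<^bsub>G r\<^esub> ?ibq \<in> carrier (G n)" using n2 ibq by (simp add: opl_closed_eq G_one_closed)
  have cF6: "opl r ?Z \<one>\<^bsub>G r\<^esub> (opl ?q m c \<one>\<^bsub>G m\<^esub>) \<in> carrier (G n)" using n2 c by (simp add: opl_closed_eq G_one_closed)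
  have cA: "opl m ?q \<one>\<^bsub>G m\<^esub> c \<in> carrier (G ?Z)" using c by (simp add: opl_closed_eq G_one_closed)
  have cB: "opl (m+1) q0 ?ib1 \<one>\<^bsub>G q0\<^esub> \<in> carrier (G ?Z)" using ib1 by (simp add: opl_closed_eq G_one_closed)
  have cC: "opl 1 (m+q0) \<one>\<^bsub>G 1\<^esub> ?jb \<in> carrier (G ?Z)" using ibq0 by (simp add: opl_closed_eq G_one_closed)
  have cD: "opl ?q m c \<one>\<^bsub>G m\<^esub> \<in> carrier (G ?Z)" using c by (simp add: opl_closed_eq G_one_closed)
  have comm: "opl r ?Z \<one>\<^bsub>G r\<^esub> (opl m ?q \<one>\<^bsub>G m\<^esub> c) \<otimes>\<^bsub>G n\<^esub> opl K ?q y \<one>\<^bsub>G ?q\<^esub>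
     = opl K ?q y \<one>\<^bsub>G ?q\<^esub> \<otimes>\<^bsub>G n\<^esub> opl r ?Z \<one>\<^bsub>G r\<^esub> (opl m ?q \<one>\<^bsub>G m\<^esub> c)"
    unfolding F1[symmetric] using n K y c by (simp add: opl_mult_eq G_one_closed G_l_one G_r_one)
  have prod: "opl r ?Z \<one>\<^bsub>G r\<^esub> (opl m ?q \<one>\<^bsub>G m\<^esub> c) \<otimes>\<^bsub>G n\<^esub> (opl r ?Z \<one>\<^bsub>G r\<^esub> (opl (m+1) q0 ?ib1 \<one>\<^bsub>G q0\<^esub>)
      \<otimes>\<^bsub>G n\<^esub> opl r ?Z \<one>\<^bsub>G r\<^esub> (opl 1 (m+q0) \<one>\<^bsub>G 1\<^esub> ?jb))
     = opl r ?Z \<one>\<^bsub>G r\<^esub> ?ibq \<otimes>\<^bsub>G n\<^esub> opl r ?Z \<one>\<^bsub>G r\<^esub> (opl ?q m c \<one>\<^bsub>G m\<^esub>)"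
    using n2 cA cB cC cD ibq braid_face_conj[OF c] by (simp add: opl_mult_eq G_one_closed G_l_one G_m_closed)
  have "(g \<otimes>\<^bsub>G n\<^esub> opl K ?q \<one>\<^bsub>G K\<^esub> c) \<otimes>\<^bsub>G n\<^esub>
      opl (K+1) q0 (opl K 1 y \<one>\<^bsub>G 1\<^esub> \<otimes>\<^bsub>G (K+1)\<^esub> opl r (m+1) \<one>\<^bsub>G r\<^esub> ?ib1) \<one>\<^bsub>G q0\<^esub>
      \<otimes>\<^bsub>G n\<^esub> opl (r+1) (m+q0) \<one>\<^bsub>G (r+1)\<^esub> ?jb
    = g \<otimes>\<^bsub>G n\<^esub> ((opl r ?Z \<one>\<^bsub>G r\<^esub> (opl m ?q \<one>\<^bsub>G m\<^esub> c) \<otimes>\<^bsub>G n\<^esub> opl K ?q y \<one>\<^bsub>G ?q\<^esub>) \<otimes>\<^bsub>G n\<^esub>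
       (opl r ?Z \<one>\<^bsub>G r\<^esub> (opl (m+1) q0 ?ib1 \<one>\<^bsub>G q0\<^esub>) \<otimes>\<^bsub>G n\<^esub> opl r ?Z \<one>\<^bsub>G r\<^esub> (opl 1 (m+q0) \<one>\<^bsub>G 1\<^esub> ?jb)))"
    unfolding F1 F2 F3 using g cF1 cF2b cF3 cF4 by (simp add: G_m_assoc G_m_closed)
  also have "\<dots> = g \<otimes>\<^bsub>G n\<^esub> (opl K ?q y \<one>\<^bsub>G ?q\<^esub> \<otimes>\<^bsub>G n\<^esub> (opl r ?Z \<one>\<^bsub>G r\<^esub> ?ibq \<otimes>\<^bsub>G n\<^esub> opl r ?Z \<one>\<^bsub>G r\<^esub> (opl ?q m c \<one>\<^bsub>G m\<^esub>)))"
    unfolding comm using cF1 cF2b cF3 cF4 prod by (simp add: G_m_assoc G_m_closed)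
  also have "\<dots> = g \<otimes>\<^bsub>G n\<^esub> opl K ?q y \<one>\<^bsub>G ?q\<^esub> \<otimes>\<^bsub>G n\<^esub> opl r ?Z \<one>\<^bsub>G r\<^esub> ?ibq
      \<otimes>\<^bsub>G n\<^esub> opl (r + ?q) m (opl r ?q \<one>\<^bsub>G r\<^esub> c) \<one>\<^bsub>G m\<^esub>"
    unfolding F6 using g cF4 cF5 cF6 by (simp add: G_m_assoc G_m_closed)
  finally show ?thesis .
qed



section \<open>The summands indexed by \<open>G\<^sub>n / G\<^sub>n\<^sub>-\<^sub>m\<close>\<close>

definition shift_braid :: "nat \<Rightarrow> nat \<Rightarrow> nat \<Rightarrow> 'g" where
  "shift_braid n m q = opl (n - q - m) (m + q) \<one>\<^bsub>G (n - q - m)\<^esub> (inv\<^bsub>G (m + q)\<^esub> b m q)"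

text \<open>
  For a basis element \<open>z = (g, y G\<^sub>r)\<close> of the \<open>Hom(m,-)\<close> complex in degree \<open>q - 1\<close>,
  \<open>summand_coord n m q s z u\<close> says that \<open>z\<close> lies in the summand indexed by the coset of \<open>s\<close>,
  with coordinate \<open>u \<in> G\<^sub>n\<^sub>-\<^sub>m\<close>; the coordinate is only determined up to \<open>G\<^sub>r\<close>.
\<close>

definition summand_coord :: "nat \<Rightarrow> nat \<Rightarrow> nat \<Rightarrow> 'g \<Rightarrow> 'g \<times> 'g set \<Rightarrow> 'g \<Rightarrow> bool" where
  "summand_coord n m q s z u = (u \<in> carrier (G (n - m)) \<and> (\<exists>y\<in>snd z.
      fst z \<otimes>\<^bsub>G n\<^esub> opl (n - q) q y \<one>\<^bsub>G q\<^esub> \<otimes>\<^bsub>G n\<^esub> shift_braid n m q = s \<otimes>\<^bsub>G n\<^esub> opl (n - m) m u \<one>\<^bsub>G m\<^esub>))"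

definition in_summand :: "nat \<Rightarrow> nat \<Rightarrow> nat \<Rightarrow> 'g \<Rightarrow> 'g \<times> 'g set \<Rightarrow> bool" where
  "in_summand n m q s z = (s \<in> carrier (G n) \<and> (\<exists>u. summand_coord n m q s z u))"

definition some_summand_coord :: "nat \<Rightarrow> nat \<Rightarrow> nat \<Rightarrow> 'g \<Rightarrow> 'g \<times> 'g set \<Rightarrow> 'g" where
  "some_summand_coord n m q s z = (SOME u. summand_coord n m q s z u)"

definition summand_rep :: "nat \<Rightarrow> nat \<Rightarrow> nat \<Rightarrow> 'g \<times> 'g set \<Rightarrow> 'g" where
  "summand_rep n m q z = (SOME s. in_summand n m q s z)"

definition summand_proj :: "nat \<Rightarrow> nat \<Rightarrow> nat \<Rightarrow> 'g \<Rightarrow> 'g \<times> 'g set \<Rightarrow> 'g \<times> 'g set \<Rightarrow> 'r::comm_ring_1" where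
  "summand_proj n m q s z = (if in_summand n m q s z then delta (some_summand_coord n m q s z, carrier (G (n - m - q))) else (\<lambda>_. 0))"

definition summand_incl :: "nat \<Rightarrow> nat \<Rightarrow> nat \<Rightarrow> 'g \<Rightarrow> 'g \<times> 'g set \<Rightarrow> 'g \<times> 'g set \<Rightarrow> 'r::comm_ring_1" where
  "summand_incl n m q s z = delta (s \<otimes>\<^bsub>G n\<^esub> opl (n - m) m (fst z) \<one>\<^bsub>G m\<^esub> \<otimes>\<^bsub>G n\<^esub> inv\<^bsub>G n\<^esub> (shift_braid n m q), stab G opl m (n - q))"

lemma shift_braid_eq: "n = r + m + q \<Longrightarrow> shift_braid n m q = opl r (m + q) \<one>\<^bsub>G r\<^esub> (inv\<^bsub>G (m + q)\<^esub> b m q)"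
  unfolding shift_braid_def by simp

lemma shift_braid_closed: "n = r + m + q \<Longrightarrow> shift_braid n m q \<in> carrier (G n)"
  using braid_closed[of m q] by (simp add: shift_braid_eq opl_closed_eq G_one_closed G_inv_closed)

lemma stab_shift_braid_comm: "n = r + m + q \<Longrightarrow> w \<in> carrier (G r) \<Longrightarrow>
  opl (r + m) q (opl r m w \<one>\<^bsub>G m\<^esub>) \<one>\<^bsub>G q\<^esub> \<otimes>\<^bsub>G n\<^esub> shift_braid n m q
  = shift_braid n m q \<otimes>\<^bsub>G n\<^esub> opl (r + q) m (opl r q w \<one>\<^bsub>G q\<^esub>) \<one>\<^bsub>G m\<^esub>"
proof -
  assume n: "n = r + m + q" and w: "w \<in> carrier (G r)"
  have ib: "inv\<^bsub>G (m + q)\<^esub> b m q \<in> carrier (G (m+q))" using braid_closed[of m q] by (simp add: G_inv_closed)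
  have e1: "opl (r + m) q (opl r m w \<one>\<^bsub>G m\<^esub>) \<one>\<^bsub>G q\<^esub> = opl r (m+q) w \<one>\<^bsub>G (m+q)\<^esub>"
    using w by (subst opl_assoc_eq[of w r _ m _ q]) (auto simp: G_one_closed opl_one)
  have e2: "opl (r + q) m (opl r q w \<one>\<^bsub>G q\<^esub>) \<one>\<^bsub>G m\<^esub> = opl r (m+q) w \<one>\<^bsub>G (m+q)\<^esub>"
    using w by (subst opl_assoc_eq[of w r _ q _ m]) (auto simp: G_one_closed opl_one add.commute)
  show ?thesis unfolding e1 e2 shift_braid_eq[OF n] using n w ib
    by (simp add: opl_mult_eq G_one_closed G_l_one G_r_one)
qed

lemma inv_shift_braid_stab_comm:
  assumes n: "n = r + m + q" and h: "h \<in> carrier (G r)"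
  shows "inv\<^bsub>G n\<^esub> shift_braid n m q \<otimes>\<^bsub>G n\<^esub> opl (r + m) q (opl r m h \<one>\<^bsub>G m\<^esub>) \<one>\<^bsub>G q\<^esub>
       = opl (r + q) m (opl r q h \<one>\<^bsub>G q\<^esub>) \<one>\<^bsub>G m\<^esub> \<otimes>\<^bsub>G n\<^esub> inv\<^bsub>G n\<^esub> shift_braid n m q"
proof -
  have bc: "shift_braid n m q \<in> carrier (G n)" using shift_braid_closed[OF n] .
  have ibc: "inv\<^bsub>G n\<^esub> shift_braid n m q \<in> carrier (G n)" using bc by (rule G_inv_closed)
  have c1: "opl (r + m) q (opl r m h \<one>\<^bsub>G m\<^esub>) \<one>\<^bsub>G q\<^esub> \<in> carrier (G n)"
    and c2: "opl (r + q) m (opl r q h \<one>\<^bsub>G q\<^esub>) \<one>\<^bsub>G m\<^esub> \<in> carrier (G n)"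
    using n h by (simp_all add: opl_closed_eq G_one_closed)
  have "inv\<^bsub>G n\<^esub> shift_braid n m q \<otimes>\<^bsub>G n\<^esub> opl (r + m) q (opl r m h \<one>\<^bsub>G m\<^esub>) \<one>\<^bsub>G q\<^esub>
     = inv\<^bsub>G n\<^esub> shift_braid n m q \<otimes>\<^bsub>G n\<^esub> (opl (r + m) q (opl r m h \<one>\<^bsub>G m\<^esub>) \<one>\<^bsub>G q\<^esub> \<otimes>\<^bsub>G n\<^esub> shift_braid n m q) \<otimes>\<^bsub>G n\<^esub> inv\<^bsub>G n\<^esub> shift_braid n m q"
    using bc ibc c1 by (simp add: G_m_assoc G_m_closed G_r_inv G_r_one)
  also have "\<dots> = opl (r + q) m (opl r q h \<one>\<^bsub>G q\<^esub>) \<one>\<^bsub>G m\<^esub> \<otimes>\<^bsub>G n\<^esub> inv\<^bsub>G n\<^esub> shift_braid n m q"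
    unfolding stab_shift_braid_comm[OF n h] using bc ibc c2 by (simp add: G_m_assoc[symmetric] G_l_inv G_l_one G_m_closed)
  finally show ?thesis .
qed

lemma Cbasis_memD: "z \<in> Cbasis G opl m n q \<Longrightarrow> q \<le> n \<and> m \<le> n - q \<and> fst z \<in> carrier (G n) \<and>
   (\<exists>a\<in>carrier (G (n - q)). snd z = l_coset (G (n - q)) a (stab G opl m (n - q)))"
  unfolding Cbasis_def using UG_Hom_memD by (auto split: if_splits)

lemma stab_emb_mult_eq: "N = k + m \<Longrightarrow> w \<in> carrier (G k) \<Longrightarrow> h \<in> carrier (G k) \<Longrightarrow>
  opl k m w \<one>\<^bsub>G m\<^esub> \<otimes>\<^bsub>G N\<^esub> opl k m h \<one>\<^bsub>G m\<^esub> = opl k m (w \<otimes>\<^bsub>G k\<^esub> h) \<one>\<^bsub>G m\<^esub>"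
  using stab_emb_mult by simp

lemma stab_emb_closed: "N = k + m \<Longrightarrow> w \<in> carrier (G k) \<Longrightarrow> opl k m w \<one>\<^bsub>G m\<^esub> \<in> carrier (G N)"
  by (simp add: opl_closed_eq G_one_closed)

lemma stab_emb_inj: "w \<in> carrier (G k) \<Longrightarrow> h \<in> carrier (G k) \<Longrightarrow>
  opl k m w \<one>\<^bsub>G m\<^esub> = opl k m h \<one>\<^bsub>G m\<^esub> \<Longrightarrow> w = h"
  using opl_inj G_one_closed by blast

lemma summand_coord_stab_shift: "n = r + m + q \<Longrightarrow> g \<in> carrier (G n) \<Longrightarrow> y1 \<in> carrier (G (r + m)) \<Longrightarrow> w \<in> carrier (G r) \<Longrightarrow>
  g \<otimes>\<^bsub>G n\<^esub> opl (r + m) q (y1 \<otimes>\<^bsub>G (r+m)\<^esub> opl r m w \<one>\<^bsub>G m\<^esub>) \<one>\<^bsub>G q\<^esub> \<otimes>\<^bsub>G n\<^esub> shift_braid n m q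
  = g \<otimes>\<^bsub>G n\<^esub> opl (r + m) q y1 \<one>\<^bsub>G q\<^esub> \<otimes>\<^bsub>G n\<^esub> shift_braid n m q \<otimes>\<^bsub>G n\<^esub> opl (r + q) m (opl r q w \<one>\<^bsub>G q\<^esub>) \<one>\<^bsub>G m\<^esub>"
proof -
  assume n: "n = r + m + q" and g: "g \<in> carrier (G n)" and y1: "y1 \<in> carrier (G (r + m))" and w: "w \<in> carrier (G r)"
  have c1: "opl (r + m) q y1 \<one>\<^bsub>G q\<^esub> \<in> carrier (G n)" using n y1 by (simp add: opl_closed_eq G_one_closed)
  have c2: "opl (r + m) q (opl r m w \<one>\<^bsub>G m\<^esub>) \<one>\<^bsub>G q\<^esub> \<in> carrier (G n)" using n w by (simp add: opl_closed_eq G_one_closed)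
  have c3: "opl (r + q) m (opl r q w \<one>\<^bsub>G q\<^esub>) \<one>\<^bsub>G m\<^esub> \<in> carrier (G n)" using n w by (simp add: opl_closed_eq G_one_closed)
  have bc: "shift_braid n m q \<in> carrier (G n)" using n by (rule shift_braid_closed)
  have wm: "opl r m w \<one>\<^bsub>G m\<^esub> \<in> carrier (G (r+m))" using w by (simp add: opl_closed_eq G_one_closed)
  have "opl (r + m) q (y1 \<otimes>\<^bsub>G (r+m)\<^esub> opl r m w \<one>\<^bsub>G m\<^esub>) \<one>\<^bsub>G q\<^esub>
     = opl (r + m) q y1 \<one>\<^bsub>G q\<^esub> \<otimes>\<^bsub>G n\<^esub> opl (r + m) q (opl r m w \<one>\<^bsub>G m\<^esub>) \<one>\<^bsub>G q\<^esub>"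
    using n y1 wm by (subst opl_mult_eq[of n "r+m" q]) (auto simp: G_one_closed G_l_one)
  then have "g \<otimes>\<^bsub>G n\<^esub> opl (r + m) q (y1 \<otimes>\<^bsub>G (r+m)\<^esub> opl r m w \<one>\<^bsub>G m\<^esub>) \<one>\<^bsub>G q\<^esub> \<otimes>\<^bsub>G n\<^esub> shift_braid n m q
     = g \<otimes>\<^bsub>G n\<^esub> (opl (r + m) q y1 \<one>\<^bsub>G q\<^esub> \<otimes>\<^bsub>G n\<^esub> (opl (r + m) q (opl r m w \<one>\<^bsub>G m\<^esub>) \<one>\<^bsub>G q\<^esub> \<otimes>\<^bsub>G n\<^esub> shift_braid n m q))"
    using g c1 c2 bc by (simp add: G_m_assoc G_m_closed)
  also have "\<dots> = g \<otimes>\<^bsub>G n\<^esub> (opl (r + m) q y1 \<one>\<^bsub>G q\<^esub> \<otimes>\<^bsub>G n\<^esub> (shift_braid n m q \<otimes>\<^bsub>G n\<^esub> opl (r + q) m (opl r q w \<one>\<^bsub>G q\<^esub>) \<one>\<^bsub>G m\<^esub>))"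
    using stab_shift_braid_comm[OF n w] by simp
  also have "\<dots> = g \<otimes>\<^bsub>G n\<^esub> opl (r + m) q y1 \<one>\<^bsub>G q\<^esub> \<otimes>\<^bsub>G n\<^esub> shift_braid n m q \<otimes>\<^bsub>G n\<^esub> opl (r + q) m (opl r q w \<one>\<^bsub>G q\<^esub>) \<one>\<^bsub>G m\<^esub>"
    using g c1 c3 bc by (simp add: G_m_assoc G_m_closed)
  finally show ?thesis .
qed

lemma summand_coord_iff: "n = r + m + q \<Longrightarrow> summand_coord n m q s z u = (u \<in> carrier (G (r + q)) \<and> (\<exists>y\<in>snd z.
      fst z \<otimes>\<^bsub>G n\<^esub> opl (r + m) q y \<one>\<^bsub>G q\<^esub> \<otimes>\<^bsub>G n\<^esub> shift_braid n m q = s \<otimes>\<^bsub>G n\<^esub> opl (r + q) m u \<one>\<^bsub>G m\<^esub>))"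
proof -
  assume n: "n = r + m + q"
  have 1: "n - q = r + m" "n - m = r + q" using n by auto
  show ?thesis unfolding summand_coord_def 1 ..
qed

lemma Cbasis_mem_split: "n = r + m + q \<Longrightarrow> z \<in> Cbasis G opl m n q \<Longrightarrow> fst z \<in> carrier (G n) \<and>
   (\<exists>a\<in>carrier (G (r + m)). snd z = l_coset (G (r + m)) a ((\<lambda>h. opl r m h \<one>\<^bsub>G m\<^esub>) ` carrier (G r)))"
proof -
  assume n: "n = r + m + q" and z: "z \<in> Cbasis G opl m n q"
  have 1: "n - q = r + m" using n by auto
  show ?thesis using Cbasis_memD[OF z] unfolding 1 by (simp add: stab_eq)
qed

lemma summand_coord_unique: "n = r + m + q \<Longrightarrow> z \<in> Cbasis G opl m n q \<Longrightarrow> s \<in> carrier (G n) \<Longrightarrow>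
  summand_coord n m q s z u1 \<Longrightarrow> summand_coord n m q s z u2 \<Longrightarrow> \<exists>w\<in>carrier (G r). u1 = u2 \<otimes>\<^bsub>G (r + q)\<^esub> opl r q w \<one>\<^bsub>G q\<^esub>"
proof -
  assume n: "n = r + m + q" and z: "z \<in> Cbasis G opl m n q" and s: "s \<in> carrier (G n)"
    and 1: "summand_coord n m q s z u1" and 2: "summand_coord n m q s z u2"
  obtain a where a: "a \<in> carrier (G (r + m))" "snd z = l_coset (G (r + m)) a ((\<lambda>h. opl r m h \<one>\<^bsub>G m\<^esub>) ` carrier (G r))"
    and g: "fst z \<in> carrier (G n)" using Cbasis_mem_split[OF n z] by blast
  obtain y1 where y1: "y1 \<in> snd z" "fst z \<otimes>\<^bsub>G n\<^esub> opl (r + m) q y1 \<one>\<^bsub>G q\<^esub> \<otimes>\<^bsub>G n\<^esub> shift_braid n m q = s \<otimes>\<^bsub>G n\<^esub> opl (r + q) m u1 \<one>\<^bsub>G m\<^esub>"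
    and u1: "u1 \<in> carrier (G (r + q))" using 1 unfolding summand_coord_iff[OF n] by blast
  obtain y2 where y2: "y2 \<in> snd z" "fst z \<otimes>\<^bsub>G n\<^esub> opl (r + m) q y2 \<one>\<^bsub>G q\<^esub> \<otimes>\<^bsub>G n\<^esub> shift_braid n m q = s \<otimes>\<^bsub>G n\<^esub> opl (r + q) m u2 \<one>\<^bsub>G m\<^esub>"
    and u2: "u2 \<in> carrier (G (r + q))" using 2 unfolding summand_coord_iff[OF n] by blast
  obtain w where w: "w \<in> carrier (G r)" "y1 = y2 \<otimes>\<^bsub>G (r + m)\<^esub> opl r m w \<one>\<^bsub>G m\<^esub>"
    using l_coset_stab_same[of "r + m" r m a y1 y2] a y1(1) y2(1) by auto
  have y2c: "y2 \<in> carrier (G (r + m))" using l_coset_stab_subset[of "r+m" r m a] a y2(1) by auto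
  have wq: "opl r q w \<one>\<^bsub>G q\<^esub> \<in> carrier (G (r + q))" using w by (simp add: opl_closed_eq G_one_closed)
  have "s \<otimes>\<^bsub>G n\<^esub> opl (r + q) m u1 \<one>\<^bsub>G m\<^esub> = fst z \<otimes>\<^bsub>G n\<^esub> opl (r + m) q y1 \<one>\<^bsub>G q\<^esub> \<otimes>\<^bsub>G n\<^esub> shift_braid n m q"
    using y1(2) by simp
  also have "\<dots> = fst z \<otimes>\<^bsub>G n\<^esub> opl (r + m) q y2 \<one>\<^bsub>G q\<^esub> \<otimes>\<^bsub>G n\<^esub> shift_braid n m q \<otimes>\<^bsub>G n\<^esub> opl (r + q) m (opl r q w \<one>\<^bsub>G q\<^esub>) \<one>\<^bsub>G m\<^esub>"
    unfolding w(2) by (rule summand_coord_stab_shift[OF n g y2c w(1)])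
  also have "\<dots> = s \<otimes>\<^bsub>G n\<^esub> opl (r + q) m u2 \<one>\<^bsub>G m\<^esub> \<otimes>\<^bsub>G n\<^esub> opl (r + q) m (opl r q w \<one>\<^bsub>G q\<^esub>) \<one>\<^bsub>G m\<^esub>"
    unfolding y2(2) ..
  also have "\<dots> = s \<otimes>\<^bsub>G n\<^esub> opl (r + q) m (u2 \<otimes>\<^bsub>G (r + q)\<^esub> opl r q w \<one>\<^bsub>G q\<^esub>) \<one>\<^bsub>G m\<^esub>"
    using n s u2 wq by (simp add: G_m_assoc stab_emb_closed stab_emb_mult_eq)
  finally have eq: "s \<otimes>\<^bsub>G n\<^esub> opl (r + q) m u1 \<one>\<^bsub>G m\<^esub> = s \<otimes>\<^bsub>G n\<^esub> opl (r + q) m (u2 \<otimes>\<^bsub>G (r + q)\<^esub> opl r q w \<one>\<^bsub>G q\<^esub>) \<one>\<^bsub>G m\<^esub>" .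
  have uw: "u2 \<otimes>\<^bsub>G (r + q)\<^esub> opl r q w \<one>\<^bsub>G q\<^esub> \<in> carrier (G (r + q))" using u2 wq by (rule G_m_closed)
  have "opl (r + q) m u1 \<one>\<^bsub>G m\<^esub> = opl (r + q) m (u2 \<otimes>\<^bsub>G (r + q)\<^esub> opl r q w \<one>\<^bsub>G q\<^esub>) \<one>\<^bsub>G m\<^esub>"
    using eq G_l_cancel[OF s stab_emb_closed[of n "r+q" m, OF _ u1] stab_emb_closed[of n "r+q" m, OF _ uw]] n by simp
  then have "u1 = u2 \<otimes>\<^bsub>G (r + q)\<^esub> opl r q w \<one>\<^bsub>G q\<^esub>" using stab_emb_inj[OF u1 uw] by blast
  then show ?thesis using w by blast
qed

lemma summand_coord_any_rep: "n = r + m + q \<Longrightarrow> z \<in> Cbasis G opl m n q \<Longrightarrow> s \<in> carrier (G n) \<Longrightarrow>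
  summand_coord n m q s z u1 \<Longrightarrow> y \<in> snd z \<Longrightarrow> \<exists>u\<in>carrier (G (r + q)).
   fst z \<otimes>\<^bsub>G n\<^esub> opl (r + m) q y \<one>\<^bsub>G q\<^esub> \<otimes>\<^bsub>G n\<^esub> shift_braid n m q = s \<otimes>\<^bsub>G n\<^esub> opl (r + q) m u \<one>\<^bsub>G m\<^esub>"
proof -
  assume n: "n = r + m + q" and z: "z \<in> Cbasis G opl m n q" and s: "s \<in> carrier (G n)"
    and 1: "summand_coord n m q s z u1" and y: "y \<in> snd z"
  obtain a where a: "a \<in> carrier (G (r + m))" "snd z = l_coset (G (r + m)) a ((\<lambda>h. opl r m h \<one>\<^bsub>G m\<^esub>) ` carrier (G r))"
    and g: "fst z \<in> carrier (G n)" using Cbasis_mem_split[OF n z] by blast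
  obtain y1 where y1: "y1 \<in> snd z" "fst z \<otimes>\<^bsub>G n\<^esub> opl (r + m) q y1 \<one>\<^bsub>G q\<^esub> \<otimes>\<^bsub>G n\<^esub> shift_braid n m q = s \<otimes>\<^bsub>G n\<^esub> opl (r + q) m u1 \<one>\<^bsub>G m\<^esub>"
    and u1: "u1 \<in> carrier (G (r + q))" using 1 unfolding summand_coord_iff[OF n] by blast
  obtain w where w: "w \<in> carrier (G r)" "y = y1 \<otimes>\<^bsub>G (r + m)\<^esub> opl r m w \<one>\<^bsub>G m\<^esub>"
    using l_coset_stab_same[of "r + m" r m a y y1] a y1(1) y by auto
  have y1c: "y1 \<in> carrier (G (r + m))" using l_coset_stab_subset[of "r+m" r m a] a y1(1) by auto
  have wq: "opl r q w \<one>\<^bsub>G q\<^esub> \<in> carrier (G (r + q))" using w by (simp add: opl_closed_eq G_one_closed)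
  have "fst z \<otimes>\<^bsub>G n\<^esub> opl (r + m) q y \<one>\<^bsub>G q\<^esub> \<otimes>\<^bsub>G n\<^esub> shift_braid n m q
      = fst z \<otimes>\<^bsub>G n\<^esub> opl (r + m) q y1 \<one>\<^bsub>G q\<^esub> \<otimes>\<^bsub>G n\<^esub> shift_braid n m q \<otimes>\<^bsub>G n\<^esub> opl (r + q) m (opl r q w \<one>\<^bsub>G q\<^esub>) \<one>\<^bsub>G m\<^esub>"
    unfolding w(2) by (rule summand_coord_stab_shift[OF n g y1c w(1)])
  also have "\<dots> = s \<otimes>\<^bsub>G n\<^esub> opl (r + q) m u1 \<one>\<^bsub>G m\<^esub> \<otimes>\<^bsub>G n\<^esub> opl (r + q) m (opl r q w \<one>\<^bsub>G q\<^esub>) \<one>\<^bsub>G m\<^esub>"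
    unfolding y1(2) ..
  also have "\<dots> = s \<otimes>\<^bsub>G n\<^esub> opl (r + q) m (u1 \<otimes>\<^bsub>G (r + q)\<^esub> opl r q w \<one>\<^bsub>G q\<^esub>) \<one>\<^bsub>G m\<^esub>"
    using n s u1 wq by (simp add: G_m_assoc stab_emb_closed stab_emb_mult_eq)
  finally show ?thesis using u1 wq by (blast intro: G_m_closed)
qed

lemma in_summand_iff_coset: "n = r + m + q \<Longrightarrow> z \<in> Cbasis G opl m n q \<Longrightarrow> in_summand n m q s z \<Longrightarrow>
  in_summand n m q t z \<longleftrightarrow> t \<in> l_coset (G n) s ((\<lambda>h. opl (r + q) m h \<one>\<^bsub>G m\<^esub>) ` carrier (G (r + q)))"
proof
  assume n: "n = r + m + q" and z: "z \<in> Cbasis G opl m n q" and s: "in_summand n m q s z"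
  have sc: "s \<in> carrier (G n)" using s unfolding in_summand_def by blast
  obtain u1 where u1: "summand_coord n m q s z u1" using s unfolding in_summand_def by blast
  {
    assume t: "in_summand n m q t z"
    have tc: "t \<in> carrier (G n)" using t unfolding in_summand_def by blast
    obtain u2 y2 where y2: "y2 \<in> snd z" "fst z \<otimes>\<^bsub>G n\<^esub> opl (r + m) q y2 \<one>\<^bsub>G q\<^esub> \<otimes>\<^bsub>G n\<^esub> shift_braid n m q = t \<otimes>\<^bsub>G n\<^esub> opl (r + q) m u2 \<one>\<^bsub>G m\<^esub>"
      and u2: "u2 \<in> carrier (G (r + q))" using t unfolding in_summand_def summand_coord_iff[OF n] by blast
    obtain u where u: "u \<in> carrier (G (r + q))" "fst z \<otimes>\<^bsub>G n\<^esub> opl (r + m) q y2 \<one>\<^bsub>G q\<^esub> \<otimes>\<^bsub>G n\<^esub> shift_braid n m q = s \<otimes>\<^bsub>G n\<^esub> opl (r + q) m u \<one>\<^bsub>G m\<^esub>"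
      using summand_coord_any_rep[OF n z sc u1 y2(1)] by blast
    have iu2: "inv\<^bsub>G (r+q)\<^esub> u2 \<in> carrier (G (r + q))" using u2 by (rule G_inv_closed)
    have e: "t \<otimes>\<^bsub>G n\<^esub> opl (r + q) m u2 \<one>\<^bsub>G m\<^esub> = s \<otimes>\<^bsub>G n\<^esub> opl (r + q) m u \<one>\<^bsub>G m\<^esub>" using u(2) y2(2) by simp
    have "t = t \<otimes>\<^bsub>G n\<^esub> opl (r + q) m u2 \<one>\<^bsub>G m\<^esub> \<otimes>\<^bsub>G n\<^esub> opl (r + q) m (inv\<^bsub>G (r+q)\<^esub> u2) \<one>\<^bsub>G m\<^esub>"
      using n tc u2 iu2 by (simp add: G_m_assoc stab_emb_closed stab_emb_mult_eq G_r_inv opl_one_eq[of n] G_r_one)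
    also have "\<dots> = s \<otimes>\<^bsub>G n\<^esub> opl (r + q) m (u \<otimes>\<^bsub>G (r+q)\<^esub> inv\<^bsub>G (r+q)\<^esub> u2) \<one>\<^bsub>G m\<^esub>"
      unfolding e using n sc u iu2 by (simp add: G_m_assoc stab_emb_closed stab_emb_mult_eq)
    finally have "t \<in> l_coset (G n) s ((\<lambda>h. opl (r + q) m h \<one>\<^bsub>G m\<^esub>) ` carrier (G (r + q)))"
      unfolding l_coset_stab_eq_image using u iu2 by (blast intro: G_m_closed)
  }
  then show "in_summand n m q t z \<Longrightarrow> t \<in> l_coset (G n) s ((\<lambda>h. opl (r + q) m h \<one>\<^bsub>G m\<^esub>) ` carrier (G (r + q)))" .
next
  assume n: "n = r + m + q" and z: "z \<in> Cbasis G opl m n q" and s: "in_summand n m q s z"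
    and t: "t \<in> l_coset (G n) s ((\<lambda>h. opl (r + q) m h \<one>\<^bsub>G m\<^esub>) ` carrier (G (r + q)))"
  have sc: "s \<in> carrier (G n)" using s unfolding in_summand_def by blast
  obtain v where v: "v \<in> carrier (G (r + q))" "t = s \<otimes>\<^bsub>G n\<^esub> opl (r + q) m v \<one>\<^bsub>G m\<^esub>" using l_coset_stab_memD[OF t] by blast
  obtain u1 y1 where y1: "y1 \<in> snd z" "fst z \<otimes>\<^bsub>G n\<^esub> opl (r + m) q y1 \<one>\<^bsub>G q\<^esub> \<otimes>\<^bsub>G n\<^esub> shift_braid n m q = s \<otimes>\<^bsub>G n\<^esub> opl (r + q) m u1 \<one>\<^bsub>G m\<^esub>"
    and u1: "u1 \<in> carrier (G (r + q))" using s unfolding in_summand_def summand_coord_iff[OF n] by blast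
  have iv: "inv\<^bsub>G (r+q)\<^esub> v \<in> carrier (G (r + q))" using v by (simp add: G_inv_closed)
  have tc: "t \<in> carrier (G n)" using v n sc by (simp add: G_m_closed stab_emb_closed)
  have "s \<otimes>\<^bsub>G n\<^esub> opl (r + q) m u1 \<one>\<^bsub>G m\<^esub> = t \<otimes>\<^bsub>G n\<^esub> opl (r + q) m (inv\<^bsub>G (r+q)\<^esub> v \<otimes>\<^bsub>G (r+q)\<^esub> u1) \<one>\<^bsub>G m\<^esub>"
    unfolding v(2) using n sc v(1) iv u1 by (simp add: G_m_assoc stab_emb_closed stab_emb_mult_eq G_m_closed G_cancel_inv)
  then have "summand_coord n m q t z (inv\<^bsub>G (r+q)\<^esub> v \<otimes>\<^bsub>G (r+q)\<^esub> u1)" unfolding summand_coord_iff[OF n] using y1 iv u1 by (auto intro: G_m_closed)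
  then show "in_summand n m q t z" unfolding in_summand_def using tc by blast
qed

lemma in_summand_exists: "n = r + m + q \<Longrightarrow> z \<in> Cbasis G opl m n q \<Longrightarrow> \<exists>s. in_summand n m q s z"
proof -
  assume n: "n = r + m + q" and z: "z \<in> Cbasis G opl m n q"
  obtain a where a: "a \<in> carrier (G (r + m))" "snd z = l_coset (G (r + m)) a ((\<lambda>h. opl r m h \<one>\<^bsub>G m\<^esub>) ` carrier (G r))"
    and g: "fst z \<in> carrier (G n)" using Cbasis_mem_split[OF n z] by blast
  have ay: "a \<in> snd z" using a l_coset_stab_self[of "r+m" r m a] by simp
  let ?t = "fst z \<otimes>\<^bsub>G n\<^esub> opl (r + m) q a \<one>\<^bsub>G q\<^esub> \<otimes>\<^bsub>G n\<^esub> shift_braid n m q"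
  have tc: "?t \<in> carrier (G n)" using n g a shift_braid_closed[OF n] by (simp add: G_m_closed opl_closed_eq G_one_closed)
  have "?t = ?t \<otimes>\<^bsub>G n\<^esub> opl (r + q) m \<one>\<^bsub>G (r+q)\<^esub> \<one>\<^bsub>G m\<^esub>" using n tc by (simp add: opl_one_eq[of n] G_r_one)
  then have "summand_coord n m q ?t z \<one>\<^bsub>G (r+q)\<^esub>" unfolding summand_coord_iff[OF n] using ay G_one_closed by blast
  then show ?thesis unfolding in_summand_def using tc by blast
qed

lemma in_summand_rep: "n = r + m + q \<Longrightarrow> z \<in> Cbasis G opl m n q \<Longrightarrow> in_summand n m q (summand_rep n m q z) z"
  unfolding summand_rep_def using in_summand_exists by (metis someI_ex)

lemma summand_rep_eq: "n = r + m + q \<Longrightarrow> z \<in> Cbasis G opl m n q \<Longrightarrow> z' \<in> Cbasis G opl m n q \<Longrightarrow>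
  in_summand n m q s z \<Longrightarrow> in_summand n m q s z' \<Longrightarrow> summand_rep n m q z = summand_rep n m q z'"
proof -
  assume n: "n = r + m + q" and z: "z \<in> Cbasis G opl m n q" and z': "z' \<in> Cbasis G opl m n q"
    and s: "in_summand n m q s z" and s': "in_summand n m q s z'"
  have "(\<lambda>t. in_summand n m q t z) = (\<lambda>t. in_summand n m q t z')"
    using in_summand_iff_coset[OF n z s] in_summand_iff_coset[OF n z' s'] by auto
  then show ?thesis unfolding summand_rep_def by simp
qed

lemma some_summand_coord_prop: "in_summand n m q s z \<Longrightarrow> summand_coord n m q s z (some_summand_coord n m q s z)"
  unfolding in_summand_def some_summand_coord_def by (metis someI_ex)

lemma UG_comp_aut: "m' \<le> K \<Longrightarrow> h \<in> carrier (G K) \<Longrightarrow> y0 \<in> carrier (G K) \<Longrightarrow>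
  UG_comp G opl m' K K (UG_coset G opl K K h) (l_coset (G K) y0 (stab G opl m' K))
  = l_coset (G K) (h \<otimes>\<^bsub>G K\<^esub> y0) (stab G opl m' K)"
proof -
  assume mK: "m' \<le> K" and h: "h \<in> carrier (G K)" and y0: "y0 \<in> carrier (G K)"
  have "UG_comp G opl m' K K (l_coset (G K) h (stab G opl K K)) (l_coset (G K) y0 (stab G opl m' K))
     = l_coset (G K) (h \<otimes>\<^bsub>G K\<^esub> opl 0 K \<one>\<^bsub>G 0\<^esub> y0) (stab G opl m' K)"
    using mK h y0 by (intro UG_comp_cosets[of K 0 K "K - m'" m']) auto
  then show ?thesis unfolding UG_coset_def using y0 by (simp add: unit_left)
qed

lemma Crel_generator: "q' \<le> n \<Longrightarrow> m' \<le> n - q' \<Longrightarrow> g \<in> carrier (G n) \<Longrightarrow> h \<in> carrier (G (n - q')) \<Longrightarrow> y0 \<in> carrier (G (n - q')) \<Longrightarrow>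
  (\<lambda>y. delta (g \<otimes>\<^bsub>G n\<^esub> opl (n - q') q' h \<one>\<^bsub>G q'\<^esub>, l_coset (G (n - q')) y0 (stab G opl m' (n - q'))) y
     - delta (g, l_coset (G (n - q')) (h \<otimes>\<^bsub>G (n - q')\<^esub> y0) (stab G opl m' (n - q'))) y) \<in> Crel R G opl m' n q'"
proof -
  assume q: "q' \<le> n" and m: "m' \<le> n - q'" and g: "g \<in> carrier (G n)" and h: "h \<in> carrier (G (n - q'))"
    and y0: "y0 \<in> carrier (G (n - q'))"
  have x: "l_coset (G (n - q')) y0 (stab G opl m' (n - q')) \<in> UG_Hom G opl m' (n - q')"
    unfolding UG_Hom_def UG_coset_def using m y0 by auto
  show ?thesis unfolding Crel_def UG_comp_aut[OF m h y0, symmetric]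
    by (rule lin_span_superset, rule CollectI, intro exI conjI) (rule refl, use q g h x in auto)
qed

lemma Crel_generator_Hom0: "q' \<le> n' \<Longrightarrow> g \<in> carrier (G n') \<Longrightarrow> h \<in> carrier (G (n' - q')) \<Longrightarrow>
  (\<lambda>y. delta (g \<otimes>\<^bsub>G n'\<^esub> opl (n' - q') q' h \<one>\<^bsub>G q'\<^esub>, carrier (G (n' - q'))) y
     - delta (g, carrier (G (n' - q'))) y) \<in> Crel R G opl 0 n' q'"
proof -
  assume q: "q' \<le> n'" and g: "g \<in> carrier (G n')" and h: "h \<in> carrier (G (n' - q'))"
  have "(\<lambda>y. delta (g \<otimes>\<^bsub>G n'\<^esub> opl (n' - q') q' h \<one>\<^bsub>G q'\<^esub>, l_coset (G (n' - q')) \<one>\<^bsub>G (n' - q')\<^esub> (stab G opl 0 (n' - q'))) y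
     - delta (g, l_coset (G (n' - q')) (h \<otimes>\<^bsub>G (n' - q')\<^esub> \<one>\<^bsub>G (n' - q')\<^esub>) (stab G opl 0 (n' - q'))) y) \<in> Crel R G opl 0 n' q'"
    using q g h G_one_closed by (intro Crel_generator) auto
  then show ?thesis unfolding stab_0 using h by (simp add: l_coset_carrier G_one_closed G_m_closed)
qed

lemma l_coset_one: "S \<subseteq> carrier (G N) \<Longrightarrow> l_coset (G N) \<one>\<^bsub>G N\<^esub> S = S"
  unfolding l_coset_def using G_l_one by force

lemma stab_subset: "N = k + m \<Longrightarrow> stab G opl m N \<subseteq> carrier (G N)"
  by (auto simp: stab_def intro: opl_closed_eq G_one_closed)

lemma delta_incl_proj_Crel: "n = r + m + q \<Longrightarrow> z \<in> Cbasis G opl m n q \<Longrightarrow> in_summand n m q s z \<Longrightarrow>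
  (\<lambda>y. delta z y - lin_ext (summand_incl n m q s) (summand_proj n m q s z :: _ \<Rightarrow> 'r::comm_ring_1) y) \<in> Crel R G opl m n q"
proof -
  assume n: "n = r + m + q" and z: "z \<in> Cbasis G opl m n q" and s: "in_summand n m q s z"
  have nq: "n - q = r + m" "n - m = r + q" using n by auto
  obtain a where a: "a \<in> carrier (G (r + m))" "snd z = l_coset (G (r + m)) a ((\<lambda>h. opl r m h \<one>\<^bsub>G m\<^esub>) ` carrier (G r))"
    and g: "fst z \<in> carrier (G n)" using Cbasis_mem_split[OF n z] by blast
  let ?u = "some_summand_coord n m q s z"
  obtain y where y: "y \<in> snd z" "fst z \<otimes>\<^bsub>G n\<^esub> opl (r + m) q y \<one>\<^bsub>G q\<^esub> \<otimes>\<^bsub>G n\<^esub> shift_braid n m q = s \<otimes>\<^bsub>G n\<^esub> opl (r + q) m ?u \<one>\<^bsub>G m\<^esub>"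
    using some_summand_coord_prop[OF s] unfolding summand_coord_iff[OF n] by blast
  have yc: "y \<in> carrier (G (r + m))" using l_coset_stab_subset[of "r+m" r m a] a y(1) by auto
  have st: "stab G opl m (r + m) = (\<lambda>h. opl r m h \<one>\<^bsub>G m\<^esub>) ` carrier (G r)" by (simp add: stab_eq)
  have bc: "shift_braid n m q \<in> carrier (G n)" using shift_braid_closed[OF n] .
  have yq: "opl (r + m) q y \<one>\<^bsub>G q\<^esub> \<in> carrier (G n)" using n yc by (simp add: opl_closed_eq G_one_closed)
  have e1: "s \<otimes>\<^bsub>G n\<^esub> opl (r + q) m ?u \<one>\<^bsub>G m\<^esub> \<otimes>\<^bsub>G n\<^esub> inv\<^bsub>G n\<^esub> shift_braid n m q = fst z \<otimes>\<^bsub>G n\<^esub> opl (r + m) q y \<one>\<^bsub>G q\<^esub>"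
    unfolding y(2)[symmetric] using g yq bc by (simp add: G_m_assoc G_m_closed G_r_inv G_r_one G_inv_closed)
  have TBe: "lin_ext (summand_incl n m q s) (summand_proj n m q s z :: _ \<Rightarrow> 'r) = delta (fst z \<otimes>\<^bsub>G n\<^esub> opl (r + m) q y \<one>\<^bsub>G q\<^esub>, stab G opl m (r + m))"
    using s unfolding summand_proj_def by (simp add: lin_ext_delta summand_incl_def nq e1)
  have "(\<lambda>y'. delta (fst z \<otimes>\<^bsub>G n\<^esub> opl (n - q) q y \<one>\<^bsub>G q\<^esub>, l_coset (G (n - q)) \<one>\<^bsub>G (n - q)\<^esub> (stab G opl m (n - q))) y'
     - delta (fst z, l_coset (G (n - q)) (y \<otimes>\<^bsub>G (n - q)\<^esub> \<one>\<^bsub>G (n - q)\<^esub>) (stab G opl m (n - q))) y' :: 'r) \<in> Crel R G opl m n q"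
    using n g yc G_one_closed by (intro Crel_generator) auto
  moreover have "l_coset (G (r + m)) \<one>\<^bsub>G (r + m)\<^esub> (stab G opl m (r + m)) = stab G opl m (r + m)"
    by (rule l_coset_one, rule stab_subset[of _ r]) simp
  moreover have "l_coset (G (r + m)) (y \<otimes>\<^bsub>G (r + m)\<^esub> \<one>\<^bsub>G (r + m)\<^esub>) (stab G opl m (r + m)) = snd z"
    using yc G_r_one[OF yc] unfolding st a(2) using l_coset_stab_repr[of "r+m" r m a y] a y(1) by simp
  ultimately have "(\<lambda>y'. delta (fst z \<otimes>\<^bsub>G n\<^esub> opl (r + m) q y \<one>\<^bsub>G q\<^esub>, stab G opl m (r + m)) y' - delta z y' :: 'r) \<in> Crel R G opl m n q"
    unfolding nq by simp
  then show ?thesis unfolding TBe Crel_def by (rule lin_span_diff_swap)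
qed

lemma l_coset_stab_mult_mem: "N = k0 + m \<Longrightarrow> a \<in> carrier (G N) \<Longrightarrow> h \<in> carrier (G N) \<Longrightarrow>
  y' \<in> l_coset (G N) (h \<otimes>\<^bsub>G N\<^esub> a) ((\<lambda>k. opl k0 m k \<one>\<^bsub>G m\<^esub>) ` carrier (G k0)) \<longleftrightarrow>
  (\<exists>y\<in>l_coset (G N) a ((\<lambda>k. opl k0 m k \<one>\<^bsub>G m\<^esub>) ` carrier (G k0)). y' = h \<otimes>\<^bsub>G N\<^esub> y)"
  unfolding l_coset_stab_eq_image using G_m_assoc opl_closed_eq G_one_closed by auto

lemma summand_proj_balanced:
  assumes n: "n = r + m + q" and g: "g \<in> carrier (G n)" and h: "h \<in> carrier (G (r + m))"
    and y0: "y0 \<in> carrier (G (r + m))"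
  shows "summand_proj n m q s (g \<otimes>\<^bsub>G n\<^esub> opl (r + m) q h \<one>\<^bsub>G q\<^esub>, l_coset (G (r + m)) y0 (stab G opl m (r + m)))
    = summand_proj n m q s (g, l_coset (G (r + m)) (h \<otimes>\<^bsub>G (r + m)\<^esub> y0) (stab G opl m (r + m)))"
proof -
  let ?x = "l_coset (G (r + m)) y0 (stab G opl m (r + m))"
  let ?z1 = "(g \<otimes>\<^bsub>G n\<^esub> opl (r + m) q h \<one>\<^bsub>G q\<^esub>, ?x)"
  let ?z2 = "(g, l_coset (G (r + m)) (h \<otimes>\<^bsub>G (r + m)\<^esub> y0) (stab G opl m (r + m)))"
  have st: "stab G opl m (r + m) = (\<lambda>h. opl r m h \<one>\<^bsub>G m\<^esub>) ` carrier (G r)" by (simp add: stab_eq)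
  have mulq: "\<And>y. y \<in> carrier (G (r + m)) \<Longrightarrow> g \<otimes>\<^bsub>G n\<^esub> opl (r + m) q h \<one>\<^bsub>G q\<^esub> \<otimes>\<^bsub>G n\<^esub> opl (r + m) q y \<one>\<^bsub>G q\<^esub>
     = g \<otimes>\<^bsub>G n\<^esub> opl (r + m) q (h \<otimes>\<^bsub>G (r + m)\<^esub> y) \<one>\<^bsub>G q\<^esub>"
    using n g h by (simp add: G_m_assoc opl_closed_eq G_one_closed opl_mult_eq G_l_one)
  have xs: "?x \<subseteq> carrier (G (r + m))" unfolding st using l_coset_stab_subset[of "r+m" r m y0] y0 by simp
  have "\<And>u. summand_coord n m q s ?z1 u = summand_coord n m q s ?z2 u"
    unfolding summand_coord_iff[OF n] fst_conv snd_conv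
  proof (intro iffI conjI; elim conjE bexE)
    fix u y assume u: "u \<in> carrier (G (r + q))" and y: "y \<in> ?x"
      and e: "g \<otimes>\<^bsub>G n\<^esub> opl (r + m) q h \<one>\<^bsub>G q\<^esub> \<otimes>\<^bsub>G n\<^esub> opl (r + m) q y \<one>\<^bsub>G q\<^esub> \<otimes>\<^bsub>G n\<^esub> shift_braid n m q = s \<otimes>\<^bsub>G n\<^esub> opl (r + q) m u \<one>\<^bsub>G m\<^esub>"
    show "u \<in> carrier (G (r + q))" by (rule u)
    have "h \<otimes>\<^bsub>G (r + m)\<^esub> y \<in> l_coset (G (r + m)) (h \<otimes>\<^bsub>G (r + m)\<^esub> y0) (stab G opl m (r + m))"
      unfolding st using l_coset_stab_mult_mem[of "r+m" r m y0 h] y0 h y unfolding st by auto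
    then show "\<exists>y\<in>l_coset (G (r + m)) (h \<otimes>\<^bsub>G (r + m)\<^esub> y0) (stab G opl m (r + m)).
       g \<otimes>\<^bsub>G n\<^esub> opl (r + m) q y \<one>\<^bsub>G q\<^esub> \<otimes>\<^bsub>G n\<^esub> shift_braid n m q = s \<otimes>\<^bsub>G n\<^esub> opl (r + q) m u \<one>\<^bsub>G m\<^esub>"
    proof
      have yc: "y \<in> carrier (G (r + m))" using xs y by auto
      show "g \<otimes>\<^bsub>G n\<^esub> opl (r + m) q (h \<otimes>\<^bsub>G (r + m)\<^esub> y) \<one>\<^bsub>G q\<^esub> \<otimes>\<^bsub>G n\<^esub> shift_braid n m q = s \<otimes>\<^bsub>G n\<^esub> opl (r + q) m u \<one>\<^bsub>G m\<^esub>"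
        using e mulq[OF yc] by simp
    qed
  next
    fix u y' assume u: "u \<in> carrier (G (r + q))" and y': "y' \<in> l_coset (G (r + m)) (h \<otimes>\<^bsub>G (r + m)\<^esub> y0) (stab G opl m (r + m))"
      and e: "g \<otimes>\<^bsub>G n\<^esub> opl (r + m) q y' \<one>\<^bsub>G q\<^esub> \<otimes>\<^bsub>G n\<^esub> shift_braid n m q = s \<otimes>\<^bsub>G n\<^esub> opl (r + q) m u \<one>\<^bsub>G m\<^esub>"
    show "u \<in> carrier (G (r + q))" by (rule u)
    obtain y where y: "y \<in> ?x" "y' = h \<otimes>\<^bsub>G (r + m)\<^esub> y"
      using l_coset_stab_mult_mem[of "r+m" r m y0 h y'] y0 h y' unfolding st by auto
    have yc: "y \<in> carrier (G (r + m))" using xs y by auto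
    show "\<exists>y\<in>?x. g \<otimes>\<^bsub>G n\<^esub> opl (r + m) q h \<one>\<^bsub>G q\<^esub> \<otimes>\<^bsub>G n\<^esub> opl (r + m) q y \<one>\<^bsub>G q\<^esub> \<otimes>\<^bsub>G n\<^esub> shift_braid n m q = s \<otimes>\<^bsub>G n\<^esub> opl (r + q) m u \<one>\<^bsub>G m\<^esub>"
    proof
      show "g \<otimes>\<^bsub>G n\<^esub> opl (r + m) q h \<one>\<^bsub>G q\<^esub> \<otimes>\<^bsub>G n\<^esub> opl (r + m) q y \<one>\<^bsub>G q\<^esub> \<otimes>\<^bsub>G n\<^esub> shift_braid n m q = s \<otimes>\<^bsub>G n\<^esub> opl (r + q) m u \<one>\<^bsub>G m\<^esub>"
        using e unfolding mulq[OF yc] y(2) .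
    qed (rule y(1))
  qed
  then have "summand_coord n m q s ?z1 = summand_coord n m q s ?z2" by (intro ext)
  then show ?thesis unfolding summand_proj_def in_summand_def some_summand_coord_def by (simp only:)
qed

lemma summand_proj_Crel_generator:
  fixes R :: "'r::comm_ring_1 itself"
  assumes n: "n = r + m + q" and a: "a \<in> Crel_gens R G opl m n q"
  shows "lin_ext (summand_proj n m q s) a \<in> Crel R G opl 0 (n - m) q"
proof -
  have nq: "n - q = r + m" using n by auto
  obtain g h x where a2: "a = (\<lambda>y. delta (g \<otimes>\<^bsub>G n\<^esub> opl (r + m) q h \<one>\<^bsub>G q\<^esub>, x) y
           - delta (g, UG_comp G opl m (r + m) (r + m) (UG_coset G opl (r + m) (r + m) h) x) y)"
     and g: "g \<in> carrier (G n)" and h: "h \<in> carrier (G (r + m))" and x: "x \<in> UG_Hom G opl m (r + m)"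
    using a unfolding Crel_gens_def nq by blast
  obtain y0 where y0: "y0 \<in> carrier (G (r + m))" "x = l_coset (G (r + m)) y0 (stab G opl m (r + m))"
    using UG_Hom_memD[OF x] by blast
  have "UG_comp G opl m (r + m) (r + m) (UG_coset G opl (r + m) (r + m) h) x
      = l_coset (G (r + m)) (h \<otimes>\<^bsub>G (r + m)\<^esub> y0) (stab G opl m (r + m))"
    unfolding y0(2) using h y0(1) by (intro UG_comp_aut) auto
  then have "lin_ext (summand_proj n m q s) a = (\<lambda>y. 0 :: 'r)"
    unfolding a2 lin_ext_delta_diff y0(2) summand_proj_balanced[OF n g h y0(1)] by simp
  then show ?thesis unfolding Crel_def by (simp add: lin_span_zero)
qed

lemma summand_incl_Crel_generator:
  fixes R :: "'r::comm_ring_1 itself"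
  assumes n: "n = r + m + q" and s: "s \<in> carrier (G n)" and a: "a \<in> Crel_gens R G opl 0 (n - m) q"
  shows "lin_ext (summand_incl n m q s) a \<in> Crel R G opl m n q"
proof -
  have nq: "n - m - q = r" "n - m = r + q" "n - q = r + m" "r + q - q = r" using n by auto
  obtain g h x where a2: "a = (\<lambda>y. delta (g \<otimes>\<^bsub>G (r + q)\<^esub> opl r q h \<one>\<^bsub>G q\<^esub>, x) y
           - delta (g, UG_comp G opl 0 r r (UG_coset G opl r r h) x) y)"
     and g: "g \<in> carrier (G (r + q))" and h: "h \<in> carrier (G r)" and x: "x \<in> UG_Hom G opl 0 r"
    using a unfolding Crel_gens_def nq by blast
  have bc: "shift_braid n m q \<in> carrier (G n)" using shift_braid_closed[OF n] .
  have ibc: "inv\<^bsub>G n\<^esub> shift_braid n m q \<in> carrier (G n)" using bc by (rule G_inv_closed)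
  let ?g = "s \<otimes>\<^bsub>G n\<^esub> opl (r + q) m g \<one>\<^bsub>G m\<^esub> \<otimes>\<^bsub>G n\<^esub> inv\<^bsub>G n\<^esub> shift_braid n m q"
  have gc: "?g \<in> carrier (G n)" using n s g ibc by (simp add: G_m_closed stab_emb_closed)
  have hm: "opl r m h \<one>\<^bsub>G m\<^esub> \<in> carrier (G (r + m))" using h by (simp add: opl_closed_eq G_one_closed)
  have hq: "opl r q h \<one>\<^bsub>G q\<^esub> \<in> carrier (G (r + q))" using h by (simp add: opl_closed_eq G_one_closed)
  have c1: "opl (r + m) q (opl r m h \<one>\<^bsub>G m\<^esub>) \<one>\<^bsub>G q\<^esub> \<in> carrier (G n)" using n hm by (simp add: opl_closed_eq G_one_closed)
  have c2: "opl (r + q) m (opl r q h \<one>\<^bsub>G q\<^esub>) \<one>\<^bsub>G m\<^esub> \<in> carrier (G n)" using n hq by (simp add: opl_closed_eq G_one_closed)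
  have comm: "inv\<^bsub>G n\<^esub> shift_braid n m q \<otimes>\<^bsub>G n\<^esub> opl (r + m) q (opl r m h \<one>\<^bsub>G m\<^esub>) \<one>\<^bsub>G q\<^esub>
       = opl (r + q) m (opl r q h \<one>\<^bsub>G q\<^esub>) \<one>\<^bsub>G m\<^esub> \<otimes>\<^bsub>G n\<^esub> inv\<^bsub>G n\<^esub> shift_braid n m q"
    using inv_shift_braid_stab_comm[OF n h] .
  have e1: "s \<otimes>\<^bsub>G n\<^esub> opl (r + q) m (g \<otimes>\<^bsub>G (r + q)\<^esub> opl r q h \<one>\<^bsub>G q\<^esub>) \<one>\<^bsub>G m\<^esub> \<otimes>\<^bsub>G n\<^esub> inv\<^bsub>G n\<^esub> shift_braid n m q
     = ?g \<otimes>\<^bsub>G n\<^esub> opl (r + m) q (opl r m h \<one>\<^bsub>G m\<^esub>) \<one>\<^bsub>G q\<^esub>"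
  proof -
    have "?g \<otimes>\<^bsub>G n\<^esub> opl (r + m) q (opl r m h \<one>\<^bsub>G m\<^esub>) \<one>\<^bsub>G q\<^esub>
      = s \<otimes>\<^bsub>G n\<^esub> opl (r + q) m g \<one>\<^bsub>G m\<^esub> \<otimes>\<^bsub>G n\<^esub> (inv\<^bsub>G n\<^esub> shift_braid n m q \<otimes>\<^bsub>G n\<^esub> opl (r + m) q (opl r m h \<one>\<^bsub>G m\<^esub>) \<one>\<^bsub>G q\<^esub>)"
      using n s g ibc c1 by (simp add: G_m_assoc G_m_closed stab_emb_closed)
    also have "\<dots> = s \<otimes>\<^bsub>G n\<^esub> (opl (r + q) m g \<one>\<^bsub>G m\<^esub> \<otimes>\<^bsub>G n\<^esub> opl (r + q) m (opl r q h \<one>\<^bsub>G q\<^esub>) \<one>\<^bsub>G m\<^esub>) \<otimes>\<^bsub>G n\<^esub> inv\<^bsub>G n\<^esub> shift_braid n m q"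
      unfolding comm using n s g ibc c2 by (simp add: G_m_assoc G_m_closed stab_emb_closed)
    also have "\<dots> = s \<otimes>\<^bsub>G n\<^esub> opl (r + q) m (g \<otimes>\<^bsub>G (r + q)\<^esub> opl r q h \<one>\<^bsub>G q\<^esub>) \<one>\<^bsub>G m\<^esub> \<otimes>\<^bsub>G n\<^esub> inv\<^bsub>G n\<^esub> shift_braid n m q"
      using n g hq by (simp add: stab_emb_mult_eq)
    finally show ?thesis by simp
  qed
  have x2: "x = carrier (G r)" using x UG_Hom_0 by auto
  have cpx: "UG_comp G opl 0 r r (UG_coset G opl r r h) x = x"
    using UG_comp_aut[of 0 r h "\<one>\<^bsub>G r\<^esub>"] h unfolding x2 stab_0 by (simp add: l_coset_carrier G_one_closed G_r_one)
  have "(\<lambda>y. delta (?g \<otimes>\<^bsub>G n\<^esub> opl (n - q) q (opl r m h \<one>\<^bsub>G m\<^esub>) \<one>\<^bsub>G q\<^esub>, l_coset (G (n - q)) \<one>\<^bsub>G (n - q)\<^esub> (stab G opl m (n - q))) y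
     - delta (?g, l_coset (G (n - q)) (opl r m h \<one>\<^bsub>G m\<^esub> \<otimes>\<^bsub>G (n - q)\<^esub> \<one>\<^bsub>G (n - q)\<^esub>) (stab G opl m (n - q))) y :: 'r) \<in> Crel R G opl m n q"
    using n gc hm G_one_closed by (intro Crel_generator) auto
  moreover have "l_coset (G (r + m)) \<one>\<^bsub>G (r + m)\<^esub> (stab G opl m (r + m)) = stab G opl m (r + m)"
    by (rule l_coset_one, rule stab_subset[of _ r]) simp
  moreover have "l_coset (G (r + m)) (opl r m h \<one>\<^bsub>G m\<^esub> \<otimes>\<^bsub>G (r + m)\<^esub> \<one>\<^bsub>G (r + m)\<^esub>) (stab G opl m (r + m)) = stab G opl m (r + m)"
  proof -
    have "l_coset (G (r + m)) (\<one>\<^bsub>G (r + m)\<^esub> \<otimes>\<^bsub>G (r + m)\<^esub> opl r m h \<one>\<^bsub>G m\<^esub>) ((\<lambda>h. opl r m h \<one>\<^bsub>G m\<^esub>) ` carrier (G r))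
        = l_coset (G (r + m)) \<one>\<^bsub>G (r + m)\<^esub> ((\<lambda>h. opl r m h \<one>\<^bsub>G m\<^esub>) ` carrier (G r))"
      using h G_one_closed by (intro l_coset_stab_shift) auto
    then show ?thesis using hm l_coset_one[OF stab_subset[of "r+m" r m]] by (simp add: stab_eq G_l_one G_r_one)
  qed
  ultimately have "(\<lambda>y. delta (s \<otimes>\<^bsub>G n\<^esub> opl (r + q) m (g \<otimes>\<^bsub>G (r + q)\<^esub> opl r q h \<one>\<^bsub>G q\<^esub>) \<one>\<^bsub>G m\<^esub> \<otimes>\<^bsub>G n\<^esub> inv\<^bsub>G n\<^esub> shift_braid n m q, stab G opl m (r + m)) y
     - delta (?g, stab G opl m (r + m)) y :: 'r) \<in> Crel R G opl m n q"
    unfolding nq e1 by simp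
  then show ?thesis unfolding a2 cpx lin_ext_delta_diff summand_incl_def nq fst_conv .
qed

lemma face_braid_closed: "i < Suc q0 \<Longrightarrow> opl (1 + i) (q0 - i) (b 1 i) \<one>\<^bsub>G (q0 - i)\<^esub> \<in> carrier (G (Suc q0))"
  using braid_closed[of 1 i] by (intro opl_closed_eq) (auto simp: G_one_closed)

lemma face_eq: "n = r + m + Suc q0 \<Longrightarrow> y \<in> carrier (G (r + m)) \<Longrightarrow> snd z = l_coset (G (r + m)) y (stab G opl m (r + m)) \<Longrightarrow>
  face G opl b m n (Suc q0) i z = (fst z \<otimes>\<^bsub>G n\<^esub> opl (r + m) (Suc q0) \<one>\<^bsub>G (r + m)\<^esub> (opl (1 + i) (q0 - i) (b 1 i) \<one>\<^bsub>G (q0 - i)\<^esub>),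
    l_coset (G (r + m + 1)) (opl (r + m) 1 y \<one>\<^bsub>G 1\<^esub> \<otimes>\<^bsub>G (r + m + 1)\<^esub> opl r (m + 1) \<one>\<^bsub>G r\<^esub> (inv\<^bsub>G (m + 1)\<^esub> b m 1)) (stab G opl m (r + m + 1)))"
proof -
  assume n: "n = r + m + Suc q0" and y: "y \<in> carrier (G (r + m))" and z: "snd z = l_coset (G (r + m)) y (stab G opl m (r + m))"
  have nq: "n - Suc q0 = r + m" using n by auto
  show ?thesis unfolding face_def nq z using UG_comp_face_Hom[of "r + m" r m y] y by simp
qed

lemma summand_coord_face: "n = r + m + Suc q0 \<Longrightarrow> z \<in> Cbasis G opl m n (Suc q0) \<Longrightarrow> s \<in> carrier (G n) \<Longrightarrow> y \<in> snd z \<Longrightarrow>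
  u \<in> carrier (G (r + Suc q0)) \<Longrightarrow> i < Suc q0 \<Longrightarrow>
  fst z \<otimes>\<^bsub>G n\<^esub> opl (r + m) (Suc q0) y \<one>\<^bsub>G (Suc q0)\<^esub> \<otimes>\<^bsub>G n\<^esub> shift_braid n m (Suc q0) = s \<otimes>\<^bsub>G n\<^esub> opl (r + Suc q0) m u \<one>\<^bsub>G m\<^esub> \<Longrightarrow>
  summand_coord n m q0 s (face G opl b m n (Suc q0) i z) (u \<otimes>\<^bsub>G (r + Suc q0)\<^esub> opl r (Suc q0) \<one>\<^bsub>G r\<^esub> (opl (1 + i) (q0 - i) (b 1 i) \<one>\<^bsub>G (q0 - i)\<^esub>))"
proof -
  assume n: "n = r + m + Suc q0" and z: "z \<in> Cbasis G opl m n (Suc q0)" and s: "s \<in> carrier (G n)"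
    and y: "y \<in> snd z" and u: "u \<in> carrier (G (r + Suc q0))" and i: "i < Suc q0"
    and e: "fst z \<otimes>\<^bsub>G n\<^esub> opl (r + m) (Suc q0) y \<one>\<^bsub>G (Suc q0)\<^esub> \<otimes>\<^bsub>G n\<^esub> shift_braid n m (Suc q0) = s \<otimes>\<^bsub>G n\<^esub> opl (r + Suc q0) m u \<one>\<^bsub>G m\<^esub>"
  let ?c = "opl (1 + i) (q0 - i) (b 1 i) \<one>\<^bsub>G (q0 - i)\<^esub>"
  have c: "?c \<in> carrier (G (Suc q0))" using face_braid_closed[OF i] .
  obtain a where a: "a \<in> carrier (G (r + m))" "snd z = l_coset (G (r + m)) a ((\<lambda>h. opl r m h \<one>\<^bsub>G m\<^esub>) ` carrier (G r))"
    and g: "fst z \<in> carrier (G n)" using Cbasis_mem_split[OF n z] by blast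
  have st: "stab G opl m (r + m) = (\<lambda>h. opl r m h \<one>\<^bsub>G m\<^esub>) ` carrier (G r)" by (simp add: stab_eq)
  have yc: "y \<in> carrier (G (r + m))" using l_coset_stab_subset[of "r+m" r m a] a y by auto
  have zy: "snd z = l_coset (G (r + m)) y (stab G opl m (r + m))" unfolding st a(2)
    using l_coset_stab_repr[of "r+m" r m a y] a y by simp
  let ?y2 = "opl (r + m) 1 y \<one>\<^bsub>G 1\<^esub> \<otimes>\<^bsub>G (r + m + 1)\<^esub> opl r (m + 1) \<one>\<^bsub>G r\<^esub> (inv\<^bsub>G (m + 1)\<^esub> b m 1)"
  have y2c: "?y2 \<in> carrier (G (r + m + 1))" using yc braid_closed[of m 1] by (auto intro!: G_m_closed opl_closed_eq G_one_closed G_inv_closed)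
  have st2: "stab G opl m (r + m + 1) = (\<lambda>h. opl (r + 1) m h \<one>\<^bsub>G m\<^esub>) ` carrier (G (r + 1))" by (simp add: stab_eq)
  have y2m: "?y2 \<in> l_coset (G (r + m + 1)) ?y2 (stab G opl m (r + m + 1))"
    unfolding st2 using l_coset_stab_self[of "r + m + 1" "r + 1" m ?y2] y2c by simp
  have fz: "face G opl b m n (Suc q0) i z = (fst z \<otimes>\<^bsub>G n\<^esub> opl (r + m) (Suc q0) \<one>\<^bsub>G (r + m)\<^esub> ?c,
      l_coset (G (r + m + 1)) ?y2 (stab G opl m (r + m + 1)))"
    using face_eq[OF n yc zy] .
  have cr: "opl r (Suc q0) \<one>\<^bsub>G r\<^esub> ?c \<in> carrier (G (r + Suc q0))" using c by (simp add: opl_closed_eq G_one_closed)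
  have "fst z \<otimes>\<^bsub>G n\<^esub> opl (r + m) (Suc q0) \<one>\<^bsub>G (r + m)\<^esub> ?c \<otimes>\<^bsub>G n\<^esub>
      opl (r + m + 1) q0 ?y2 \<one>\<^bsub>G q0\<^esub> \<otimes>\<^bsub>G n\<^esub> shift_braid n m q0
    = fst z \<otimes>\<^bsub>G n\<^esub> opl (r + m) (Suc q0) y \<one>\<^bsub>G (Suc q0)\<^esub> \<otimes>\<^bsub>G n\<^esub> shift_braid n m (Suc q0)
      \<otimes>\<^bsub>G n\<^esub> opl (r + Suc q0) m (opl r (Suc q0) \<one>\<^bsub>G r\<^esub> ?c) \<one>\<^bsub>G m\<^esub>"
    using face_shift_braid_eq[OF n refl g yc c] shift_braid_eq[OF n] shift_braid_eq[of n "r+1" m q0] n by simp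
  also have "\<dots> = s \<otimes>\<^bsub>G n\<^esub> opl (r + Suc q0) m (u \<otimes>\<^bsub>G (r + Suc q0)\<^esub> opl r (Suc q0) \<one>\<^bsub>G r\<^esub> ?c) \<one>\<^bsub>G m\<^esub>"
    unfolding e using n s u cr by (simp add: G_m_assoc stab_emb_closed stab_emb_mult_eq del: add_Suc_right)
  finally have eq: "fst z \<otimes>\<^bsub>G n\<^esub> opl (r + m) (Suc q0) \<one>\<^bsub>G (r + m)\<^esub> ?c \<otimes>\<^bsub>G n\<^esub>
      opl (r + m + 1) q0 ?y2 \<one>\<^bsub>G q0\<^esub> \<otimes>\<^bsub>G n\<^esub> shift_braid n m q0
      = s \<otimes>\<^bsub>G n\<^esub> opl (r + Suc q0) m (u \<otimes>\<^bsub>G (r + Suc q0)\<^esub> opl r (Suc q0) \<one>\<^bsub>G r\<^esub> ?c) \<one>\<^bsub>G m\<^esub>" .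
  have n2: "n = (r + 1) + m + q0" using n by simp
  show ?thesis unfolding summand_coord_iff[OF n2] fz fst_conv snd_conv
    using eq y2m u cr by (auto intro!: G_m_closed)
qed

lemma face_in_Cbasis: "n = r + m + Suc q0 \<Longrightarrow> z \<in> Cbasis G opl m n (Suc q0) \<Longrightarrow> i < Suc q0 \<Longrightarrow>
  face G opl b m n (Suc q0) i z \<in> Cbasis G opl m n q0"
proof -
  assume n: "n = r + m + Suc q0" and z: "z \<in> Cbasis G opl m n (Suc q0)" and i: "i < Suc q0"
  obtain a where a: "a \<in> carrier (G (r + m))" "snd z = l_coset (G (r + m)) a ((\<lambda>h. opl r m h \<one>\<^bsub>G m\<^esub>) ` carrier (G r))"
    and g: "fst z \<in> carrier (G n)" using Cbasis_mem_split[OF n z] by blast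
  have st: "stab G opl m (r + m) = (\<lambda>h. opl r m h \<one>\<^bsub>G m\<^esub>) ` carrier (G r)" by (simp add: stab_eq)
  let ?c = "opl (1 + i) (q0 - i) (b 1 i) \<one>\<^bsub>G (q0 - i)\<^esub>"
  have c: "?c \<in> carrier (G (Suc q0))" using face_braid_closed[OF i] .
  let ?y2 = "opl (r + m) 1 a \<one>\<^bsub>G 1\<^esub> \<otimes>\<^bsub>G (r + m + 1)\<^esub> opl r (m + 1) \<one>\<^bsub>G r\<^esub> (inv\<^bsub>G (m + 1)\<^esub> b m 1)"
  have y2c: "?y2 \<in> carrier (G (r + m + 1))" using a braid_closed[of m 1] by (auto intro!: G_m_closed opl_closed_eq G_one_closed G_inv_closed)
  have nq: "n - q0 = r + m + 1" using n by simp
  have fz: "face G opl b m n (Suc q0) i z = (fst z \<otimes>\<^bsub>G n\<^esub> opl (r + m) (Suc q0) \<one>\<^bsub>G (r + m)\<^esub> ?c,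
      l_coset (G (r + m + 1)) ?y2 (stab G opl m (r + m + 1)))"
    using face_eq[OF n a(1)] a(2) st by simp
  have f1: "fst z \<otimes>\<^bsub>G n\<^esub> opl (r + m) (Suc q0) \<one>\<^bsub>G (r + m)\<^esub> ?c \<in> carrier (G n)" using n g c by (auto intro!: G_m_closed opl_closed_eq G_one_closed)
  have f2: "l_coset (G (r + m + 1)) ?y2 (stab G opl m (r + m + 1)) \<in> UG_Hom G opl m (n - q0)"
    unfolding nq UG_Hom_def UG_coset_def using y2c by auto
  show ?thesis unfolding fz Cbasis_def using f1 f2 n by auto
qed

lemma in_summand_face: "n = r + m + Suc q0 \<Longrightarrow> z \<in> Cbasis G opl m n (Suc q0) \<Longrightarrow> i < Suc q0 \<Longrightarrow>
  in_summand n m q0 s (face G opl b m n (Suc q0) i z) \<longleftrightarrow> in_summand n m (Suc q0) s z"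
proof -
  assume n: "n = r + m + Suc q0" and z: "z \<in> Cbasis G opl m n (Suc q0)" and i: "i < Suc q0"
  obtain a where a: "a \<in> carrier (G (r + m))" "snd z = l_coset (G (r + m)) a ((\<lambda>h. opl r m h \<one>\<^bsub>G m\<^esub>) ` carrier (G r))"
    and g: "fst z \<in> carrier (G n)" using Cbasis_mem_split[OF n z] by blast
  have ay: "a \<in> snd z" using a l_coset_stab_self[of "r+m" r m a] by simp
  let ?t = "fst z \<otimes>\<^bsub>G n\<^esub> opl (r + m) (Suc q0) a \<one>\<^bsub>G (Suc q0)\<^esub> \<otimes>\<^bsub>G n\<^esub> shift_braid n m (Suc q0)"
  have tc: "?t \<in> carrier (G n)" using n g a shift_braid_closed[OF n] by (simp add: G_m_closed opl_closed_eq G_one_closed)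
  have te: "?t = ?t \<otimes>\<^bsub>G n\<^esub> opl (r + Suc q0) m \<one>\<^bsub>G (r + Suc q0)\<^esub> \<one>\<^bsub>G m\<^esub>" using n tc by (simp add: opl_one_eq[of n] G_r_one)
  have "summand_coord n m (Suc q0) ?t z \<one>\<^bsub>G (r + Suc q0)\<^esub>" unfolding summand_coord_iff[OF n] using ay G_one_closed te by blast
  then have t1: "in_summand n m (Suc q0) ?t z" unfolding in_summand_def using tc by blast
  have "summand_coord n m q0 ?t (face G opl b m n (Suc q0) i z) (\<one>\<^bsub>G (r + Suc q0)\<^esub> \<otimes>\<^bsub>G (r + Suc q0)\<^esub> opl r (Suc q0) \<one>\<^bsub>G r\<^esub> (opl (1 + i) (q0 - i) (b 1 i) \<one>\<^bsub>G (q0 - i)\<^esub>))"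
    using summand_coord_face[OF n z tc ay G_one_closed i] te by simp
  then have t2: "in_summand n m q0 ?t (face G opl b m n (Suc q0) i z)" unfolding in_summand_def using tc by blast
  have n2: "n = (r + 1) + m + q0" using n by simp
  have fi: "face G opl b m n (Suc q0) i z \<in> Cbasis G opl m n q0" using face_in_Cbasis[OF n z i] .
  show ?thesis using in_summand_iff_coset[OF n z t1, of s] in_summand_iff_coset[OF n2 fi t2, of s] by simp
qed

lemma face_Hom0:
  assumes u: "u \<in> carrier (G (r + Suc q0))"
  shows "face G opl b 0 (r + Suc q0) (Suc q0) i (u, carrier (G r))
    = (u \<otimes>\<^bsub>G (r + Suc q0)\<^esub> opl r (Suc q0) \<one>\<^bsub>G r\<^esub> (opl (1 + i) (q0 - i) (b 1 i) \<one>\<^bsub>G (q0 - i)\<^esub>),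
       carrier (G (r + 1)))"
proof -
  let ?c = "opl (1 + i) (q0 - i) (b 1 i) \<one>\<^bsub>G (q0 - i)\<^esub>"
  have cr: "carrier (G r) = l_coset (G (r + 0)) \<one>\<^bsub>G (r + 0)\<^esub> (stab G opl 0 (r + 0))"
    unfolding stab_0 by (simp add: l_coset_carrier G_one_closed)
  have "face G opl b 0 (r + Suc q0) (Suc q0) i (u, carrier (G r)) =
    (u \<otimes>\<^bsub>G (r + Suc q0)\<^esub> opl (r + 0) (Suc q0) \<one>\<^bsub>G (r + 0)\<^esub> ?c,
     l_coset (G (r + 0 + 1)) (opl (r + 0) 1 \<one>\<^bsub>G (r + 0)\<^esub> \<one>\<^bsub>G 1\<^esub> \<otimes>\<^bsub>G (r + 0 + 1)\<^esub>
       opl r (0 + 1) \<one>\<^bsub>G r\<^esub> (inv\<^bsub>G (0 + 1)\<^esub> b 0 1)) (stab G opl 0 (r + 0 + 1)))"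
    using face_eq[where n = "r + Suc q0" and r = r and m = 0 and y = "\<one>\<^bsub>G (r + 0)\<^esub>"
        and z = "(u, carrier (G r))" and i = i] cr[symmetric] by (simp add: G_one_closed)
  also have "\<dots> = (u \<otimes>\<^bsub>G (r + Suc q0)\<^esub> opl r (Suc q0) \<one>\<^bsub>G r\<^esub> ?c, carrier (G (r + 1)))"
    unfolding stab_0 using braid_closed[of 0 1]
    by (simp add: l_coset_carrier G_m_closed opl_closed_eq G_one_closed G_inv_closed)
  finally show ?thesis .
qed

lemma summand_proj_face_Crel:
  fixes R :: "'r::comm_ring_1 itself"
  assumes n: "n = r + m + Suc q0" and z: "z \<in> Cbasis G opl m n (Suc q0)" and s: "s \<in> carrier (G n)"
    and zs: "in_summand n m (Suc q0) s z" and i: "i < Suc q0"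
  shows "(\<lambda>y. summand_proj n m q0 s (face G opl b m n (Suc q0) i z) y
      - delta (face G opl b 0 (n - m) (Suc q0) i (some_summand_coord n m (Suc q0) s z, carrier (G r))) y :: 'r)
    \<in> Crel R G opl 0 (n - m) q0"
proof -
  let ?u = "some_summand_coord n m (Suc q0) s z"
  obtain y where y: "y \<in> snd z" "fst z \<otimes>\<^bsub>G n\<^esub> opl (r + m) (Suc q0) y \<one>\<^bsub>G (Suc q0)\<^esub> \<otimes>\<^bsub>G n\<^esub> shift_braid n m (Suc q0) = s \<otimes>\<^bsub>G n\<^esub> opl (r + Suc q0) m ?u \<one>\<^bsub>G m\<^esub>"
    and u: "?u \<in> carrier (G (r + Suc q0))" using some_summand_coord_prop[OF zs] unfolding summand_coord_iff[OF n] by blast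
  have n2: "n = (r + 1) + m + q0" using n by simp
  let ?c = "opl (1 + i) (q0 - i) (b 1 i) \<one>\<^bsub>G (q0 - i)\<^esub>"
  let ?u' = "?u \<otimes>\<^bsub>G (r + Suc q0)\<^esub> opl r (Suc q0) \<one>\<^bsub>G r\<^esub> ?c"
  let ?fz = "face G opl b m n (Suc q0) i z"
  have c: "?c \<in> carrier (G (Suc q0))" using face_braid_closed[OF i] .
  have u'c: "?u' \<in> carrier (G (r + Suc q0))" using u c by (auto intro!: G_m_closed opl_closed_eq G_one_closed)
  have W': "summand_coord n m q0 s ?fz ?u'" using summand_coord_face[OF n z s y(1) u i y(2)] .
  have iC: "in_summand n m q0 s ?fz" unfolding in_summand_def using s W' by blast
  have fi: "?fz \<in> Cbasis G opl m n q0" using face_in_Cbasis[OF n z i] .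
  obtain w where w: "w \<in> carrier (G (r + 1))" "some_summand_coord n m q0 s ?fz = ?u' \<otimes>\<^bsub>G (r + 1 + q0)\<^esub> opl (r + 1) q0 w \<one>\<^bsub>G q0\<^esub>"
    using summand_coord_unique[OF n2 fi s some_summand_coord_prop[OF iC] W'] by blast
  have PBf: "(summand_proj n m q0 s ?fz :: _ \<Rightarrow> 'r) = delta (?u' \<otimes>\<^bsub>G (r + 1 + q0)\<^esub> opl (r + 1) q0 w \<one>\<^bsub>G q0\<^esub>, carrier (G (r + 1)))"
    unfolding summand_proj_def using iC w(2) n by simp
  have f0: "face G opl b 0 (n - m) (Suc q0) i (?u, carrier (G r)) = (?u', carrier (G (r + 1)))"
    using face_Hom0[OF u] n by simp
  have "(\<lambda>y. delta (?u' \<otimes>\<^bsub>G (n - m)\<^esub> opl (n - m - q0) q0 w \<one>\<^bsub>G q0\<^esub>, carrier (G (n - m - q0))) y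
     - delta (?u', carrier (G (n - m - q0))) y :: 'r) \<in> Crel R G opl 0 (n - m) q0"
    using n u'c w(1) by (intro Crel_generator_Hom0) auto
  moreover have "n - m - q0 = r + 1" "n - m = r + 1 + q0" "r + Suc q0 = r + 1 + q0" using n by auto
  ultimately show ?thesis unfolding PBf f0 by simp
qed

lemma summand_proj_dbasis: "n = r + m + Suc q0 \<Longrightarrow> z \<in> Cbasis G opl m n (Suc q0) \<Longrightarrow> s \<in> carrier (G n) \<Longrightarrow>
  (\<lambda>y. lin_ext (summand_proj n m q0 s) (dbasis R G opl b m n (Suc q0) z) y
     - lin_ext (dbasis R G opl b 0 (n - m) (Suc q0)) (summand_proj n m (Suc q0) s z) y :: 'r::comm_ring_1)
   \<in> Crel R G opl 0 (n - m) q0"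
proof (cases "in_summand n m (Suc q0) s z")
  case False
  assume n: "n = r + m + Suc q0" and z: "z \<in> Cbasis G opl m n (Suc q0)" and s: "s \<in> carrier (G n)"
  have "\<And>i. i < Suc q0 \<Longrightarrow> (summand_proj n m q0 s (face G opl b m n (Suc q0) i z) :: _ \<Rightarrow> 'r) = (\<lambda>_. 0)"
    unfolding summand_proj_def using in_summand_face[OF n z] False by simp
  then have "(\<lambda>y. lin_ext (summand_proj n m q0 s) (dbasis R G opl b m n (Suc q0) z) y
     - lin_ext (dbasis R G opl b 0 (n - m) (Suc q0)) (summand_proj n m (Suc q0) s z) y :: 'r) = (\<lambda>_. 0)"
    unfolding lin_ext_dbasis using False unfolding summand_proj_def[of n m "Suc q0"] by (simp add: lin_ext_zero)
  then show ?thesis unfolding Crel_def by (simp add: lin_span_zero)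
next
  case True
  assume n: "n = r + m + Suc q0" and z: "z \<in> Cbasis G opl m n (Suc q0)" and s: "s \<in> carrier (G n)"
  let ?u = "some_summand_coord n m (Suc q0) s z"
  have nm: "n - m - Suc q0 = r" "n - m = r + 0 + Suc q0" using n by auto
  have PBz: "(summand_proj n m (Suc q0) s z :: _ \<Rightarrow> 'r) = delta (?u, carrier (G r))"
    unfolding summand_proj_def using True nm by simp
  have per: "\<And>i. i < Suc q0 \<Longrightarrow> (\<lambda>y. summand_proj n m q0 s (face G opl b m n (Suc q0) i z) y
      - delta (face G opl b 0 (n - m) (Suc q0) i (?u, carrier (G r))) y :: 'r) \<in> Crel R G opl 0 (n - m) q0"
    using summand_proj_face_Crel[OF n z s True] .
  have "(\<lambda>y. lin_ext (summand_proj n m q0 s) (dbasis R G opl b m n (Suc q0) z) y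
     - lin_ext (dbasis R G opl b 0 (n - m) (Suc q0)) (summand_proj n m (Suc q0) s z) y :: 'r)
   = (\<lambda>y. \<Sum>i<Suc q0. (- 1) ^ i * (\<lambda>y. summand_proj n m q0 s (face G opl b m n (Suc q0) i z) y
      - delta (face G opl b 0 (n - m) (Suc q0) i (?u, carrier (G r))) y) y)"
    unfolding PBz lin_ext_delta lin_ext_dbasis unfolding dbasis_def lincomb_diff by simp
  also have "\<dots> \<in> Crel R G opl 0 (n - m) q0"
    unfolding Crel_def using per[unfolded Crel_def] by (intro lin_span_lincomb) auto
  finally show ?thesis .
qed

lemma summand_incl_face_Crel:
  fixes R :: "'r::comm_ring_1 itself"
  assumes n: "n = r + m + Suc q0" and s: "s \<in> carrier (G n)"
    and z': "z' \<in> Cbasis G opl 0 (n - m) (Suc q0)" and i: "i < Suc q0"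
  shows "(\<lambda>y. delta (face G opl b m n (Suc q0) i
        (s \<otimes>\<^bsub>G n\<^esub> opl (r + Suc q0) m (fst z') \<one>\<^bsub>G m\<^esub> \<otimes>\<^bsub>G n\<^esub> inv\<^bsub>G n\<^esub> shift_braid n m (Suc q0),
         stab G opl m (r + m))) y
      - summand_incl n m q0 s (face G opl b 0 (n - m) (Suc q0) i z') y :: 'r) \<in> Crel R G opl m n q0"
proof -
  have nm: "n - m = r + Suc q0" "n - Suc q0 = r + m" "n - q0 = r + m + 1" "n - m - Suc q0 = r" using n by auto
  have g': "fst z' \<in> carrier (G (r + Suc q0))" using z' unfolding Cbasis_def nm by (auto split: if_splits)
  have bq: "shift_braid n m (Suc q0) \<in> carrier (G n)" using shift_braid_closed[OF n] .
  have ibq: "inv\<^bsub>G n\<^esub> shift_braid n m (Suc q0) \<in> carrier (G n)" using bq by (rule G_inv_closed)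
  have bq0: "shift_braid n m q0 \<in> carrier (G n)" using shift_braid_closed[of n "r+1" m q0] n by simp
  let ?A0 = "s \<otimes>\<^bsub>G n\<^esub> opl (r + Suc q0) m (fst z') \<one>\<^bsub>G m\<^esub> \<otimes>\<^bsub>G n\<^esub> inv\<^bsub>G n\<^esub> shift_braid n m (Suc q0)"
  have A0: "?A0 \<in> carrier (G n)" using n s g' ibq by (simp add: G_m_closed stab_emb_closed)
  let ?w = "(?A0, stab G opl m (r + m))"
  have sw: "snd ?w = l_coset (G (r + m)) \<one>\<^bsub>G (r + m)\<^esub> (stab G opl m (r + m))"
    using l_coset_one[OF stab_subset[of "r+m" r m]] by simp
  let ?g1 = "opl (r + m) 1 \<one>\<^bsub>G (r + m)\<^esub> \<one>\<^bsub>G 1\<^esub> \<otimes>\<^bsub>G (r + m + 1)\<^esub> opl r (m + 1) \<one>\<^bsub>G r\<^esub> (inv\<^bsub>G (m + 1)\<^esub> b m 1)"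
  have g1c: "?g1 \<in> carrier (G (r + m + 1))" using braid_closed[of m 1] by (auto intro!: G_m_closed opl_closed_eq G_one_closed G_inv_closed)
  let ?c = "opl (1 + i) (q0 - i) (b 1 i) \<one>\<^bsub>G (q0 - i)\<^esub>"
  have c: "?c \<in> carrier (G (Suc q0))" using face_braid_closed[OF i] .
  let ?Ai = "?A0 \<otimes>\<^bsub>G n\<^esub> opl (r + m) (Suc q0) \<one>\<^bsub>G (r + m)\<^esub> ?c"
  have Ai: "?Ai \<in> carrier (G n)" using n A0 c by (auto intro!: G_m_closed opl_closed_eq G_one_closed)
  have fw: "face G opl b m n (Suc q0) i ?w = (?Ai, l_coset (G (r + m + 1)) ?g1 (stab G opl m (r + m + 1)))"
    using face_eq[OF n G_one_closed sw, of i] by simp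
  have f0: "fst (face G opl b 0 (r + Suc q0) (Suc q0) i z') = fst z' \<otimes>\<^bsub>G (r + Suc q0)\<^esub> opl r (Suc q0) \<one>\<^bsub>G r\<^esub> ?c"
    unfolding face_def by simp
  have cr: "opl r (Suc q0) \<one>\<^bsub>G r\<^esub> ?c \<in> carrier (G (r + Suc q0))" using c by (simp add: opl_closed_eq G_one_closed)
  have "?Ai \<otimes>\<^bsub>G n\<^esub> opl (r + m + 1) q0 ?g1 \<one>\<^bsub>G q0\<^esub> \<otimes>\<^bsub>G n\<^esub> shift_braid n m q0
    = ?A0 \<otimes>\<^bsub>G n\<^esub> opl (r + m) (Suc q0) \<one>\<^bsub>G (r + m)\<^esub> \<one>\<^bsub>G (Suc q0)\<^esub> \<otimes>\<^bsub>G n\<^esub> shift_braid n m (Suc q0)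
    \<otimes>\<^bsub>G n\<^esub> opl (r + Suc q0) m (opl r (Suc q0) \<one>\<^bsub>G r\<^esub> ?c) \<one>\<^bsub>G m\<^esub>"
    using face_shift_braid_eq[OF n refl A0 G_one_closed[of "r+m"] c] shift_braid_eq[OF n] shift_braid_eq[of n "r+1" m q0] n by simp
  also have "\<dots> = s \<otimes>\<^bsub>G n\<^esub> opl (r + Suc q0) m (fst z' \<otimes>\<^bsub>G (r + Suc q0)\<^esub> opl r (Suc q0) \<one>\<^bsub>G r\<^esub> ?c) \<one>\<^bsub>G m\<^esub>"
  proof -
    have o: "opl (r + m) (Suc q0) \<one>\<^bsub>G (r + m)\<^esub> \<one>\<^bsub>G (Suc q0)\<^esub> = \<one>\<^bsub>G n\<^esub>" using n by (simp add: opl_one_eq)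
    have "?A0 \<otimes>\<^bsub>G n\<^esub> \<one>\<^bsub>G n\<^esub> \<otimes>\<^bsub>G n\<^esub> shift_braid n m (Suc q0) = s \<otimes>\<^bsub>G n\<^esub> opl (r + Suc q0) m (fst z') \<one>\<^bsub>G m\<^esub>"
      using n s g' bq ibq by (simp add: G_r_one G_m_assoc G_m_closed stab_emb_closed G_l_inv G_r_one)
    then show ?thesis unfolding o using n s g' cr by (simp add: G_m_assoc G_m_closed stab_emb_closed stab_emb_mult_eq del: add_Suc_right)
  qed
  finally have e: "?Ai \<otimes>\<^bsub>G n\<^esub> opl (r + m + 1) q0 ?g1 \<one>\<^bsub>G q0\<^esub>
     = s \<otimes>\<^bsub>G n\<^esub> opl (r + Suc q0) m (fst z' \<otimes>\<^bsub>G (r + Suc q0)\<^esub> opl r (Suc q0) \<one>\<^bsub>G r\<^esub> ?c) \<one>\<^bsub>G m\<^esub> \<otimes>\<^bsub>G n\<^esub> inv\<^bsub>G n\<^esub> shift_braid n m q0"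
  proof -
    assume h: "?Ai \<otimes>\<^bsub>G n\<^esub> opl (r + m + 1) q0 ?g1 \<one>\<^bsub>G q0\<^esub> \<otimes>\<^bsub>G n\<^esub> shift_braid n m q0
      = s \<otimes>\<^bsub>G n\<^esub> opl (r + Suc q0) m (fst z' \<otimes>\<^bsub>G (r + Suc q0)\<^esub> opl r (Suc q0) \<one>\<^bsub>G r\<^esub> ?c) \<one>\<^bsub>G m\<^esub>"
    have x: "?Ai \<otimes>\<^bsub>G n\<^esub> opl (r + m + 1) q0 ?g1 \<one>\<^bsub>G q0\<^esub> \<in> carrier (G n)" using n Ai g1c by (auto intro!: G_m_closed opl_closed_eq G_one_closed)
    show ?thesis unfolding h[symmetric] using x bq0 by (simp add: G_m_assoc G_r_inv G_r_one G_inv_closed)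
  qed
  have "(\<lambda>y. delta (?Ai \<otimes>\<^bsub>G n\<^esub> opl (n - q0) q0 ?g1 \<one>\<^bsub>G q0\<^esub>, l_coset (G (n - q0)) \<one>\<^bsub>G (n - q0)\<^esub> (stab G opl m (n - q0))) y
     - delta (?Ai, l_coset (G (n - q0)) (?g1 \<otimes>\<^bsub>G (n - q0)\<^esub> \<one>\<^bsub>G (n - q0)\<^esub>) (stab G opl m (n - q0))) y :: 'r) \<in> Crel R G opl m n q0"
    using n Ai g1c G_one_closed by (intro Crel_generator) auto
  moreover have "l_coset (G (r + m + 1)) \<one>\<^bsub>G (r + m + 1)\<^esub> (stab G opl m (r + m + 1)) = stab G opl m (r + m + 1)"
    by (rule l_coset_one, rule stab_subset[of _ "r+1"]) simp
  ultimately have "(\<lambda>y. delta (s \<otimes>\<^bsub>G n\<^esub> opl (r + Suc q0) m (fst z' \<otimes>\<^bsub>G (r + Suc q0)\<^esub> opl r (Suc q0) \<one>\<^bsub>G r\<^esub> ?c) \<one>\<^bsub>G m\<^esub> \<otimes>\<^bsub>G n\<^esub> inv\<^bsub>G n\<^esub> shift_braid n m q0, stab G opl m (r + m + 1)) y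
     - delta (?Ai, l_coset (G (r + m + 1)) ?g1 (stab G opl m (r + m + 1))) y :: 'r) \<in> Crel R G opl m n q0"
    unfolding nm e using g1c by (simp add: G_r_one)
  then show ?thesis unfolding fw summand_incl_def nm f0 Crel_def by (rule lin_span_diff_swap)
qed

lemma summand_incl_dbasis: "n = r + m + Suc q0 \<Longrightarrow> s \<in> carrier (G n) \<Longrightarrow> z' \<in> Cbasis G opl 0 (n - m) (Suc q0) \<Longrightarrow>
  (\<lambda>y. lin_ext (dbasis R G opl b m n (Suc q0)) (summand_incl n m (Suc q0) s z') y
     - lin_ext (summand_incl n m q0 s) (dbasis R G opl b 0 (n - m) (Suc q0) z') y :: 'r::comm_ring_1)
   \<in> Crel R G opl m n q0"
proof -
  assume n: "n = r + m + Suc q0" and s: "s \<in> carrier (G n)" and z': "z' \<in> Cbasis G opl 0 (n - m) (Suc q0)"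
  have nm: "n - m = r + Suc q0" "n - Suc q0 = r + m" using n by auto
  let ?w = "(s \<otimes>\<^bsub>G n\<^esub> opl (r + Suc q0) m (fst z') \<one>\<^bsub>G m\<^esub> \<otimes>\<^bsub>G n\<^esub> inv\<^bsub>G n\<^esub> shift_braid n m (Suc q0),
    stab G opl m (r + m))"
  have TBz: "(summand_incl n m (Suc q0) s z' :: _ \<Rightarrow> 'r) = delta ?w" unfolding summand_incl_def nm ..
  have per: "\<And>i. i < Suc q0 \<Longrightarrow> (\<lambda>y. delta (face G opl b m n (Suc q0) i ?w) y
      - summand_incl n m q0 s (face G opl b 0 (n - m) (Suc q0) i z') y :: 'r) \<in> Crel R G opl m n q0"
    using summand_incl_face_Crel[OF n s z'] .
  have "(\<lambda>y. lin_ext (dbasis R G opl b m n (Suc q0)) (summand_incl n m (Suc q0) s z') y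
     - lin_ext (summand_incl n m q0 s) (dbasis R G opl b 0 (n - m) (Suc q0) z') y :: 'r)
    = (\<lambda>y. \<Sum>i<Suc q0. (- 1) ^ i * (\<lambda>y. delta (face G opl b m n (Suc q0) i ?w) y
      - summand_incl n m q0 s (face G opl b 0 (n - m) (Suc q0) i z') y) y)"
    unfolding TBz lin_ext_delta lin_ext_dbasis unfolding dbasis_def lincomb_diff by simp
  also have "\<dots> \<in> Crel R G opl m n q0"
    unfolding Crel_def using per[unfolded Crel_def] by (intro lin_span_lincomb) auto
  finally show ?thesis .
qed

lemma fin_supp_summand_proj: "fin_supp (summand_proj n m q s z :: _ \<Rightarrow> 'r::comm_ring_1)"
  unfolding summand_proj_def by (auto simp: fin_supp_delta)

lemma fin_supp_summand_incl: "fin_supp (summand_incl n m q s z :: _ \<Rightarrow> 'r::comm_ring_1)"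
  unfolding summand_incl_def by (auto simp: fin_supp_delta)

lemma summand_proj_in_chains: "n = r + m + q \<Longrightarrow> z \<in> Cbasis G opl m n q \<Longrightarrow> (summand_proj n m q s z :: _ \<Rightarrow> 'r::comm_ring_1) \<in> chains (Cbasis G opl 0 (n - m) q)"
proof (cases "in_summand n m q s z")
  case True
  assume n: "n = r + m + q"
  have "some_summand_coord n m q s z \<in> carrier (G (n - m))" using some_summand_coord_prop[OF True] unfolding summand_coord_def by blast
  then have "(some_summand_coord n m q s z, carrier (G (n - m - q))) \<in> Cbasis G opl 0 (n - m) q"
    unfolding Cbasis_def UG_Hom_0 using n by auto
  then show ?thesis unfolding summand_proj_def using True by (simp add: delta_in_chains)
next
  case False then show ?thesis unfolding summand_proj_def by (simp add: zero_in_chains)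
qed

lemma summand_incl_in_chains: "n = r + m + q \<Longrightarrow> s \<in> carrier (G n) \<Longrightarrow> z' \<in> Cbasis G opl 0 (n - m) q \<Longrightarrow>
  (summand_incl n m q s z' :: _ \<Rightarrow> 'r::comm_ring_1) \<in> chains (Cbasis G opl m n q)"
proof -
  assume n: "n = r + m + q" and s: "s \<in> carrier (G n)" and z': "z' \<in> Cbasis G opl 0 (n - m) q"
  have g': "fst z' \<in> carrier (G (n - m))" using z' unfolding Cbasis_def by (auto split: if_splits)
  have nm: "n - m = r + q" "n - q = r + m" using n by auto
  have a: "s \<otimes>\<^bsub>G n\<^esub> opl (n - m) m (fst z') \<one>\<^bsub>G m\<^esub> \<otimes>\<^bsub>G n\<^esub> inv\<^bsub>G n\<^esub> shift_braid n m q \<in> carrier (G n)"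
    using n s g' shift_braid_closed[OF n] unfolding nm by (simp add: G_m_closed stab_emb_closed G_inv_closed)
  have "stab G opl m (n - q) = l_coset (G (n - q)) \<one>\<^bsub>G (n - q)\<^esub> (stab G opl m (n - q))"
    unfolding nm by (rule l_coset_one[symmetric], rule stab_subset[of _ r]) simp
  then have "stab G opl m (n - q) \<in> UG_Hom G opl m (n - q)"
    unfolding UG_Hom_def UG_coset_def using n G_one_closed by auto
  then show ?thesis unfolding summand_incl_def Cbasis_def using a n by (auto intro!: delta_in_chains)
qed

lemma summand_proj_Crel:
  "n = r + m + q \<Longrightarrow> x \<in> Crel R G opl m n q \<Longrightarrow> lin_ext (summand_proj n m q s) x \<in> Crel R G opl 0 (n - m) q"
  by (rule lin_ext_Crel) (rule summand_proj_Crel_generator)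

lemma summand_incl_Crel:
  "n = r + m + q \<Longrightarrow> s \<in> carrier (G n) \<Longrightarrow> x \<in> Crel R G opl 0 (n - m) q \<Longrightarrow>
   lin_ext (summand_incl n m q s) x \<in> Crel R G opl m n q"
  by (rule lin_ext_Crel) (rule summand_incl_Crel_generator)

lemma summand_proj_cycle: "n = r + m + Suc q0 \<Longrightarrow> f \<in> chains (Cbasis G opl m n (Suc q0)) \<Longrightarrow> s \<in> carrier (G n) \<Longrightarrow>
  dchain R G opl b m n (Suc q0) f \<in> Crel R G opl m n q0 \<Longrightarrow>
  dchain R G opl b 0 (n - m) (Suc q0) (lin_ext (summand_proj n m (Suc q0) s) f) \<in> (Crel R G opl 0 (n - m) q0 :: (_ \<Rightarrow> 'r::comm_ring_1) set)"
proof -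
  assume n: "n = r + m + Suc q0" and f: "f \<in> chains (Cbasis G opl m n (Suc q0))" and s: "s \<in> carrier (G n)"
    and cyc: "dchain R G opl b m n (Suc q0) f \<in> Crel R G opl m n q0"
  have n2: "n = (r + 1) + m + q0" using n by simp
  have ff: "fin_supp f" using chains_fin_supp[OF f] .
  let ?X = "lin_ext (summand_proj n m q0 s) (dchain R G opl b m n (Suc q0) f) :: _ \<Rightarrow> 'r"
  have X: "?X \<in> Crel R G opl 0 (n - m) q0" using summand_proj_Crel[OF n2 cyc] .
  have "(\<lambda>y. ?X y - dchain R G opl b 0 (n - m) (Suc q0) (lin_ext (summand_proj n m (Suc q0) s) f) y)
     = lin_ext (\<lambda>z y. lin_ext (summand_proj n m q0 s) (dbasis R G opl b m n (Suc q0) z) y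
             - lin_ext (dbasis R G opl b 0 (n - m) (Suc q0)) (summand_proj n m (Suc q0) s z) y) f"
    unfolding dchain_eq_lin_ext lin_ext_lin_ext[OF ff fin_supp_dbasis[THEN allI]] lin_ext_lin_ext[OF ff fin_supp_summand_proj[THEN allI]] lin_ext_diff_kernel ..
  also have "\<dots> \<in> Crel R G opl 0 (n - m) q0"
  proof (rule lin_ext_in_Crel[OF ff], intro ballI)
    fix z assume "z \<in> {z. f z \<noteq> 0}"
    then have z: "z \<in> Cbasis G opl m n (Suc q0)" using f unfolding chains_def by auto
    show "(\<lambda>y. lin_ext (summand_proj n m q0 s) (dbasis R G opl b m n (Suc q0) z) y
             - lin_ext (dbasis R G opl b 0 (n - m) (Suc q0)) (summand_proj n m (Suc q0) s z) y :: 'r) \<in> Crel R G opl 0 (n - m) q0"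
      using summand_proj_dbasis[OF n z s] .
  qed
  finally have D: "(\<lambda>y. ?X y - dchain R G opl b 0 (n - m) (Suc q0) (lin_ext (summand_proj n m (Suc q0) s) f) y) \<in> Crel R G opl 0 (n - m) q0" .
  have "(\<lambda>y. ?X y - (?X y - dchain R G opl b 0 (n - m) (Suc q0) (lin_ext (summand_proj n m (Suc q0) s) f) y)) \<in> Crel R G opl 0 (n - m) q0"
    using lin_span_diff[OF X[unfolded Crel_def] D[unfolded Crel_def]] unfolding Crel_def .
  then show ?thesis by simp
qed

lemma summand_incl_dchain: "n = r + m + q \<Longrightarrow> s \<in> carrier (G n) \<Longrightarrow> c' \<in> chains (Cbasis G opl 0 (n - m) (Suc q)) \<Longrightarrow>
  (\<lambda>y. dchain R G opl b m n (Suc q) (lin_ext (summand_incl n m (Suc q) s) c') y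
     - lin_ext (summand_incl n m q s) (dchain R G opl b 0 (n - m) (Suc q) c') y) \<in> (Crel R G opl m n q :: (_ \<Rightarrow> 'r::comm_ring_1) set)"
proof (cases r)
  case 0
  assume n: "n = r + m + q" and s: "s \<in> carrier (G n)" and c': "c' \<in> chains (Cbasis G opl 0 (n - m) (Suc q))"
  have "Cbasis G opl 0 (n - m) (Suc q) = {}" using n 0 unfolding Cbasis_def by auto
  then have "c' = (\<lambda>_. 0)" using c' chains_empty by auto
  then show ?thesis unfolding Crel_def dchain_eq_lin_ext by (simp add: lin_ext_zero lin_span_zero)
next
  case (Suc r1)
  assume n0: "n = r + m + q" and s: "s \<in> carrier (G n)" and c': "c' \<in> chains (Cbasis G opl 0 (n - m) (Suc q))"
  have n: "n = r1 + m + Suc q" using n0 Suc by simp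
  have ff: "fin_supp c'" using chains_fin_supp[OF c'] .
  have "(\<lambda>y. dchain R G opl b m n (Suc q) (lin_ext (summand_incl n m (Suc q) s) c') y
     - lin_ext (summand_incl n m q s) (dchain R G opl b 0 (n - m) (Suc q) c') y)
     = lin_ext (\<lambda>z y. lin_ext (dbasis R G opl b m n (Suc q)) (summand_incl n m (Suc q) s z) y
         - lin_ext (summand_incl n m q s) (dbasis R G opl b 0 (n - m) (Suc q) z) y) c'"
    unfolding dchain_eq_lin_ext lin_ext_lin_ext[OF ff fin_supp_dbasis[THEN allI]] lin_ext_lin_ext[OF ff fin_supp_summand_incl[THEN allI]] lin_ext_diff_kernel ..
  also have "\<dots> \<in> Crel R G opl m n q"
  proof (rule lin_ext_in_Crel[OF ff], intro ballI)
    fix z assume "z \<in> {z. c' z \<noteq> 0}"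
    then have z: "z \<in> Cbasis G opl 0 (n - m) (Suc q)" using c' unfolding chains_def by auto
    show "(\<lambda>y. lin_ext (dbasis R G opl b m n (Suc q)) (summand_incl n m (Suc q) s z) y
         - lin_ext (summand_incl n m q s) (dbasis R G opl b 0 (n - m) (Suc q) z) y :: 'r) \<in> Crel R G opl m n q"
      using summand_incl_dbasis[OF n s z] .
  qed
  finally show ?thesis .
qed

lemma summand_proj_other_rep:
  assumes n: "n = r + m + q" and z: "z \<in> Cbasis G opl m n q" and z': "z' \<in> Cbasis G opl m n q"
    and ne: "summand_rep n m q z' \<noteq> summand_rep n m q z"
  shows "summand_proj n m q (summand_rep n m q z') z = (\<lambda>_. 0)"
proof -
  have "\<not> in_summand n m q (summand_rep n m q z') z"
  proof
    assume "in_summand n m q (summand_rep n m q z') z"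
    from summand_rep_eq[OF n z z' this in_summand_rep[OF n z']] ne show False by simp
  qed
  then show ?thesis unfolding summand_proj_def by simp
qed

lemma sum_summand_incl_proj:
  assumes n: "n = r + m + q" and S: "finite S" "S \<subseteq> summand_rep n m q ` Cbasis G opl m n q"
    and z: "z \<in> Cbasis G opl m n q" and zS: "summand_rep n m q z \<in> S"
  shows "(\<lambda>y. \<Sum>s\<in>S. lin_ext (summand_incl n m q s) (summand_proj n m q s z :: _ \<Rightarrow> 'r::comm_ring_1) y)
    = lin_ext (summand_incl n m q (summand_rep n m q z)) (summand_proj n m q (summand_rep n m q z) z)"
proof (rule ext)
  fix y
  let ?s = "summand_rep n m q z"
  have zero: "summand_proj n m q s z = (\<lambda>_. 0)" if s: "s \<in> S - {?s}" for s
  proof -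
    obtain z' where "z' \<in> Cbasis G opl m n q" "s = summand_rep n m q z'" using s S(2) by blast
    then show ?thesis using summand_proj_other_rep[OF n z] s by blast
  qed
  have "(\<Sum>s\<in>S - {?s}. lin_ext (summand_incl n m q s) (summand_proj n m q s z :: _ \<Rightarrow> 'r) y) = 0"
  proof (rule sum.neutral, rule ballI)
    fix s assume "s \<in> S - {?s}"
    then show "lin_ext (summand_incl n m q s) (summand_proj n m q s z :: _ \<Rightarrow> 'r) y = 0"
      by (simp add: zero lin_ext_zero)
  qed
  then show "(\<Sum>s\<in>S. lin_ext (summand_incl n m q s) (summand_proj n m q s z :: _ \<Rightarrow> 'r) y)
    = lin_ext (summand_incl n m q ?s) (summand_proj n m q ?s z) y"
    using sum.remove[OF S(1) zS, of "\<lambda>s. lin_ext (summand_incl n m q s) (summand_proj n m q s z :: _ \<Rightarrow> 'r) y"] by simp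
qed

lemma chain_eq_sum_incl_proj:
  fixes R :: "'r::comm_ring_1 itself"
  assumes n: "n = r + m + q" and f: "f \<in> chains (Cbasis G opl m n q)"
  shows "(\<lambda>y. f y - (\<Sum>s\<in>summand_rep n m q ` {z. f z \<noteq> 0}.
      lin_ext (summand_incl n m q s) (lin_ext (summand_proj n m q s) f) y)) \<in> Crel R G opl m n q"
proof -
  have ff: "fin_supp f" using chains_fin_supp[OF f] .
  have sub: "{z. f z \<noteq> 0} \<subseteq> Cbasis G opl m n q" using f unfolding chains_def by auto
  let ?S = "summand_rep n m q ` {z. f z \<noteq> 0}"
  let ?TP = "\<lambda>z y. \<Sum>s\<in>?S. lin_ext (summand_incl n m q s) (summand_proj n m q s z) y"
  have e1: "\<And>y. lin_ext delta f y = f y" using delta_decomposition[OF ff] unfolding lin_ext_def by metis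
  have e2: "(\<lambda>y. \<Sum>s\<in>?S. lin_ext (summand_incl n m q s) (lin_ext (summand_proj n m q s) f) y) = lin_ext ?TP f"
    unfolding lin_ext_lin_ext[OF ff fin_supp_summand_proj[THEN allI]] lin_ext_sum_kernel ..
  have "(\<lambda>y. f y - (\<Sum>s\<in>?S. lin_ext (summand_incl n m q s) (lin_ext (summand_proj n m q s) f) y))
     = lin_ext (\<lambda>z y. delta z y - ?TP z y) f"
    unfolding lin_ext_diff_kernel[symmetric] by (simp add: e1 e2[symmetric])
  also have "\<dots> \<in> Crel R G opl m n q"
  proof (rule lin_ext_in_Crel[OF ff], intro ballI)
    fix z assume zf: "z \<in> {z. f z \<noteq> 0}"
    then have z: "z \<in> Cbasis G opl m n q" using sub by auto
    have TP: "?TP z y = lin_ext (summand_incl n m q (summand_rep n m q z)) (summand_proj n m q (summand_rep n m q z) z) y" for y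
    proof (rule fun_cong[OF sum_summand_incl_proj[OF n _ _ z]])
      show "finite ?S" using ff by simp
      show "?S \<subseteq> summand_rep n m q ` Cbasis G opl m n q" using sub by (rule image_mono)
      show "summand_rep n m q z \<in> ?S" using zf by simp
    qed
    show "(\<lambda>y. delta z y - ?TP z y) \<in> Crel R G opl m n q"
      using delta_incl_proj_Crel[OF n z in_summand_rep[OF n z]] by (simp only: TP)
  qed
  finally show ?thesis .
qed

lemma summand_proj_rel_cycle:
  assumes n: "n = r + m + q" and f: "f \<in> chains (Cbasis G opl m n q)" and s: "s \<in> carrier (G n)"
    and cyc: "rel_cycle R G opl b m n q f"
  shows "rel_cycle R G opl b 0 (n - m) q (lin_ext (summand_proj n m q s) f)"
proof (cases q)
  case (Suc q0)
  have n': "n = r + m + Suc q0" using n Suc by simp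
  have "dchain R G opl b m n (Suc q0) f \<in> Crel R G opl m n q0"
    using cyc unfolding rel_cycle_def Suc by simp
  from summand_proj_cycle[OF n' f[unfolded Suc] s this] show ?thesis
    unfolding rel_cycle_def Suc by simp
qed (simp add: rel_cycle_def)

lemma summand_incl_lin_ext_in_chains:
  assumes n: "n = r + m + q" and s: "s \<in> carrier (G n)" and c: "c \<in> chains (Cbasis G opl 0 (n - m) (Suc q))"
  shows "lin_ext (summand_incl n m (Suc q) s) c \<in> chains (Cbasis G opl m n (Suc q))"
proof (cases r)
  case 0
  then have "Cbasis G opl 0 (n - m) (Suc q) = {}" using n unfolding Cbasis_def by auto
  then have "c = (\<lambda>_. 0)" using c by (intro chains_empty) simp
  then show ?thesis by (simp add: lin_ext_zero zero_in_chains)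
next
  case (Suc r1)
  then have n': "n = r1 + m + Suc q" using n by simp
  show ?thesis using lin_ext_in_chains[OF c] summand_incl_in_chains[OF n' s] by blast
qed

lemma summand_incl_rel_boundary:
  fixes R :: "'r::comm_ring_1 itself"
  assumes n: "n = r + m + q" and s: "s \<in> carrier (G n)"
    and v: "v \<in> chains (Cbasis G opl 0 (n - m) q)" and bd: "rel_boundary R G opl b 0 (n - m) q v"
  shows "rel_boundary R G opl b m n q (lin_ext (summand_incl n m q s) v)"
proof -
  obtain c where c: "c \<in> chains (Cbasis G opl 0 (n - m) (Suc q))"
    and vc: "(\<lambda>y. v y - dchain R G opl b 0 (n - m) (Suc q) c y) \<in> Crel R G opl 0 (n - m) q"
    using bd unfolding rel_boundary_def by blast
  let ?T = "lin_ext (summand_incl n m q s)"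
  let ?dc = "dchain R G opl b 0 (n - m) (Suc q) c"
  let ?Tc = "lin_ext (summand_incl n m (Suc q) s) c"
  have fin_dc: "fin_supp ?dc"
    unfolding dchain_eq_lin_ext using c by (intro fin_supp_lin_ext) (auto intro: chains_fin_supp fin_supp_dbasis)
  have "(\<lambda>y. ?T v y - ?T ?dc y) \<in> Crel R G opl m n q"
    using summand_incl_Crel[OF n s vc] unfolding lin_ext_diff[OF chains_fin_supp[OF v] fin_dc] .
  moreover have "(\<lambda>y. dchain R G opl b m n (Suc q) ?Tc y - ?T ?dc y) \<in> Crel R G opl m n q"
    using summand_incl_dchain[OF n s c] .
  ultimately have "(\<lambda>y. (?T v y - ?T ?dc y) - (dchain R G opl b m n (Suc q) ?Tc y - ?T ?dc y)) \<in> Crel R G opl m n q"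
    unfolding Crel_def by (rule lin_span_diff)
  then show ?thesis
    unfolding rel_boundary_def using summand_incl_lin_ext_in_chains[OF n s c] by (intro bexI) simp_all
qed

lemma reduced_homology_vanishes_shift:
  fixes R :: "'r::comm_ring_1 itself"
  assumes H: "m \<le> n \<Longrightarrow> reduced_homology_vanishes R G opl b 0 i (n - m)"
  shows "reduced_homology_vanishes R G opl b m i n"
  unfolding reduced_homology_vanishes_iff
proof (intro ballI impI)
  let ?q = "nat (i + 1)"
  fix f :: "_ \<Rightarrow> 'r"
  assume f: "f \<in> chains (Cbasis G opl m n ?q)" and cyc: "rel_cycle R G opl b m n ?q f"
  show "rel_boundary R G opl b m n ?q f"
  proof (cases "m + ?q \<le> n")
    case False
    then have "Cbasis G opl m n ?q = {}" unfolding Cbasis_def UG_Hom_def by auto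
    then show ?thesis using f by (rule rel_boundary_if_Cbasis_empty)
  next
    case True
    then have "n = (n - (m + ?q)) + m + ?q" by simp
    then obtain r where n: "n = r + m + ?q" ..
    let ?S = "summand_rep n m ?q ` {z. f z \<noteq> 0}"
    let ?v = "\<lambda>s. lin_ext (summand_proj n m ?q s) f"
    have S: "finite ?S" using chains_fin_supp[OF f] by simp
    have "{z. f z \<noteq> 0} \<subseteq> Cbasis G opl m n ?q" using f unfolding chains_def by auto
    then have sc: "\<And>s. s \<in> ?S \<Longrightarrow> s \<in> carrier (G n)"
      using in_summand_rep[OF n] unfolding in_summand_def by blast
    have v: "\<And>s. ?v s \<in> chains (Cbasis G opl 0 (n - m) ?q)"
      using f summand_proj_in_chains[OF n] by (intro lin_ext_in_chains) auto
    have H0: "reduced_homology_vanishes R G opl b 0 i (n - m)" using H n by simp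
    have bd0: "rel_boundary R G opl b 0 (n - m) ?q (?v s)" if "s \<in> ?S" for s
      using H0 v[of s] summand_proj_rel_cycle[OF n f sc[OF that] cyc]
      unfolding reduced_homology_vanishes_iff by blast
    have "rel_boundary R G opl b m n ?q (lin_ext (summand_incl n m ?q s) (?v s))" if "s \<in> ?S" for s
      using summand_incl_rel_boundary[OF n sc[OF that] v bd0[OF that]] .
    with S have "rel_boundary R G opl b m n ?q (\<lambda>y. \<Sum>s\<in>?S. lin_ext (summand_incl n m ?q s) (?v s) y)"
      by (rule rel_boundary_sum)
    with chain_eq_sum_incl_proj[OF n f] show ?thesis by (rule rel_boundary_Crel_diff)
  qed
qed

end

theorem proposition5p10:
  fixes R :: "'r::comm_ring_1 itself"
    and G :: "nat \<Rightarrow> 'g monoid"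
    and opl :: "nat \<Rightarrow> nat \<Rightarrow> 'g \<Rightarrow> 'g \<Rightarrow> 'g"
    and b :: "nat \<Rightarrow> nat \<Rightarrow> 'g"
    and N k a :: nat
  assumes "braided_stability_groupoid G opl b"
    and H3: "\<forall>i::int. \<forall>n::nat. -1 \<le> i \<and> i < int N \<and> int n > int k * i + int a
               \<longrightarrow> reduced_homology_vanishes R G opl b 0 i n"
  shows "\<forall>m::nat. \<forall>i::int. \<forall>n::nat. -1 \<le> i \<and> i < int N \<and> int n > int k * i + int a + int m
               \<longrightarrow> reduced_homology_vanishes R G opl b m i n"
proof (intro allI impI)
  fix m :: nat and i :: int and n :: nat
  assume h: "-1 \<le> i \<and> i < int N \<and> int n > int k * i + int a + int m"
  have "reduced_homology_vanishes R G opl b 0 i (n - m)" if "m \<le> n"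
  proof -
    have "int (n - m) > int k * i + int a" using h that by (simp add: of_nat_diff)
    then show ?thesis using H3 h by blast
  qed
  then show "reduced_homology_vanishes R G opl b m i n"
    by (rule braided_stability_groupoid.reduced_homology_vanishes_shift[OF assms(1)])
qed

end
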